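(* Let $X$ be a $T_1$ space. The assignments $\mathcal G\mapsto\hat{\mathcal G}$ and $\mathcal C\mapsto\mathcal C^\star$ give a one-to-one correspondence (up to isomorphism) between topological étale groupoids over $X$ and pseudogroup sheaves on $X$: for every topological étale groupoid $\mathcal G$ over $X$, $\hat{\mathcal G}$ is a pseudogroup sheaf and $(\hat{\mathcal G})^\star\cong\mathcal G$ as topological groupoids over $X$; and for every pseudogroup sheaf $\mathcal C$ on $X$, $\mathcal C^\star$ (with the étale space topology) is a topological étale groupoid over $X$ and $\widehat{\mathcal C^\star}\cong\mathcal C$ by an isomorphism of categories that is the identity on $X_{top}$.
   Context: $X_{top}$ denotes the set of open subsets of $X$, regarded as a category with exactly one morphism $U\to V$ iff $U\subseteq V$. Let $\mathcal C$ be a small category with $\mathrm{Ob}(\mathcal C)=X_{top}$ containing $X_{top}$ as a subcategory (identity on objects). For each open $V$, $\mathcal C(-,V)$ is a presheaf of sets on $X$ (restriction along $U'\subseteq U$ = precomposition with the inclusion morphism). For $x\in X$ let $\mathcal C_x(V)=\operatorname{colim}_{U\ni x}\mathcal C(U,V)$ (germ of $f\in\mathcal C(U,V)$ at $x$ written $f_x$); postcomposition with inclusions makes this functorial in $V$, and for $y\in X$ let $\mathcal C_x^y=\lim_{V\ni y}\mathcal C_x(V)$ (limit over open neighbourhoods of $y$), with projections $\mathcal C_x^y\to\mathcal C_x(V)$. Composition in $\mathcal C$ induces $\mathcal C_y^z\times\mathcal C_x^y\to\mathcal C_x^z$: given $\varphi\in\mathcal C_x^y,\psi\in\mathcal C_y^z$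 and open $W\ni z$, choose $g\in\mathcal C(V,W)$, $y\in V$, representing the component $\psi_W$, and $f\in\mathcal C(U,V)$ representing $\varphi_V$; the $W$-component of $\psi\circ\varphi$ is $(g\circ f)_x$. This defines a category $\mathcal C^\star$ with objects the points of $X$ and $\mathcal C^\star(x,y)=\mathcal C_x^y$; its morphism set $\coprod_{x,y}\mathcal C_x^y$ is identified via (2) below with $\coprod_x\mathcal C_x(X)$ and topologized as the étale space of the presheaf $\mathcal C(-,X)$. For $X$ a $T_1$ space, a pre-pseudogroup on $X$ is such a $\mathcal C$ satisfying: (1) $\mathrm{Ob}(\mathcal C)=\mathrm{Ob}(X_{top})$; (2) for every open $V$ and $x\in X$, the map $\coprod_{y\in V}\mathcal C_x^y\to\mathcal C_x(V)$ induced by the projections is a bijection; (3) $\mathcal C^\star$ is a groupoid. A pseudogroup sheaf on $X$ is a pre-pseudogroup such that moreover (4) each presheaf $\mathcal C(-,V)$ is a sheaf. A topological étale groupoid $\mathcal G$ over $X$ has object space $X$, morphism space $\mathcal G_1$, continuous structure maps (source $s$, target $t$, unit $i$, inversion, composition $\mathrm{comp}$), with $s,t$ local homeomorphisms. $\hat{\mathcal G}$ is the category with object set $X_{top}$ and $\hat{\mathcal G}(U,V)=\{f:U\to t^{-1}(V)\text{ continuous}: s\circ f=\mathrm{id}_U\}$, composite of $f\in\hat{\mathcal G}(U,V)$, $g\in\hat{\mathcal G}(V,W)$ being $x\mapsto\mathrm{comp}(g(t(f(x))),f(x))$, identity $i|_U$, and $X_{top}$ embedded via $(U\subseteq V)\mapsto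 i|_U$. *)

theory Defs
  imports "HOL-Analysis.Analysis"
begin

text \<open>A small category whose objects are the open subsets of X. Morphisms live in smor;
  sdom/scod give source and target, scmp g f is the composite g after f, sidn U the identity,
  and sinc U V the morphism U -> V that is the image of the inclusion U <= V of X_top.\<close>

record ('a,'m) sitecat =
  smor :: "'m set"
  sdom :: "'m \<Rightarrow> 'a set"
  scod :: "'m \<Rightarrow> 'a set"
  scmp :: "'m \<Rightarrow> 'm \<Rightarrow> 'm"
  sidn :: "'a set \<Rightarrow> 'm"
  sinc :: "'a set \<Rightarrow> 'a set \<Rightarrow> 'm"

definition shom :: "('a,'m) sitecat \<Rightarrow> 'a set \<Rightarrow> 'a set \<Rightarrow> 'm set" where
  "shom C U V = {f \<in> smor C. sdom C f = U \<and> scod C f = V}"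

definition is_sitecat :: "'a topology \<Rightarrow> ('a,'m) sitecat \<Rightarrow> bool" where
  "is_sitecat X C \<longleftrightarrow>
     (\<forall>f\<in>smor C. openin X (sdom C f) \<and> openin X (scod C f)) \<and>
     (\<forall>U. openin X U \<longrightarrow> sidn C U \<in> shom C U U) \<and>
     (\<forall>U V W f g. f \<in> shom C U V \<and> g \<in> shom C V W \<longrightarrow> scmp C g f \<in> shom C U W) \<and>
     (\<forall>f\<in>smor C. scmp C (sidn C (scod C f)) f = f \<and> scmp C f (sidn C (sdom C f)) = f) \<and>
     (\<forall>U V W Z f g h. f \<in> shom C U V \<and> g \<in> shom C V W \<and> h \<in> shom C W Z \<longrightarrow>
        scmp C h (scmp C g f) = scmp C (scmp C h g) f) \<and>
     (\<forall>U V. openin X U \<and> openin X V \<and> U \<subseteq> V \<longrightarrow> sinc C U V \<in> shom C U V) \<and>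
     (\<forall>U. openin X U \<longrightarrow> sinc C U U = sidn C U) \<and>
     (\<forall>U V W. openin X U \<and> openin X V \<and> openin X W \<and> U \<subseteq> V \<and> V \<subseteq> W \<longrightarrow>
        scmp C (sinc C V W) (sinc C U V) = sinc C U W)"

text \<open>The germ at x of f (with x in the domain of f): the equivalence class of f in the
  filtered colimit over open neighbourhoods U of x of C(U, cod f).\<close>
definition germ :: "'a topology \<Rightarrow> ('a,'m) sitecat \<Rightarrow> 'a \<Rightarrow> 'm \<Rightarrow> 'm set" where
  "germ X C x f = {g \<in> smor C. scod C g = scod C f \<and> x \<in> sdom C g \<and>
      (\<exists>W. openin X W \<and> x \<in> W \<and> W \<subseteq> sdom C f \<inter> sdom C g \<and>
           scmp C f (sinc C W (sdom C f)) = scmp C g (sinc C W (sdom C g)))}"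

definition stalk :: "'a topology \<Rightarrow> ('a,'m) sitecat \<Rightarrow> 'a \<Rightarrow> 'a set \<Rightarrow> 'm set set" where
  "stalk X C x V = {germ X C x f | f. f \<in> smor C \<and> scod C f = V \<and> x \<in> sdom C f}"

text \<open>C_x^y: compatible families (limit over open neighbourhoods V of y); a family is
  represented as a function on open sets, equal to the empty set away from the neighbourhoods
  of y.\<close>
definition stalk2 :: "'a topology \<Rightarrow> ('a,'m) sitecat \<Rightarrow> 'a \<Rightarrow> 'a \<Rightarrow> ('a set \<Rightarrow> 'm set) set" where
  "stalk2 X C x y = {\<phi>.
     (\<forall>V. openin X V \<and> y \<in> V \<longrightarrow> \<phi> V \<in> stalk X C x V) \<and>
     (\<forall>V. \<not> (openin X V \<and> y \<in> V) \<longrightarrow> \<phi> V = {}) \<and>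
     (\<forall>V V' f. openin X V \<and> openin X V' \<and> y \<in> V \<and> V \<subseteq> V' \<and>
        f \<in> smor C \<and> scod C f = V \<and> x \<in> sdom C f \<and> germ X C x f = \<phi> V \<longrightarrow>
        germ X C x (scmp C (sinc C V V') f) = \<phi> V')}"

definition star_mor :: "'a topology \<Rightarrow> ('a,'m) sitecat \<Rightarrow> ('a \<times> 'a \<times> ('a set \<Rightarrow> 'm set)) set" where
  "star_mor X C = {(x, y, \<phi>). x \<in> topspace X \<and> y \<in> topspace X \<and> \<phi> \<in> stalk2 X C x y}"

definition star_src :: "'a \<times> 'a \<times> ('a set \<Rightarrow> 'm set) \<Rightarrow> 'a" where
  "star_src m = fst m"

definition star_tgt :: "'a \<times> 'a \<times> ('a set \<Rightarrow> 'm set) \<Rightarrow> 'a" where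
  "star_tgt m = fst (snd m)"

definition star_cmp_fam ::
  "'a topology \<Rightarrow> ('a,'m) sitecat \<Rightarrow> 'a \<Rightarrow> 'a \<Rightarrow> 'a \<Rightarrow> ('a set \<Rightarrow> 'm set) \<Rightarrow> ('a set \<Rightarrow> 'm set) \<Rightarrow> ('a set \<Rightarrow> 'm set)" where
  "star_cmp_fam X C x y z \<psi> \<phi> = (\<lambda>W. if openin X W \<and> z \<in> W then
      (SOME h. \<exists>g f. g \<in> smor C \<and> scod C g = W \<and> y \<in> sdom C g \<and> germ X C y g = \<psi> W \<and>
                    f \<in> smor C \<and> scod C f = sdom C g \<and> x \<in> sdom C f \<and> germ X C x f = \<phi> (sdom C g) \<and>
                    h = germ X C x (scmp C g f))
      else {})"

definition star_cmp :: "'a topology \<Rightarrow> ('a,'m) sitecat \<Rightarrow>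
    'a \<times> 'a \<times> ('a set \<Rightarrow> 'm set) \<Rightarrow> 'a \<times> 'a \<times> ('a set \<Rightarrow> 'm set) \<Rightarrow> 'a \<times> 'a \<times> ('a set \<Rightarrow> 'm set)" where
  "star_cmp X C n m = (fst m, fst (snd n), star_cmp_fam X C (fst m) (fst (snd m)) (fst (snd n)) (snd (snd n)) (snd (snd m)))"

definition star_idfam :: "'a topology \<Rightarrow> ('a,'m) sitecat \<Rightarrow> 'a \<Rightarrow> ('a set \<Rightarrow> 'm set)" where
  "star_idfam X C x = (\<lambda>V. if openin X V \<and> x \<in> V then germ X C x (sidn C V) else {})"

definition star_unit :: "'a topology \<Rightarrow> ('a,'m) sitecat \<Rightarrow> 'a \<Rightarrow> 'a \<times> 'a \<times> ('a set \<Rightarrow> 'm set)" where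
  "star_unit X C x = (x, x, star_idfam X C x)"

definition star_inv :: "'a topology \<Rightarrow> ('a,'m) sitecat \<Rightarrow>
    'a \<times> 'a \<times> ('a set \<Rightarrow> 'm set) \<Rightarrow> 'a \<times> 'a \<times> ('a set \<Rightarrow> 'm set)" where
  "star_inv X C m = (fst (snd m), fst m, (SOME \<psi>. \<psi> \<in> stalk2 X C (fst (snd m)) (fst m) \<and>
      star_cmp_fam X C (fst m) (fst (snd m)) (fst m) \<psi> (snd (snd m)) = star_idfam X C (fst m) \<and>
      star_cmp_fam X C (fst (snd m)) (fst m) (fst (snd m)) (snd (snd m)) \<psi> = star_idfam X C (fst (snd m))))"

text \<open>Etale space topology of the presheaf C(-,X), transported to the morphisms of C-star via
  the projection to the X-component (condition (2)): basic opens are the sets of all morphisms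
  whose X-component is a germ of a fixed f in C(U,X) at a point of U.\<close>
definition star_basic :: "'a topology \<Rightarrow> ('a,'m) sitecat \<Rightarrow> 'm \<Rightarrow> ('a \<times> 'a \<times> ('a set \<Rightarrow> 'm set)) set" where
  "star_basic X C f = {m \<in> star_mor X C. fst m \<in> sdom C f \<and> snd (snd m) (topspace X) = germ X C (fst m) f}"

definition star_top :: "'a topology \<Rightarrow> ('a,'m) sitecat \<Rightarrow> ('a \<times> 'a \<times> ('a set \<Rightarrow> 'm set)) topology" where
  "star_top X C = subtopology
     (topology_generated_by {star_basic X C f | f. f \<in> shom C (sdom C f) (topspace X)})
     (star_mor X C)"

definition pre_pseudogroup :: "'a topology \<Rightarrow> ('a,'m) sitecat \<Rightarrow> bool" where
  "pre_pseudogroup X C \<longleftrightarrow> is_sitecat X C \<and>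
     (\<forall>V x. openin X V \<and> x \<in> topspace X \<longrightarrow>
        bij_betw (\<lambda>(y, \<phi>). \<phi> V) (SIGMA y:V. stalk2 X C x y) (stalk X C x V)) \<and>
     (\<forall>m \<in> star_mor X C. \<exists>\<psi> \<in> stalk2 X C (fst (snd m)) (fst m).
        star_cmp_fam X C (fst m) (fst (snd m)) (fst m) \<psi> (snd (snd m)) = star_idfam X C (fst m) \<and>
        star_cmp_fam X C (fst (snd m)) (fst m) (fst (snd m)) (snd (snd m)) \<psi> = star_idfam X C (fst (snd m)))"

definition sheaf_cond :: "'a topology \<Rightarrow> ('a,'m) sitecat \<Rightarrow> bool" where
  "sheaf_cond X C \<longleftrightarrow>
     (\<forall>V U \<U> F. openin X V \<and> openin X U \<and> (\<forall>A\<in>\<U>. openin X A) \<and> \<Union>\<U> = U \<and>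
        (\<forall>A\<in>\<U>. F A \<in> shom C A V) \<and>
        (\<forall>A\<in>\<U>. \<forall>B\<in>\<U>. scmp C (F A) (sinc C (A \<inter> B) A) = scmp C (F B) (sinc C (A \<inter> B) B))
      \<longrightarrow> (\<exists>!f. f \<in> shom C U V \<and> (\<forall>A\<in>\<U>. scmp C f (sinc C A U) = F A)))"

definition pseudogroup_sheaf :: "'a topology \<Rightarrow> ('a,'m) sitecat \<Rightarrow> bool" where
  "pseudogroup_sheaf X C \<longleftrightarrow> pre_pseudogroup X C \<and> sheaf_cond X C"

definition local_homeo :: "'g topology \<Rightarrow> 'a topology \<Rightarrow> ('g \<Rightarrow> 'a) \<Rightarrow> bool" where
  "local_homeo G X p \<longleftrightarrow> continuous_map G X p \<and>
     (\<forall>g\<in>topspace G. \<exists>W. openin G W \<and> g \<in> W \<and> openin X (p ` W) \<and>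
        homeomorphic_map (subtopology G W) (subtopology X (p ` W)) p)"

text \<open>mc g f is the composite g after f, defined when s g = t f.\<close>
definition etale_groupoid :: "'a topology \<Rightarrow> 'g topology \<Rightarrow> ('g \<Rightarrow> 'a) \<Rightarrow> ('g \<Rightarrow> 'a) \<Rightarrow>
    ('a \<Rightarrow> 'g) \<Rightarrow> ('g \<Rightarrow> 'g) \<Rightarrow> ('g \<Rightarrow> 'g \<Rightarrow> 'g) \<Rightarrow> bool" where
  "etale_groupoid X G s t i iv mc \<longleftrightarrow>
     (\<forall>x\<in>topspace X. i x \<in> topspace G \<and> s (i x) = x \<and> t (i x) = x) \<and>
     (\<forall>f\<in>topspace G. \<forall>g\<in>topspace G. s g = t f \<longrightarrow>
        mc g f \<in> topspace G \<and> s (mc g f) = s f \<and> t (mc g f) = t g) \<and>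
     (\<forall>f\<in>topspace G. \<forall>g\<in>topspace G. \<forall>h\<in>topspace G. s g = t f \<and> s h = t g \<longrightarrow>
        mc h (mc g f) = mc (mc h g) f) \<and>
     (\<forall>f\<in>topspace G. mc (i (t f)) f = f \<and> mc f (i (s f)) = f) \<and>
     (\<forall>f\<in>topspace G. iv f \<in> topspace G \<and> s (iv f) = t f \<and> t (iv f) = s f \<and>
        mc (iv f) f = i (s f) \<and> mc f (iv f) = i (t f)) \<and>
     continuous_map G X s \<and> continuous_map G X t \<and> continuous_map X G i \<and>
     continuous_map G G iv \<and>
     continuous_map (subtopology (prod_topology G G) {(g, f). s g = t f}) G (\<lambda>(g, f). mc g f) \<and>
     local_homeo G X s \<and> local_homeo G X t"

definition groupoid_iso_over :: "'a topology \<Rightarrow>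
    'g topology \<Rightarrow> ('g \<Rightarrow> 'a) \<Rightarrow> ('g \<Rightarrow> 'a) \<Rightarrow> ('a \<Rightarrow> 'g) \<Rightarrow> ('g \<Rightarrow> 'g) \<Rightarrow> ('g \<Rightarrow> 'g \<Rightarrow> 'g) \<Rightarrow>
    'h topology \<Rightarrow> ('h \<Rightarrow> 'a) \<Rightarrow> ('h \<Rightarrow> 'a) \<Rightarrow> ('a \<Rightarrow> 'h) \<Rightarrow> ('h \<Rightarrow> 'h) \<Rightarrow> ('h \<Rightarrow> 'h \<Rightarrow> 'h) \<Rightarrow>
    ('g \<Rightarrow> 'h) \<Rightarrow> bool" where
  "groupoid_iso_over X G s t i iv mc H s' t' i' iv' mc' \<Phi> \<longleftrightarrow>
     homeomorphic_map G H \<Phi> \<and>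
     (\<forall>f\<in>topspace G. s' (\<Phi> f) = s f \<and> t' (\<Phi> f) = t f \<and> \<Phi> (iv f) = iv' (\<Phi> f)) \<and>
     (\<forall>x\<in>topspace X. \<Phi> (i x) = i' x) \<and>
     (\<forall>f\<in>topspace G. \<forall>g\<in>topspace G. s g = t f \<longrightarrow> \<Phi> (mc g f) = mc' (\<Phi> g) (\<Phi> f))"

text \<open>Morphisms U -> V: triples (U, V, f) with f a continuous section of s over U landing in
  t^{-1}(V); f is taken extensional (undefined outside U).\<close>
definition hat_cat :: "'a topology \<Rightarrow> 'g topology \<Rightarrow> ('g \<Rightarrow> 'a) \<Rightarrow> ('g \<Rightarrow> 'a) \<Rightarrow>
    ('a \<Rightarrow> 'g) \<Rightarrow> ('g \<Rightarrow> 'g \<Rightarrow> 'g) \<Rightarrow> ('a, 'a set \<times> 'a set \<times> ('a \<Rightarrow> 'g)) sitecat" where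
  "hat_cat X G s t i mc =
    \<lparr> smor = {(U, V, f). openin X U \<and> openin X V \<and> f \<in> extensional U \<and>
                 continuous_map (subtopology X U) (subtopology G {g \<in> topspace G. t g \<in> V}) f \<and>
                 (\<forall>x\<in>U. s (f x) = x)},
      sdom = (\<lambda>m. fst m),
      scod = (\<lambda>m. fst (snd m)),
      scmp = (\<lambda>n m. (fst m, fst (snd n),
                 restrict (\<lambda>x. mc (snd (snd n) (t (snd (snd m) x))) (snd (snd m) x)) (fst m))),
      sidn = (\<lambda>U. (U, U, restrict i U)),
      sinc = (\<lambda>U V. (U, V, restrict i U)) \<rparr>"

definition sitecat_iso :: "'a topology \<Rightarrow> ('a,'n) sitecat \<Rightarrow> ('a,'m) sitecat \<Rightarrow> ('n \<Rightarrow> 'm) \<Rightarrow> bool" where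
  "sitecat_iso X D C F \<longleftrightarrow>
     bij_betw F (smor D) (smor C) \<and>
     (\<forall>f\<in>smor D. sdom C (F f) = sdom D f \<and> scod C (F f) = scod D f) \<and>
     (\<forall>f\<in>smor D. \<forall>g\<in>smor D. sdom D g = scod D f \<longrightarrow> F (scmp D g f) = scmp C (F g) (F f)) \<and>
     (\<forall>U. openin X U \<longrightarrow> F (sidn D U) = sidn C U) \<and>
     (\<forall>U V. openin X U \<and> openin X V \<and> U \<subseteq> V \<longrightarrow> F (sinc D U V) = sinc C U V)"

end

theory Submission
  imports Defs
begin

text \<open>
  Both constructions are mediated by germs. For a pseudogroup sheaf C, condition (2) attaches to the
  germ at x of any f : U \<rightarrow> V a unique arrow of C* with source x and target in V; so f yields a
  section of the source map over U, and these sections are exactly the basic open sets of C*. Hence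
  the source map, and via inversion the target map, is a local homeomorphism; conversely every
  continuous section of the source map is locally of this form, and the sheaf condition glues the
  local pieces into a unique morphism of C, which gives the isomorphism of the hat of C* with C.
  For an etale groupoid G, an arrow g is encoded by the germs at s g of the continuous local
  sections of s through g; the T1 axiom forces every compatible family of such germs to have a
  single target, so g \<mapsto> (s g, t g, germs) is a bijection onto the arrows of the star of the
  hat of G, and it is a homeomorphism because images of local sections form a basis of G.
\<close>

lemma topspace_subtopology_open: "openin X U \<Longrightarrow> topspace (subtopology X U) = U"
  using openin_subset by (auto simp: topspace_subtopology)

lemma continuous_map_in_topspace: "continuous_map A B f \<Longrightarrow> x \<in> topspace A \<Longrightarrow> f x \<in> topspace B"
  unfolding continuous_map_def by blast

lemma restrict_eqI: "\<sigma> \<in> extensional U \<Longrightarrow> (\<And>x. x \<in> U \<Longrightarrow> f x = \<sigma> x) \<Longrightarrow> restrict f U = \<sigma>"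
  by (auto simp: extensional_def)

lemma local_homeo_via_involution:
  assumes s: "local_homeo G X s" and iv: "homeomorphic_map G G iv"
    and ivi: "\<And>g. g \<in> topspace G \<Longrightarrow> iv (iv g) = g"
    and t: "\<And>g. g \<in> topspace G \<Longrightarrow> t g = s (iv g)"
  shows "local_homeo G X t"
  unfolding local_homeo_def
proof (intro conjI ballI)
  have sc: "continuous_map G X s" using s unfolding local_homeo_def by blast
  have ic: "continuous_map G G iv" using iv homeomorphic_imp_continuous_map by blast
  show "continuous_map G X t"
    by (rule continuous_map_eq[OF continuous_map_compose[OF ic sc]]) (simp add: t)
  fix g assume g: "g \<in> topspace G"
  have ig: "iv g \<in> topspace G" using continuous_map_in_topspace[OF ic g] .
  obtain W where W: "openin G W" "iv g \<in> W" "openin X (s ` W)"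
    "homeomorphic_map (subtopology G W) (subtopology X (s ` W)) s"
    using s ig unfolding local_homeo_def by blast
  define W' where "W' = {x \<in> topspace G. iv x \<in> W}"
  have W': "openin G W'" unfolding W'_def using openin_continuous_map_preimage[OF ic W(1)] .
  have WG: "W \<subseteq> topspace G" using W(1) openin_subset by blast
  have img: "iv ` (topspace G \<inter> W') = topspace G \<inter> W"
  proof
    show "iv ` (topspace G \<inter> W') \<subseteq> topspace G \<inter> W" unfolding W'_def using continuous_map_in_topspace[OF ic] by auto
    show "topspace G \<inter> W \<subseteq> iv ` (topspace G \<inter> W')"
    proof
      fix h assume h: "h \<in> topspace G \<inter> W"
      have "iv h \<in> topspace G" using continuous_map_in_topspace[OF ic] h by auto
      then have "iv h \<in> topspace G \<inter> W'" unfolding W'_def using ivi h by auto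
      then show "h \<in> iv ` (topspace G \<inter> W')" using ivi h by force
    qed
  qed
  have h1: "homeomorphic_map (subtopology G W') (subtopology G W) iv"
    using homeomorphic_map_subtopologies[OF iv img] .
  have h2: "homeomorphic_map (subtopology G W') (subtopology X (s ` W)) (s \<circ> iv)"
    using homeomorphic_map_compose[OF h1 W(4)] .
  have tW: "t ` W' = s ` W"
  proof
    show "t ` W' \<subseteq> s ` W" unfolding W'_def using t by auto
    show "s ` W \<subseteq> t ` W'"
    proof
      fix y assume "y \<in> s ` W"
      then obtain h where h: "h \<in> W" "y = s h" by blast
      have "h \<in> topspace G" using h WG by blast
      then have "iv h \<in> W'" "t (iv h) = y" unfolding W'_def using ivi t h continuous_map_in_topspace[OF ic] by auto
      then show "y \<in> t ` W'" by force
    qed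
  qed
  show "\<exists>W. openin G W \<and> g \<in> W \<and> openin X (t ` W) \<and> homeomorphic_map (subtopology G W) (subtopology X (t ` W)) t"
  proof (intro exI conjI)
    show "openin G W'" by (rule W')
    show "g \<in> W'" unfolding W'_def using g W(2) by simp
    show "openin X (t ` W')" using tW W(3) by simp
    show "homeomorphic_map (subtopology G W') (subtopology X (t ` W')) t"
      using homeomorphic_map_eq[OF h2] t tW W'_def by (simp add: topspace_subtopology)
  qed
qed

section \<open>Germs in a category over the open sets\<close>

locale site_category =
  fixes X :: "'a topology" and C :: "('a,'m) sitecat"
  assumes is_sitecat: "is_sitecat X C"
begin

lemma sitecat_clauses:
  "\<forall>f\<in>smor C. openin X (sdom C f) \<and> openin X (scod C f)"
  "\<forall>U. openin X U \<longrightarrow> sidn C U \<in> shom C U U"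
  "\<forall>U V W f g. f \<in> shom C U V \<and> g \<in> shom C V W \<longrightarrow> scmp C g f \<in> shom C U W"
  "\<forall>f\<in>smor C. scmp C (sidn C (scod C f)) f = f \<and> scmp C f (sidn C (sdom C f)) = f"
  "\<forall>U V W Z f g h. f \<in> shom C U V \<and> g \<in> shom C V W \<and> h \<in> shom C W Z \<longrightarrow>
     scmp C h (scmp C g f) = scmp C (scmp C h g) f"
  "\<forall>U V. openin X U \<and> openin X V \<and> U \<subseteq> V \<longrightarrow> sinc C U V \<in> shom C U V"
  "\<forall>U V W. openin X U \<and> openin X V \<and> openin X W \<and> U \<subseteq> V \<and> V \<subseteq> W \<longrightarrow>
     scmp C (sinc C V W) (sinc C U V) = sinc C U W"
  using is_sitecat unfolding is_sitecat_def by - (elim conjE, assumption)+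

lemma mor_open: "f \<in> smor C \<Longrightarrow> openin X (sdom C f) \<and> openin X (scod C f)"
  using sitecat_clauses(1) by blast

lemma idn_hom: "openin X U \<Longrightarrow> sidn C U \<in> smor C \<and> sdom C (sidn C U) = U \<and> scod C (sidn C U) = U"
  using sitecat_clauses(2) unfolding shom_def by blast

lemma cmp_hom: "f \<in> smor C \<Longrightarrow> g \<in> smor C \<Longrightarrow> sdom C g = scod C f \<Longrightarrow>
   scmp C g f \<in> smor C \<and> sdom C (scmp C g f) = sdom C f \<and> scod C (scmp C g f) = scod C g"
  using sitecat_clauses(3) unfolding shom_def by blast

lemma idl: "f \<in> smor C \<Longrightarrow> scmp C (sidn C (scod C f)) f = f"
  and idr: "f \<in> smor C \<Longrightarrow> scmp C f (sidn C (sdom C f)) = f"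
  using sitecat_clauses(4) by blast+

lemma assoc: "f \<in> smor C \<Longrightarrow> g \<in> smor C \<Longrightarrow> h \<in> smor C \<Longrightarrow> sdom C g = scod C f \<Longrightarrow>
   sdom C h = scod C g \<Longrightarrow> scmp C h (scmp C g f) = scmp C (scmp C h g) f"
  using sitecat_clauses(5) unfolding shom_def by blast

lemma inc_hom: "openin X U \<Longrightarrow> openin X V \<Longrightarrow> U \<subseteq> V \<Longrightarrow>
   sinc C U V \<in> smor C \<and> sdom C (sinc C U V) = U \<and> scod C (sinc C U V) = V"
  using sitecat_clauses(6) unfolding shom_def by blast

lemma inc_inc: "openin X U \<Longrightarrow> openin X V \<Longrightarrow> openin X W \<Longrightarrow> U \<subseteq> V \<Longrightarrow> V \<subseteq> W \<Longrightarrow>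
   scmp C (sinc C V W) (sinc C U V) = sinc C U W"
  using sitecat_clauses(7) by blast

definition restr :: "'m \<Rightarrow> 'a set \<Rightarrow> 'm" where
  "restr f W = scmp C f (sinc C W (sdom C f))"

lemma restr_hom: "f \<in> smor C \<Longrightarrow> openin X W \<Longrightarrow> W \<subseteq> sdom C f \<Longrightarrow>
   restr f W \<in> smor C \<and> sdom C (restr f W) = W \<and> scod C (restr f W) = scod C f"
proof -
  assume a: "f \<in> smor C" "openin X W" "W \<subseteq> sdom C f"
  have i: "sinc C W (sdom C f) \<in> smor C \<and> sdom C (sinc C W (sdom C f)) = W \<and> scod C (sinc C W (sdom C f)) = sdom C f"
    using inc_hom a mor_open by blast
  show ?thesis unfolding restr_def using cmp_hom[of "sinc C W (sdom C f)" f] i a by simp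
qed

lemma restr_restr: "f \<in> smor C \<Longrightarrow> openin X W \<Longrightarrow> W \<subseteq> sdom C f \<Longrightarrow> openin X W' \<Longrightarrow> W' \<subseteq> W \<Longrightarrow>
   restr (restr f W) W' = restr f W'"
proof -
  assume a: "f \<in> smor C" "openin X W" "W \<subseteq> sdom C f" "openin X W'" "W' \<subseteq> W"
  have o: "openin X (sdom C f)" using a mor_open by blast
  have "restr (restr f W) W' = scmp C (scmp C f (sinc C W (sdom C f))) (sinc C W' W)"
    using restr_hom[OF a(1-3)] unfolding restr_def by simp
  also have "\<dots> = scmp C f (scmp C (sinc C W (sdom C f)) (sinc C W' W))"
    using assoc[of "sinc C W' W" "sinc C W (sdom C f)" f] inc_hom[of W' W] inc_hom[of W "sdom C f"] a o by simp
  also have "\<dots> = restr f W'" unfolding restr_def using inc_inc a o by simp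
  finally show ?thesis .
qed

lemma restr_cmp: "f \<in> smor C \<Longrightarrow> g \<in> smor C \<Longrightarrow> sdom C g = scod C f \<Longrightarrow> openin X W \<Longrightarrow> W \<subseteq> sdom C f \<Longrightarrow>
   restr (scmp C g f) W = scmp C g (restr f W)"
proof -
  assume a: "f \<in> smor C" "g \<in> smor C" "sdom C g = scod C f" "openin X W" "W \<subseteq> sdom C f"
  have i: "sinc C W (sdom C f) \<in> smor C \<and> sdom C (sinc C W (sdom C f)) = W \<and> scod C (sinc C W (sdom C f)) = sdom C f"
    using inc_hom a mor_open by blast
  show ?thesis unfolding restr_def using cmp_hom[OF a(1-3)] assoc[of "sinc C W (sdom C f)" f g] i a by simp
qed

definition to_top :: "'m \<Rightarrow> 'm" where
  "to_top f = scmp C (sinc C (scod C f) (topspace X)) f"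

lemma to_top_mor: "f \<in> smor C \<Longrightarrow>
   to_top f \<in> smor C \<and> sdom C (to_top f) = sdom C f \<and> scod C (to_top f) = topspace X"
  unfolding to_top_def using cmp_hom[of f "sinc C (scod C f) (topspace X)"]
    inc_hom[of "scod C f" "topspace X"] mor_open[of f] openin_subset by auto

lemma germ_iff: "germ X C x f = {g \<in> smor C. scod C g = scod C f \<and> x \<in> sdom C g \<and>
      (\<exists>W. openin X W \<and> x \<in> W \<and> W \<subseteq> sdom C f \<inter> sdom C g \<and> restr f W = restr g W)}"
  unfolding germ_def restr_def by simp

lemma germ_refl: "f \<in> smor C \<Longrightarrow> x \<in> sdom C f \<Longrightarrow> f \<in> germ X C x f"
  unfolding germ_iff using mor_open by blast

lemma germ_sym: "g \<in> germ X C x f \<Longrightarrow> f \<in> smor C \<Longrightarrow> x \<in> sdom C f \<Longrightarrow> f \<in> germ X C x g"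
proof -
  assume a: "g \<in> germ X C x f" "f \<in> smor C" "x \<in> sdom C f"
  then obtain W where W: "openin X W" "x \<in> W" "W \<subseteq> sdom C f \<inter> sdom C g" "restr f W = restr g W"
    "scod C g = scod C f" unfolding germ_iff by blast
  show ?thesis unfolding germ_iff
    by (rule CollectI, intro conjI exI[of _ W]) (use W a in auto)
qed

lemma germ_trans: "f \<in> smor C \<Longrightarrow> g \<in> germ X C x f \<Longrightarrow> h \<in> germ X C x g \<Longrightarrow> h \<in> germ X C x f"
proof -
  assume f: "f \<in> smor C" and a: "g \<in> germ X C x f" "h \<in> germ X C x g"
  obtain W1 where W1: "openin X W1" "x \<in> W1" "W1 \<subseteq> sdom C f \<inter> sdom C g" "restr f W1 = restr g W1"
    using a(1) unfolding germ_iff by blast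
  obtain W2 where W2: "openin X W2" "x \<in> W2" "W2 \<subseteq> sdom C g \<inter> sdom C h" "restr g W2 = restr h W2"
    using a(2) unfolding germ_iff by blast
  have m: "g \<in> smor C" "h \<in> smor C" "scod C h = scod C f" "x \<in> sdom C h" using a unfolding germ_iff by auto
  define W where "W = W1 \<inter> W2"
  have W: "openin X W" "x \<in> W" "W \<subseteq> sdom C f \<inter> sdom C h" using W1 W2 unfolding W_def by auto
  have s1: "W \<subseteq> W1" "W \<subseteq> W2" unfolding W_def by auto
  have "restr f W = restr (restr f W1) W" using restr_restr[of f W1 W] f W1 W s1 by simp
  also have "\<dots> = restr (restr g W1) W" using W1 by simp
  also have "\<dots> = restr g W" using restr_restr[of g W1 W] m W1 W s1 by simp
  also have "\<dots> = restr (restr g W2) W" using restr_restr[of g W2 W] m W2 W s1 by simp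
  also have "\<dots> = restr (restr h W2) W" using W2 by simp
  also have "\<dots> = restr h W" using restr_restr[of h W2 W] m W2 W s1 by simp
  finally show ?thesis unfolding germ_iff using m W by blast
qed

lemma germ_mem: "g \<in> germ X C x f \<Longrightarrow> g \<in> smor C \<and> scod C g = scod C f \<and> x \<in> sdom C g \<and> x \<in> sdom C f"
  unfolding germ_iff by blast

lemma germ_eq_iff: "f \<in> smor C \<Longrightarrow> g \<in> smor C \<Longrightarrow> x \<in> sdom C f \<Longrightarrow> x \<in> sdom C g \<Longrightarrow>
   germ X C x f = germ X C x g \<longleftrightarrow> g \<in> germ X C x f"
proof
  assume a: "f \<in> smor C" "g \<in> smor C" "x \<in> sdom C f" "x \<in> sdom C g"
  { assume "germ X C x f = germ X C x g" then show "g \<in> germ X C x f" using germ_refl a by simp }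
  { assume b: "g \<in> germ X C x f"
    show "germ X C x f = germ X C x g"
    proof
      show "germ X C x f \<subseteq> germ X C x g"
      proof
        fix h assume "h \<in> germ X C x f"
        moreover have "f \<in> germ X C x g" using germ_sym b a by blast
        ultimately show "h \<in> germ X C x g" using germ_trans a by blast
      qed
      show "germ X C x g \<subseteq> germ X C x f"
      proof
        fix h assume "h \<in> germ X C x g"
        then show "h \<in> germ X C x f" using germ_trans b a by blast
      qed
    qed }
qed

lemma germ_eqI: "f \<in> smor C \<Longrightarrow> g \<in> germ X C x f \<Longrightarrow> germ X C x f = germ X C x g"
proof -
  assume a: "f \<in> smor C" "g \<in> germ X C x f"
  then have "g \<in> smor C" "x \<in> sdom C f" "x \<in> sdom C g" using germ_mem by auto
  then show ?thesis using germ_eq_iff a by blast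
qed

lemma germ_restr: "f \<in> smor C \<Longrightarrow> openin X W \<Longrightarrow> W \<subseteq> sdom C f \<Longrightarrow> x \<in> W \<Longrightarrow> restr f W \<in> germ X C x f"
proof -
  assume a: "f \<in> smor C" "openin X W" "W \<subseteq> sdom C f" "x \<in> W"
  have r: "restr f W \<in> smor C \<and> sdom C (restr f W) = W \<and> scod C (restr f W) = scod C f" using restr_hom a by blast
  have "restr (restr f W) W = restr f W" using restr_restr[of f W W] a by simp
  then show ?thesis unfolding germ_iff
    by (rule_tac CollectI, intro conjI exI[of _ W]) (use a r in auto)
qed

lemma germ_restr_eq: "f \<in> smor C \<Longrightarrow> openin X W \<Longrightarrow> W \<subseteq> sdom C f \<Longrightarrow> x \<in> W \<Longrightarrow>
    germ X C x (restr f W) = germ X C x f"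
  using germ_eqI[OF _ germ_restr] by simp

lemma germ_cmp: "f \<in> smor C \<Longrightarrow> g \<in> smor C \<Longrightarrow> sdom C g = scod C f \<Longrightarrow> f' \<in> germ X C x f \<Longrightarrow>
   scmp C g f' \<in> germ X C x (scmp C g f)"
proof -
  assume a: "f \<in> smor C" "g \<in> smor C" "sdom C g = scod C f" "f' \<in> germ X C x f"
  obtain W where W: "openin X W" "x \<in> W" "W \<subseteq> sdom C f \<inter> sdom C f'" "restr f W = restr f' W"
    and f': "f' \<in> smor C" "scod C f' = scod C f" "x \<in> sdom C f'" using a(4) unfolding germ_iff by blast
  have c1: "scmp C g f \<in> smor C \<and> sdom C (scmp C g f) = sdom C f \<and> scod C (scmp C g f) = scod C g"
    using cmp_hom a by blast
  have c2: "scmp C g f' \<in> smor C \<and> sdom C (scmp C g f') = sdom C f' \<and> scod C (scmp C g f') = scod C g"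
    using cmp_hom a f' by simp
  have "restr (scmp C g f) W = scmp C g (restr f W)" using restr_cmp a W by simp
  also have "\<dots> = scmp C g (restr f' W)" using W by simp
  also have "\<dots> = restr (scmp C g f') W" using restr_cmp[of f' g W] a W f' by simp
  finally have e: "restr (scmp C g f) W = restr (scmp C g f') W" .
  show ?thesis unfolding germ_iff
    by (rule_tac CollectI, intro conjI exI[of _ W]) (use W c1 c2 e f' in auto)
qed

lemma germ_cmp_eq: "f \<in> smor C \<Longrightarrow> g \<in> smor C \<Longrightarrow> sdom C g = scod C f \<Longrightarrow> f' \<in> smor C \<Longrightarrow>
   x \<in> sdom C f \<Longrightarrow> x \<in> sdom C f' \<Longrightarrow> germ X C x f = germ X C x f' \<Longrightarrow>
   germ X C x (scmp C g f) = germ X C x (scmp C g f')"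
proof -
  assume a: "f \<in> smor C" "g \<in> smor C" "sdom C g = scod C f" "f' \<in> smor C"
   "x \<in> sdom C f" "x \<in> sdom C f'" "germ X C x f = germ X C x f'"
  have "f' \<in> germ X C x f" using a germ_refl by simp
  then have "scmp C g f' \<in> germ X C x (scmp C g f)" using germ_cmp a by blast
  then show ?thesis using germ_eqI cmp_hom a by blast
qed

lemma germ_open: "g \<in> germ X C x f \<Longrightarrow> \<exists>W. openin X W \<and> x \<in> W \<and> W \<subseteq> sdom C f \<inter> sdom C g \<and>
   (\<forall>x'\<in>W. g \<in> germ X C x' f)"
proof -
  assume a: "g \<in> germ X C x f"
  obtain W where W: "openin X W" "x \<in> W" "W \<subseteq> sdom C f \<inter> sdom C g" "restr f W = restr g W"
    and g: "g \<in> smor C" "scod C g = scod C f" "x \<in> sdom C g" using a unfolding germ_iff by blast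
  have "\<forall>x'\<in>W. g \<in> germ X C x' f"
  proof
    fix x' assume x': "x' \<in> W"
    show "g \<in> germ X C x' f" unfolding germ_iff
      by (rule_tac CollectI, intro conjI exI[of _ W]) (use W g x' in auto)
  qed
  then show ?thesis using W by blast
qed

definition represents :: "'a \<Rightarrow> ('a set \<Rightarrow> 'm set) \<Rightarrow> 'a set \<Rightarrow> 'm \<Rightarrow> bool" where
  "represents x \<phi> V f \<longleftrightarrow> f \<in> smor C \<and> scod C f = V \<and> x \<in> sdom C f \<and> germ X C x f = \<phi> V"

lemma stalk2_represents: "\<phi> \<in> stalk2 X C x y \<Longrightarrow> openin X V \<Longrightarrow> y \<in> V \<Longrightarrow> \<exists>f. represents x \<phi> V f"
proof -
  assume a: "\<phi> \<in> stalk2 X C x y" "openin X V" "y \<in> V"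
  then have "\<phi> V \<in> stalk X C x V" unfolding stalk2_def by blast
  then obtain f where "f \<in> smor C" "scod C f = V" "x \<in> sdom C f" "\<phi> V = germ X C x f"
    unfolding stalk_def by blast
  then show ?thesis unfolding represents_def by metis
qed

lemma stalk2_out: "\<phi> \<in> stalk2 X C x y \<Longrightarrow> \<not> (openin X V \<and> y \<in> V) \<Longrightarrow> \<phi> V = {}"
  unfolding stalk2_def by blast

lemma stalk2_compat: "\<phi> \<in> stalk2 X C x y \<Longrightarrow> openin X V \<Longrightarrow> openin X V' \<Longrightarrow> y \<in> V \<Longrightarrow> V \<subseteq> V' \<Longrightarrow>
   represents x \<phi> V f \<Longrightarrow> germ X C x (scmp C (sinc C V V') f) = \<phi> V'"
  unfolding stalk2_def represents_def by blast

lemma stalk2_compat_represents: "\<phi> \<in> stalk2 X C x y \<Longrightarrow> openin X V \<Longrightarrow> openin X V' \<Longrightarrow> y \<in> V \<Longrightarrow> V \<subseteq> V' \<Longrightarrow>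
   represents x \<phi> V f \<Longrightarrow> represents x \<phi> V' (scmp C (sinc C V V') f)"
proof -
  assume a: "\<phi> \<in> stalk2 X C x y" "openin X V" "openin X V'" "y \<in> V" "V \<subseteq> V'" "represents x \<phi> V f"
  have "scmp C (sinc C V V') f \<in> smor C \<and> sdom C (scmp C (sinc C V V') f) = sdom C f \<and>
     scod C (scmp C (sinc C V V') f) = V'"
    using cmp_hom[of f "sinc C V V'"] inc_hom[of V V'] a unfolding represents_def by auto
  then show ?thesis using stalk2_compat[OF a] a(6) unfolding represents_def by auto
qed

lemma represents_mor: "represents x \<phi> V f \<Longrightarrow> f \<in> smor C \<and> scod C f = V \<and> x \<in> sdom C f \<and> germ X C x f = \<phi> V"
  unfolding represents_def by blast

lemma stalk2_I:
  assumes "\<And>V. openin X V \<Longrightarrow> y \<in> V \<Longrightarrow> \<exists>f. represents x \<phi> V f"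
    and "\<And>V. \<not> (openin X V \<and> y \<in> V) \<Longrightarrow> \<phi> V = {}"
    and "\<And>V V' f. openin X V \<Longrightarrow> openin X V' \<Longrightarrow> y \<in> V \<Longrightarrow> V \<subseteq> V' \<Longrightarrow> represents x \<phi> V f \<Longrightarrow>
       germ X C x (scmp C (sinc C V V') f) = \<phi> V'"
  shows "\<phi> \<in> stalk2 X C x y"
proof -
  have "\<forall>V. openin X V \<and> y \<in> V \<longrightarrow> \<phi> V \<in> stalk X C x V"
  proof (intro allI impI)
    fix V assume "openin X V \<and> y \<in> V"
    then obtain f where "represents x \<phi> V f" using assms(1) by blast
    then show "\<phi> V \<in> stalk X C x V" unfolding represents_def stalk_def by blast
  qed
  moreover have "\<forall>V V' f. openin X V \<and> openin X V' \<and> y \<in> V \<and> V \<subseteq> V' \<and>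
        f \<in> smor C \<and> scod C f = V \<and> x \<in> sdom C f \<and> germ X C x f = \<phi> V \<longrightarrow>
        germ X C x (scmp C (sinc C V V') f) = \<phi> V'"
    using assms(3) unfolding represents_def by blast
  ultimately show ?thesis unfolding stalk2_def using assms(2) by blast
qed

lemma stalk2_eqI: "\<phi> \<in> stalk2 X C x y \<Longrightarrow> \<psi> \<in> stalk2 X C x y \<Longrightarrow>
   (\<And>V. openin X V \<Longrightarrow> y \<in> V \<Longrightarrow> \<phi> V = \<psi> V) \<Longrightarrow> \<phi> = \<psi>"
proof
  fix V assume a: "\<phi> \<in> stalk2 X C x y" "\<psi> \<in> stalk2 X C x y" "\<And>V. openin X V \<Longrightarrow> y \<in> V \<Longrightarrow> \<phi> V = \<psi> V"
  show "\<phi> V = \<psi> V"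
  proof (cases "openin X V \<and> y \<in> V")
    case True then show ?thesis using a by blast
  next
    case False then show ?thesis using stalk2_out a by metis
  qed
qed

lemma star_cmp_fam_indep:
  assumes \<phi>: "\<phi> \<in> stalk2 X C x y"
    and g: "g \<in> smor C" "scod C g = W" "y \<in> sdom C g"
    and g': "g' \<in> smor C" "scod C g' = W" "y \<in> sdom C g'"
    and gg: "germ X C y g = germ X C y g'"
    and f: "represents x \<phi> (sdom C g) f" and f': "represents x \<phi> (sdom C g') f'"
  shows "germ X C x (scmp C g f) = germ X C x (scmp C g' f')"
proof -
  have "g' \<in> germ X C y g" using gg germ_refl g' by simp
  then obtain N where N: "openin X N" "y \<in> N" "N \<subseteq> sdom C g \<inter> sdom C g'" "restr g N = restr g' N"
    unfolding germ_iff by blast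
  obtain k where k: "represents x \<phi> N k" using stalk2_represents[OF \<phi> N(1,2)] by blast
  have k': "k \<in> smor C" "scod C k = N" "x \<in> sdom C k" using k unfolding represents_def by auto
  have og: "openin X (sdom C g)" "openin X (sdom C g')" using mor_open g g' by auto
  have i1: "sinc C N (sdom C g) \<in> smor C \<and> sdom C (sinc C N (sdom C g)) = N \<and> scod C (sinc C N (sdom C g)) = sdom C g"
    using inc_hom N og by blast
  have i2: "sinc C N (sdom C g') \<in> smor C \<and> sdom C (sinc C N (sdom C g')) = N \<and> scod C (sinc C N (sdom C g')) = sdom C g'"
    using inc_hom N og by blast
  have c1: "represents x \<phi> (sdom C g) (scmp C (sinc C N (sdom C g)) k)"
    using stalk2_compat_represents[OF \<phi> N(1) og(1) N(2) _ k] N by blast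
  have c2: "represents x \<phi> (sdom C g') (scmp C (sinc C N (sdom C g')) k)"
    using stalk2_compat_represents[OF \<phi> N(1) og(2) N(2) _ k] N by blast
  have e1: "germ X C x (scmp C g f) = germ X C x (scmp C g (scmp C (sinc C N (sdom C g)) k))"
    using germ_cmp_eq[of f g "scmp C (sinc C N (sdom C g)) k" x] f c1 g unfolding represents_def by auto
  have e2: "germ X C x (scmp C g' f') = germ X C x (scmp C g' (scmp C (sinc C N (sdom C g')) k))"
    using germ_cmp_eq[of f' g' "scmp C (sinc C N (sdom C g')) k" x] f' c2 g' unfolding represents_def by auto
  have "scmp C g (scmp C (sinc C N (sdom C g)) k) = scmp C (restr g N) k"
    unfolding restr_def using assoc[of k "sinc C N (sdom C g)" g] i1 k' g by simp
  also have "\<dots> = scmp C (restr g' N) k" using N by simp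
  also have "\<dots> = scmp C g' (scmp C (sinc C N (sdom C g')) k)"
    unfolding restr_def using assoc[of k "sinc C N (sdom C g')" g'] i2 k' g' by simp
  finally show ?thesis using e1 e2 by simp
qed

definition composable_reps :: "'a \<Rightarrow> 'a \<Rightarrow> ('a set \<Rightarrow> 'm set) \<Rightarrow> ('a set \<Rightarrow> 'm set) \<Rightarrow> 'a set \<Rightarrow> 'm \<Rightarrow> 'm \<Rightarrow> bool" where
  "composable_reps x y \<psi> \<phi> W g f \<longleftrightarrow> represents y \<psi> W g \<and> represents x \<phi> (sdom C g) f"

lemma composable_reps_ex: "\<psi> \<in> stalk2 X C y z \<Longrightarrow> \<phi> \<in> stalk2 X C x y \<Longrightarrow> openin X W \<Longrightarrow> z \<in> W \<Longrightarrow>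
   \<exists>g f. composable_reps x y \<psi> \<phi> W g f"
proof -
  assume a: "\<psi> \<in> stalk2 X C y z" "\<phi> \<in> stalk2 X C x y" "openin X W" "z \<in> W"
  obtain g where g: "represents y \<psi> W g" using stalk2_represents a by blast
  then have "openin X (sdom C g)" "y \<in> sdom C g" using mor_open unfolding represents_def by auto
  then obtain f where "represents x \<phi> (sdom C g) f" using stalk2_represents a by blast
  then show ?thesis using g unfolding composable_reps_def by blast
qed

lemma star_cmp_fam_eq:
  assumes \<psi>: "\<psi> \<in> stalk2 X C y z" and \<phi>: "\<phi> \<in> stalk2 X C x y" and W: "openin X W" "z \<in> W"
    and w: "composable_reps x y \<psi> \<phi> W g f"
  shows "star_cmp_fam X C x y z \<psi> \<phi> W = germ X C x (scmp C g f)"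
proof -
  let ?P = "\<lambda>h. \<exists>g f. g \<in> smor C \<and> scod C g = W \<and> y \<in> sdom C g \<and> germ X C y g = \<psi> W \<and>
                    f \<in> smor C \<and> scod C f = sdom C g \<and> x \<in> sdom C f \<and> germ X C x f = \<phi> (sdom C g) \<and>
                    h = germ X C x (scmp C g f)"
  have "?P (germ X C x (scmp C g f))" using w unfolding composable_reps_def represents_def by blast
  then have "?P (SOME h. ?P h)" by (rule someI)
  then obtain g' f' where w': "composable_reps x y \<psi> \<phi> W g' f'" and h: "(SOME h. ?P h) = germ X C x (scmp C g' f')"
    unfolding composable_reps_def represents_def by blast
  have "germ X C x (scmp C g' f') = germ X C x (scmp C g f)"
    using star_cmp_fam_indep[OF \<phi>, of g' W g f' f] w w' unfolding composable_reps_def represents_def by auto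
  then show ?thesis unfolding star_cmp_fam_def using W h by simp
qed

lemma star_cmp_fam_out: "\<not> (openin X W \<and> z \<in> W) \<Longrightarrow> star_cmp_fam X C x y z \<psi> \<phi> W = {}"
  unfolding star_cmp_fam_def by auto

lemma composable_reps_mor: "composable_reps x y \<psi> \<phi> W g f \<Longrightarrow> scmp C g f \<in> smor C \<and> sdom C (scmp C g f) = sdom C f \<and>
   scod C (scmp C g f) = W \<and> x \<in> sdom C f"
  unfolding composable_reps_def represents_def using cmp_hom by auto

lemma star_cmp_fam_stalk2: "\<psi> \<in> stalk2 X C y z \<Longrightarrow> \<phi> \<in> stalk2 X C x y \<Longrightarrow> star_cmp_fam X C x y z \<psi> \<phi> \<in> stalk2 X C x z"
proof (rule stalk2_I)
  assume \<psi>: "\<psi> \<in> stalk2 X C y z" and \<phi>: "\<phi> \<in> stalk2 X C x y"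
  { fix W assume W: "openin X W" "z \<in> W"
    obtain g f where w: "composable_reps x y \<psi> \<phi> W g f" using composable_reps_ex \<psi> \<phi> W by blast
    have "represents x (star_cmp_fam X C x y z \<psi> \<phi>) W (scmp C g f)"
      using star_cmp_fam_eq[OF \<psi> \<phi> W w] composable_reps_mor[OF w] unfolding represents_def by auto
    then show "\<exists>h. represents x (star_cmp_fam X C x y z \<psi> \<phi>) W h" by blast }
  { fix W assume "\<not> (openin X W \<and> z \<in> W)"
    then show "star_cmp_fam X C x y z \<psi> \<phi> W = {}" by (rule star_cmp_fam_out) }
  { fix W W' h assume W: "openin X W" "openin X W'" "z \<in> W" "W \<subseteq> W'"
      and h: "represents x (star_cmp_fam X C x y z \<psi> \<phi>) W h"
    obtain g f where w: "composable_reps x y \<psi> \<phi> W g f" using composable_reps_ex \<psi> \<phi> W by blast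
    have g: "represents y \<psi> W g" and f: "represents x \<phi> (sdom C g) f" using w unfolding composable_reps_def by auto
    have i: "sinc C W W' \<in> smor C \<and> sdom C (sinc C W W') = W \<and> scod C (sinc C W W') = W'"
      using inc_hom W by blast
    have g2: "represents y \<psi> W' (scmp C (sinc C W W') g)" using stalk2_compat_represents[OF \<psi> W(1,2,3,4) g] .
    have sd: "sdom C (scmp C (sinc C W W') g) = sdom C g" using cmp_hom i g unfolding represents_def by auto
    have w2: "composable_reps x y \<psi> \<phi> W' (scmp C (sinc C W W') g) f" using g2 f sd unfolding composable_reps_def by simp
    have e1: "star_cmp_fam X C x y z \<psi> \<phi> W' = germ X C x (scmp C (scmp C (sinc C W W') g) f)"
      using star_cmp_fam_eq[OF \<psi> \<phi> W(2) _ w2] W by blast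
    have e0: "germ X C x h = germ X C x (scmp C g f)"
      using h star_cmp_fam_eq[OF \<psi> \<phi> W(1,3) w] unfolding represents_def by simp
    have gf: "scmp C g f \<in> smor C \<and> sdom C (scmp C g f) = sdom C f \<and> scod C (scmp C g f) = W \<and> x \<in> sdom C f"
      using composable_reps_mor w by blast
    have "germ X C x (scmp C (sinc C W W') h) = germ X C x (scmp C (sinc C W W') (scmp C g f))"
      using germ_cmp_eq[of h "sinc C W W'" "scmp C g f" x] h gf i e0 unfolding represents_def by auto
    also have "\<dots> = germ X C x (scmp C (scmp C (sinc C W W') g) f)"
      using assoc[of f g "sinc C W W'"] g f i unfolding represents_def by auto
    finally show "germ X C x (scmp C (sinc C W W') h) = star_cmp_fam X C x y z \<psi> \<phi> W'" using e1 by simp }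
qed

lemma germ_inc_idn: "openin X V \<Longrightarrow> openin X V' \<Longrightarrow> V \<subseteq> V' \<Longrightarrow> x \<in> V \<Longrightarrow>
   germ X C x (sinc C V V') = germ X C x (sidn C V')"
proof -
  assume a: "openin X V" "openin X V'" "V \<subseteq> V'" "x \<in> V"
  have i: "sinc C V V' \<in> smor C \<and> sdom C (sinc C V V') = V \<and> scod C (sinc C V V') = V'" using inc_hom a by blast
  have d: "sidn C V' \<in> smor C \<and> sdom C (sidn C V') = V' \<and> scod C (sidn C V') = V'" using idn_hom a by blast
  have "restr (sidn C V') V = sinc C V V'" unfolding restr_def using idl[of "sinc C V V'"] i d by simp
  then have "germ X C x (sidn C V') = germ X C x (sinc C V V')" using germ_restr_eq[of "sidn C V'" V x] d a by simp
  then show ?thesis by simp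
qed

lemma star_idfam_stalk2: "star_idfam X C x \<in> stalk2 X C x x"
proof (rule stalk2_I)
  { fix V assume V: "openin X V" "x \<in> V"
    show "\<exists>f. represents x (star_idfam X C x) V f"
      using idn_hom[OF V(1)] V unfolding represents_def star_idfam_def by (intro exI[of _ "sidn C V"]) auto }
  { fix V assume "\<not> (openin X V \<and> x \<in> V)" then show "star_idfam X C x V = {}" unfolding star_idfam_def by auto }
  { fix V V' f assume V: "openin X V" "openin X V'" "x \<in> V" "V \<subseteq> V'" and f: "represents x (star_idfam X C x) V f"
    have f': "f \<in> smor C" "scod C f = V" "x \<in> sdom C f" "germ X C x f = germ X C x (sidn C V)"
      using f V unfolding represents_def star_idfam_def by auto
    have i: "sinc C V V' \<in> smor C \<and> sdom C (sinc C V V') = V \<and> scod C (sinc C V V') = V'" using inc_hom V by blast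
    have d: "sidn C V \<in> smor C \<and> sdom C (sidn C V) = V \<and> scod C (sidn C V) = V" using idn_hom V by blast
    have "germ X C x (scmp C (sinc C V V') f) = germ X C x (scmp C (sinc C V V') (sidn C V))"
      using germ_cmp_eq[of f "sinc C V V'" "sidn C V" x] f' i d V by auto
    also have "\<dots> = germ X C x (sinc C V V')" using idr[of "sinc C V V'"] i by simp
    also have "\<dots> = germ X C x (sidn C V')" using germ_inc_idn V by blast
    finally show "germ X C x (scmp C (sinc C V V') f) = star_idfam X C x V'" unfolding star_idfam_def using V by auto }
qed

lemma represents_idfam: "openin X V \<Longrightarrow> x \<in> V \<Longrightarrow> represents x (star_idfam X C x) V (sidn C V)"
  using idn_hom unfolding represents_def star_idfam_def by auto

lemma star_cmp_fam_idl: "\<phi> \<in> stalk2 X C x y \<Longrightarrow> star_cmp_fam X C x y y (star_idfam X C y) \<phi> = \<phi>"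
proof (rule stalk2_eqI)
  assume \<phi>: "\<phi> \<in> stalk2 X C x y"
  show "star_cmp_fam X C x y y (star_idfam X C y) \<phi> \<in> stalk2 X C x y" using star_cmp_fam_stalk2 star_idfam_stalk2 \<phi> by blast
  fix W assume W: "openin X W" "y \<in> W"
  obtain f where f: "represents x \<phi> W f" using stalk2_represents \<phi> W by blast
  have w: "composable_reps x y (star_idfam X C y) \<phi> W (sidn C W) f"
    unfolding composable_reps_def using represents_idfam[OF W] idn_hom[OF W(1)] f by simp
  have "star_cmp_fam X C x y y (star_idfam X C y) \<phi> W = germ X C x (scmp C (sidn C W) f)"
    using star_cmp_fam_eq[OF star_idfam_stalk2 \<phi> W w] .
  also have "\<dots> = \<phi> W" using idl[of f] f unfolding represents_def by auto
  finally show "star_cmp_fam X C x y y (star_idfam X C y) \<phi> W = \<phi> W" .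
qed

lemma star_cmp_fam_idr: "\<phi> \<in> stalk2 X C x y \<Longrightarrow> star_cmp_fam X C x x y \<phi> (star_idfam X C x) = \<phi>"
proof (rule stalk2_eqI)
  assume \<phi>: "\<phi> \<in> stalk2 X C x y"
  show "star_cmp_fam X C x x y \<phi> (star_idfam X C x) \<in> stalk2 X C x y" using star_cmp_fam_stalk2 star_idfam_stalk2 \<phi> by blast
  fix W assume W: "openin X W" "y \<in> W"
  obtain g where g: "represents x \<phi> W g" using stalk2_represents \<phi> W by blast
  have g': "g \<in> smor C" "openin X (sdom C g)" "x \<in> sdom C g" using g mor_open unfolding represents_def by auto
  have w: "composable_reps x x \<phi> (star_idfam X C x) W g (sidn C (sdom C g))"
    unfolding composable_reps_def using represents_idfam[OF g'(2,3)] g by simp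
  have "star_cmp_fam X C x x y \<phi> (star_idfam X C x) W = germ X C x (scmp C g (sidn C (sdom C g)))"
    using star_cmp_fam_eq[OF \<phi> star_idfam_stalk2 W w] .
  also have "\<dots> = \<phi> W" using idr[of g] g unfolding represents_def by auto
  finally show "star_cmp_fam X C x x y \<phi> (star_idfam X C x) W = \<phi> W" .
qed

lemma star_cmp_fam_assoc:
  assumes \<phi>: "\<phi> \<in> stalk2 X C a b" and \<psi>: "\<psi> \<in> stalk2 X C b c" and \<theta>: "\<theta> \<in> stalk2 X C c d"
  shows "star_cmp_fam X C a c d \<theta> (star_cmp_fam X C a b c \<psi> \<phi>) = star_cmp_fam X C a b d (star_cmp_fam X C b c d \<theta> \<psi>) \<phi>"
proof (rule stalk2_eqI)
  show "star_cmp_fam X C a c d \<theta> (star_cmp_fam X C a b c \<psi> \<phi>) \<in> stalk2 X C a d"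
    using star_cmp_fam_stalk2 \<phi> \<psi> \<theta> by blast
  show "star_cmp_fam X C a b d (star_cmp_fam X C b c d \<theta> \<psi>) \<phi> \<in> stalk2 X C a d"
    using star_cmp_fam_stalk2 \<phi> \<psi> \<theta> by blast
  fix W assume W: "openin X W" "d \<in> W"
  obtain h where h: "represents c \<theta> W h" using stalk2_represents \<theta> W by blast
  have h': "h \<in> smor C" "openin X (sdom C h)" "c \<in> sdom C h" "scod C h = W" using h mor_open unfolding represents_def by auto
  obtain g where g: "represents b \<psi> (sdom C h) g" using stalk2_represents \<psi> h' by blast
  have g': "g \<in> smor C" "openin X (sdom C g)" "b \<in> sdom C g" "scod C g = sdom C h" using g mor_open unfolding represents_def by auto
  obtain f where f: "represents a \<phi> (sdom C g) f" using stalk2_represents \<phi> g' by blast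
  have f': "f \<in> smor C" "a \<in> sdom C f" "scod C f = sdom C g" using f unfolding represents_def by auto
  have w1: "composable_reps a b \<psi> \<phi> (sdom C h) g f" unfolding composable_reps_def using g f by simp
  have e1: "star_cmp_fam X C a b c \<psi> \<phi> (sdom C h) = germ X C a (scmp C g f)" using star_cmp_fam_eq[OF \<psi> \<phi> h'(2,3) w1] .
  have gf: "scmp C g f \<in> smor C \<and> sdom C (scmp C g f) = sdom C f \<and> scod C (scmp C g f) = sdom C h"
    using cmp_hom f' g' by simp
  have w2: "composable_reps a c \<theta> (star_cmp_fam X C a b c \<psi> \<phi>) W h (scmp C g f)"
    unfolding composable_reps_def represents_def using represents_mor[OF h] e1 gf f' by simp
  have L: "star_cmp_fam X C a c d \<theta> (star_cmp_fam X C a b c \<psi> \<phi>) W = germ X C a (scmp C h (scmp C g f))"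
    using star_cmp_fam_eq[OF \<theta> star_cmp_fam_stalk2[OF \<psi> \<phi>] W w2] .
  have w3: "composable_reps b c \<theta> \<psi> W h g" unfolding composable_reps_def using g h by simp
  have e3: "star_cmp_fam X C b c d \<theta> \<psi> W = germ X C b (scmp C h g)" using star_cmp_fam_eq[OF \<theta> \<psi> W w3] .
  have hg: "scmp C h g \<in> smor C \<and> sdom C (scmp C h g) = sdom C g \<and> scod C (scmp C h g) = W"
    using cmp_hom g' h' by simp
  have w4: "composable_reps a b (star_cmp_fam X C b c d \<theta> \<psi>) \<phi> W (scmp C h g) f"
    unfolding composable_reps_def represents_def using hg e3 f g' f' unfolding represents_def by simp
  have R: "star_cmp_fam X C a b d (star_cmp_fam X C b c d \<theta> \<psi>) \<phi> W = germ X C a (scmp C (scmp C h g) f)"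
    using star_cmp_fam_eq[OF star_cmp_fam_stalk2[OF \<theta> \<psi>] \<phi> W w4] .
  show "star_cmp_fam X C a c d \<theta> (star_cmp_fam X C a b c \<psi> \<phi>) W = star_cmp_fam X C a b d (star_cmp_fam X C b c d \<theta> \<psi>) \<phi> W"
    using L R assoc[of f g h] f' g' h' by simp
qed

lemma star_inverse_unique:
  assumes \<phi>: "\<phi> \<in> stalk2 X C x y" and \<psi>: "\<psi> \<in> stalk2 X C y x" and \<psi>': "\<psi>' \<in> stalk2 X C y x"
    and l: "star_cmp_fam X C x y x \<psi> \<phi> = star_idfam X C x"
    and r: "star_cmp_fam X C y x y \<phi> \<psi>' = star_idfam X C y"
  shows "\<psi> = \<psi>'"
proof -
  have "\<psi> = star_cmp_fam X C y y x \<psi> (star_idfam X C y)" using star_cmp_fam_idr \<psi> by simp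
  also have "\<dots> = star_cmp_fam X C y y x \<psi> (star_cmp_fam X C y x y \<phi> \<psi>')" using r by simp
  also have "\<dots> = star_cmp_fam X C y x x (star_cmp_fam X C x y x \<psi> \<phi>) \<psi>'" using star_cmp_fam_assoc[OF \<psi>' \<phi> \<psi>] .
  also have "\<dots> = \<psi>'" using l star_cmp_fam_idl \<psi>' by simp
  finally show ?thesis .
qed

end

section \<open>The groupoid of germs of a pre-pseudogroup\<close>

locale pre_pseudogroup_site = site_category X C for X :: "'a topology" and C :: "('a,'m) sitecat" +
  assumes pre_pseudogroup: "pre_pseudogroup X C"
begin

lemma stalk_bij: "openin X V \<Longrightarrow> x \<in> topspace X \<Longrightarrow>
   bij_betw (\<lambda>(y, \<phi>). \<phi> V) (SIGMA y:V. stalk2 X C x y) (stalk X C x V)"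
  using pre_pseudogroup unfolding pre_pseudogroup_def by blast

lemma star_inverse_ex: "m \<in> star_mor X C \<Longrightarrow> \<exists>\<psi> \<in> stalk2 X C (fst (snd m)) (fst m).
        star_cmp_fam X C (fst m) (fst (snd m)) (fst m) \<psi> (snd (snd m)) = star_idfam X C (fst m) \<and>
        star_cmp_fam X C (fst (snd m)) (fst m) (fst (snd m)) (snd (snd m)) \<psi> = star_idfam X C (fst (snd m))"
  using pre_pseudogroup unfolding pre_pseudogroup_def by blast

lemma stalk_inj: "openin X V \<Longrightarrow> x \<in> topspace X \<Longrightarrow> y \<in> V \<Longrightarrow> y' \<in> V \<Longrightarrow> \<phi> \<in> stalk2 X C x y \<Longrightarrow>
   \<phi>' \<in> stalk2 X C x y' \<Longrightarrow> \<phi> V = \<phi>' V \<Longrightarrow> y = y' \<and> \<phi> = \<phi>'"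
proof -
  assume a: "openin X V" "x \<in> topspace X" "y \<in> V" "y' \<in> V" "\<phi> \<in> stalk2 X C x y"
   "\<phi>' \<in> stalk2 X C x y'" "\<phi> V = \<phi>' V"
  have "inj_on (\<lambda>(y, \<phi>). \<phi> V) (SIGMA y:V. stalk2 X C x y)" using stalk_bij a bij_betw_def by blast
  then have "(y, \<phi>) = (y', \<phi>')" using a unfolding inj_on_def by auto
  then show ?thesis by simp
qed

lemma stalk_surj: "openin X V \<Longrightarrow> f \<in> smor C \<Longrightarrow> scod C f = V \<Longrightarrow> x \<in> sdom C f \<Longrightarrow>
   \<exists>y \<phi>. y \<in> V \<and> \<phi> \<in> stalk2 X C x y \<and> \<phi> V = germ X C x f"
proof -
  assume a: "openin X V" "f \<in> smor C" "scod C f = V" "x \<in> sdom C f"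
  have x: "x \<in> topspace X" using a mor_open openin_subset by blast
  have "germ X C x f \<in> stalk X C x V" unfolding stalk_def using a by blast
  then have "germ X C x f \<in> (\<lambda>(y, \<phi>). \<phi> V) ` (SIGMA y:V. stalk2 X C x y)" using stalk_bij[OF a(1) x]
    unfolding bij_betw_def by simp
  then show ?thesis by force
qed

lemma stalk2_top_iff:
  assumes \<phi>: "\<phi> \<in> stalk2 X C x y" and y: "y \<in> topspace X" and k: "k \<in> smor C" "x \<in> sdom C k"
  shows "\<phi> (topspace X) = germ X C x (to_top k) \<longleftrightarrow> y \<in> scod C k \<and> \<phi> (scod C k) = germ X C x k"
proof
  have V: "openin X (scod C k)" "scod C k \<subseteq> topspace X" using k mor_open openin_subset by auto
  have x: "x \<in> topspace X" using k mor_open openin_subset by blast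
  obtain y' \<theta> where \<theta>: "y' \<in> scod C k" "\<theta> \<in> stalk2 X C x y'" "\<theta> (scod C k) = germ X C x k"
    using stalk_surj[OF V(1) k(1) refl k(2)] by blast
  have \<theta>_top: "\<theta> (topspace X) = germ X C x (to_top k)"
    using stalk2_compat[OF \<theta>(2) V(1) openin_topspace \<theta>(1) V(2)] \<theta> k unfolding represents_def to_top_def by simp
  assume "\<phi> (topspace X) = germ X C x (to_top k)"
  then have "y' = y \<and> \<theta> = \<phi>" using stalk_inj[OF openin_topspace x _ y \<theta>(2) \<phi>] \<theta>_top \<theta>(1) V(2) by auto
  then show "y \<in> scod C k \<and> \<phi> (scod C k) = germ X C x k" using \<theta> by simp
next
  assume "y \<in> scod C k \<and> \<phi> (scod C k) = germ X C x k"
  then show "\<phi> (topspace X) = germ X C x (to_top k)"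
    using stalk2_compat[OF \<phi> _ openin_topspace, of "scod C k" k] k mor_open openin_subset
    unfolding represents_def to_top_def by blast
qed

text \<open>By condition (2) the germ of f at x is the scod f-component of a unique arrow of C* with source x.\<close>
definition star_point :: "'m \<Rightarrow> 'a \<Rightarrow> 'a \<times> 'a \<times> ('a set \<Rightarrow> 'm set)" where
  "star_point f x = (x, SOME p. p \<in> (SIGMA y:scod C f. stalk2 X C x y) \<and> snd p (scod C f) = germ X C x f)"

lemma star_point_props: "f \<in> smor C \<Longrightarrow> x \<in> sdom C f \<Longrightarrow>
   fst (star_point f x) = x \<and> fst (snd (star_point f x)) \<in> scod C f \<and> snd (snd (star_point f x)) \<in> stalk2 X C x (fst (snd (star_point f x))) \<and>
   snd (snd (star_point f x)) (scod C f) = germ X C x f"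
proof -
  assume a: "f \<in> smor C" "x \<in> sdom C f"
  obtain y \<phi> where "y \<in> scod C f \<and> \<phi> \<in> stalk2 X C x y \<and> \<phi> (scod C f) = germ X C x f"
    using stalk_surj[OF _ a(1) refl a(2)] mor_open a by blast
  then have "\<exists>p. p \<in> (SIGMA y:scod C f. stalk2 X C x y) \<and> snd p (scod C f) = germ X C x f" by auto
  from someI_ex[OF this] show ?thesis unfolding star_point_def by auto
qed

lemma star_point_unique: "f \<in> smor C \<Longrightarrow> x \<in> sdom C f \<Longrightarrow> y \<in> scod C f \<Longrightarrow> \<phi> \<in> stalk2 X C x y \<Longrightarrow>
   \<phi> (scod C f) = germ X C x f \<Longrightarrow> star_point f x = (x, y, \<phi>)"
proof -
  assume a: "f \<in> smor C" "x \<in> sdom C f" "y \<in> scod C f" "\<phi> \<in> stalk2 X C x y" "\<phi> (scod C f) = germ X C x f"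
  have p: "fst (star_point f x) = x \<and> fst (snd (star_point f x)) \<in> scod C f \<and> snd (snd (star_point f x)) \<in> stalk2 X C x (fst (snd (star_point f x))) \<and>
   snd (snd (star_point f x)) (scod C f) = germ X C x f" using star_point_props a by blast
  have x: "x \<in> topspace X" using a mor_open openin_subset by blast
  have o: "openin X (scod C f)" using a mor_open by blast
  have "fst (snd (star_point f x)) = y \<and> snd (snd (star_point f x)) = \<phi>"
    using stalk_inj[OF o x _ a(3) _ a(4), of "fst (snd (star_point f x))" "snd (snd (star_point f x))"] p a(5) by simp
  then show ?thesis using p by (simp add: prod_eq_iff)
qed

lemma star_mor_iff: "(x, y, \<phi>) \<in> star_mor X C \<longleftrightarrow> x \<in> topspace X \<and> y \<in> topspace X \<and> \<phi> \<in> stalk2 X C x y"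
  unfolding star_mor_def by simp

lemma star_point_mor: "f \<in> smor C \<Longrightarrow> x \<in> sdom C f \<Longrightarrow> star_point f x \<in> star_mor X C"
proof -
  assume a: "f \<in> smor C" "x \<in> sdom C f"
  have p: "fst (star_point f x) = x \<and> fst (snd (star_point f x)) \<in> scod C f \<and> snd (snd (star_point f x)) \<in> stalk2 X C x (fst (snd (star_point f x)))"
    using star_point_props a by blast
  have "x \<in> topspace X" "scod C f \<subseteq> topspace X" using a mor_open openin_subset by auto
  then have "fst (star_point f x) \<in> topspace X \<and> fst (snd (star_point f x)) \<in> topspace X \<and> snd (snd (star_point f x)) \<in> stalk2 X C (fst (star_point f x)) (fst (snd (star_point f x)))"
    using p by auto
  then show ?thesis unfolding star_mor_def by (cases "star_point f x") auto
qed

lemma star_point_top: "f \<in> smor C \<Longrightarrow> x \<in> sdom C f \<Longrightarrow>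
   snd (snd (star_point f x)) (topspace X) = germ X C x (to_top f)"
  using star_point_props[of f x] stalk2_top_iff[of "snd (snd (star_point f x))" x "fst (snd (star_point f x))" f]
    mor_open[of f] openin_subset by blast

abbreviation global_mor :: "'m \<Rightarrow> bool" where "global_mor f \<equiv> f \<in> smor C \<and> scod C f = topspace X"

lemma shom_top_iff: "f \<in> shom C (sdom C f) (topspace X) \<longleftrightarrow> global_mor f"
  unfolding shom_def by auto

lemma star_basic_iff: "m \<in> star_basic X C f \<longleftrightarrow> m \<in> star_mor X C \<and> fst m \<in> sdom C f \<and> snd (snd m) (topspace X) = germ X C (fst m) f"
  unfolding star_basic_def by blast

lemma star_basic_subset: "star_basic X C f \<subseteq> star_mor X C"
  unfolding star_basic_def by blast

lemma star_basic_eq_image: "global_mor f \<Longrightarrow> star_basic X C f = star_point f ` sdom C f"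
proof
  assume f: "global_mor f"
  show "star_point f ` sdom C f \<subseteq> star_basic X C f"
  proof
    fix m assume "m \<in> star_point f ` sdom C f"
    then obtain x where x: "x \<in> sdom C f" "m = star_point f x" by blast
    have p: "fst (star_point f x) = x" "snd (snd (star_point f x)) (topspace X) = germ X C x f" "star_point f x \<in> star_mor X C"
      using star_point_props[of f x] star_point_mor[of f x] f x by auto
    show "m \<in> star_basic X C f" unfolding star_basic_iff using x p by simp
  qed
  show "star_basic X C f \<subseteq> star_point f ` sdom C f"
  proof
    fix m assume m: "m \<in> star_basic X C f"
    obtain x y \<phi> where e: "m = (x, y, \<phi>)" by (cases m) auto
    have "x \<in> sdom C f" "y \<in> topspace X" "\<phi> \<in> stalk2 X C x y" "\<phi> (topspace X) = germ X C x f"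
      using m unfolding star_basic_iff e star_mor_iff by auto
    then have "star_point f x = m" using star_point_unique[of f x y \<phi>] f e by auto
    then show "m \<in> star_point f ` sdom C f" using \<open>x \<in> sdom C f\<close> by blast
  qed
qed

lemma star_basic_cover: "m \<in> star_mor X C \<Longrightarrow> \<exists>f. global_mor f \<and> m \<in> star_basic X C f"
proof -
  assume m: "m \<in> star_mor X C"
  obtain x y \<phi> where e: "m = (x, y, \<phi>)" by (cases m) auto
  have s: "x \<in> topspace X" "y \<in> topspace X" "\<phi> \<in> stalk2 X C x y" using m e star_mor_iff by auto
  obtain f where f: "represents x \<phi> (topspace X) f" using stalk2_represents[OF s(3) openin_topspace s(2)] by blast
  then show ?thesis unfolding star_basic_iff represents_def using m e by auto
qed

definition star_basis where "star_basis = {star_basic X C f | f. f \<in> shom C (sdom C f) (topspace X)}"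

lemma star_top_eq: "star_top X C = subtopology (topology_generated_by star_basis) (star_mor X C)"
  unfolding star_top_def star_basis_def by simp

lemma topspace_star_top: "topspace (star_top X C) = star_mor X C"
proof -
  have "star_mor X C \<subseteq> \<Union>star_basis"
  proof
    fix m assume "m \<in> star_mor X C"
    then obtain f where "global_mor f" "m \<in> star_basic X C f" using star_basic_cover by blast
    then show "m \<in> \<Union>star_basis" unfolding star_basis_def using shom_top_iff by blast
  qed
  then show ?thesis unfolding star_top_eq by auto
qed

lemma openin_star_basic: "global_mor f \<Longrightarrow> openin (star_top X C) (star_basic X C f)"
proof -
  assume f: "global_mor f"
  have "star_basic X C f \<in> star_basis" unfolding star_basis_def using f shom_top_iff by blast
  then have "openin (topology_generated_by star_basis) (star_basic X C f)" by (rule topology_generated_by_Basis)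
  then show ?thesis unfolding star_top_eq openin_subtopology using star_basic_subset by blast
qed

lemma germ_openE: assumes "g \<in> germ X C x f"
  obtains W where "openin X W" "x \<in> W" "W \<subseteq> sdom C f \<inter> sdom C g" "\<forall>x'\<in>W. g \<in> germ X C x' f"
proof -
  from germ_open[OF assms] obtain W where "openin X W \<and> x \<in> W \<and> W \<subseteq> sdom C f \<inter> sdom C g \<and> (\<forall>x'\<in>W. g \<in> germ X C x' f)"
    by (rule exE)
  then show ?thesis using that by (elim conjE) assumption
qed

lemma openin_germ_eq: "f \<in> smor C \<Longrightarrow> g \<in> smor C \<Longrightarrow> scod C f = scod C g \<Longrightarrow>
   openin X {x \<in> sdom C f \<inter> sdom C g. germ X C x f = germ X C x g}"
proof (subst openin_subopen, intro ballI)
  assume a: "f \<in> smor C" "g \<in> smor C" "scod C f = scod C g"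
  fix x assume x: "x \<in> {x \<in> sdom C f \<inter> sdom C g. germ X C x f = germ X C x g}"
  then have xx: "x \<in> sdom C f" "x \<in> sdom C g" "germ X C x f = germ X C x g" by auto
  have "g \<in> germ X C x f" by (rule iffD1[OF germ_eq_iff[OF a(1,2) xx(1,2)] xx(3)])
  then obtain W where W: "openin X W" "x \<in> W" "W \<subseteq> sdom C f \<inter> sdom C g" "\<forall>x'\<in>W. g \<in> germ X C x' f"
    by (rule germ_openE)
  have "W \<subseteq> {x \<in> sdom C f \<inter> sdom C g. germ X C x f = germ X C x g}"
  proof
    fix x' assume x': "x' \<in> W"
    then have "germ X C x' f = germ X C x' g" using W(4) germ_eqI[OF a(1)] by simp
    then show "x' \<in> {x \<in> sdom C f \<inter> sdom C g. germ X C x f = germ X C x g}" using x' W(3) by auto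
  qed
  then show "\<exists>T. openin X T \<and> x \<in> T \<and> T \<subseteq> {x \<in> sdom C f \<inter> sdom C g. germ X C x f = germ X C x g}"
    using W by blast
qed

lemma star_basic_Int: "global_mor f \<Longrightarrow> global_mor g \<Longrightarrow> m \<in> star_basic X C f \<Longrightarrow> m \<in> star_basic X C g \<Longrightarrow>
   \<exists>h. global_mor h \<and> m \<in> star_basic X C h \<and> star_basic X C h \<subseteq> star_basic X C f \<inter> star_basic X C g"
proof -
  assume f: "global_mor f" and g: "global_mor g" and mf: "m \<in> star_basic X C f" and mg: "m \<in> star_basic X C g"
  define N where "N = {x \<in> sdom C f \<inter> sdom C g. germ X C x f = germ X C x g}"
  have N: "openin X N" unfolding N_def using openin_germ_eq f g by simp
  have Nf: "N \<subseteq> sdom C f" unfolding N_def by auto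
  define h where "h = restr f N"
  have h: "global_mor h" "sdom C h = N" unfolding h_def using restr_hom f N Nf by auto
  have gh: "\<And>x. x \<in> N \<Longrightarrow> germ X C x h = germ X C x f \<and> germ X C x h = germ X C x g"
    unfolding h_def using germ_restr_eq f N Nf unfolding N_def by auto
  have "fst m \<in> N" using mf mg unfolding star_basic_iff N_def by auto
  then have "m \<in> star_basic X C h" using mf gh unfolding star_basic_iff h(2) by auto
  moreover have "star_basic X C h \<subseteq> star_basic X C f \<inter> star_basic X C g"
  proof
    fix m' assume "m' \<in> star_basic X C h"
    then have m': "m' \<in> star_mor X C" "fst m' \<in> N" "snd (snd m') (topspace X) = germ X C (fst m') h"
      unfolding star_basic_iff h(2) by auto
    have "fst m' \<in> sdom C f" "fst m' \<in> sdom C g" using m'(2) unfolding N_def by auto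
    moreover have e: "germ X C (fst m') f = germ X C (fst m') g" "germ X C (fst m') h = germ X C (fst m') f"
      using gh[OF m'(2)] by auto
    ultimately show "m' \<in> star_basic X C f \<inter> star_basic X C g" using m' by (simp add: star_basic_iff)
  qed
  ultimately show ?thesis using h by blast
qed

lemma star_basic_restr_to_top:
  assumes f: "f \<in> smor C" and N: "openin X N" "N \<subseteq> sdom C f"
  shows "global_mor (restr (to_top f) N)"
    and "star_basic X C (restr (to_top f) N) =
      {(x, y, \<phi>) \<in> star_mor X C. x \<in> N \<and> y \<in> scod C f \<and> \<phi> (scod C f) = germ X C x f}"
proof -
  have e: "to_top f \<in> smor C" "sdom C (to_top f) = sdom C f" "scod C (to_top f) = topspace X"
    using to_top_mor[OF f] by auto
  show "global_mor (restr (to_top f) N)" using restr_hom[OF e(1) N(1)] e N by auto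
  have dom: "sdom C (restr (to_top f) N) = N" using restr_hom[OF e(1) N(1)] e N by auto
  have iff: "(x, y, \<phi>) \<in> star_basic X C (restr (to_top f) N) \<longleftrightarrow>
      (x, y, \<phi>) \<in> star_mor X C \<and> x \<in> N \<and> y \<in> scod C f \<and> \<phi> (scod C f) = germ X C x f" for x y \<phi>
  proof (cases "(x, y, \<phi>) \<in> star_mor X C \<and> x \<in> N")
    case True
    then have "\<phi> \<in> stalk2 X C x y" "y \<in> topspace X" "x \<in> sdom C f" using star_mor_iff N(2) by auto
    moreover have "germ X C x (restr (to_top f) N) = germ X C x (to_top f)"
      using germ_restr_eq[OF e(1) N(1)] e N True by auto
    ultimately show ?thesis using True stalk2_top_iff[OF _ _ f] by (simp add: star_basic_iff dom)
  next
    case False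
    then show ?thesis by (auto simp: star_basic_iff dom)
  qed
  show "star_basic X C (restr (to_top f) N) =
      {(x, y, \<phi>) \<in> star_mor X C. x \<in> N \<and> y \<in> scod C f \<and> \<phi> (scod C f) = germ X C x f}"
  proof (intro set_eqI)
    fix m show "m \<in> star_basic X C (restr (to_top f) N) \<longleftrightarrow>
      m \<in> {(x, y, \<phi>) \<in> star_mor X C. x \<in> N \<and> y \<in> scod C f \<and> \<phi> (scod C f) = germ X C x f}"
      by (cases m) (simp add: iff)
  qed
qed

lemma openin_star_top_iff: "openin (star_top X C) A \<longleftrightarrow>
   A \<subseteq> star_mor X C \<and> (\<forall>m\<in>A. \<exists>f. global_mor f \<and> m \<in> star_basic X C f \<and> star_basic X C f \<subseteq> A)"
proof
  assume A: "openin (star_top X C) A"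
  then obtain B where B: "openin (topology_generated_by star_basis) B" "A = B \<inter> star_mor X C"
    unfolding star_top_eq openin_subtopology by blast
  have "generate_topology_on star_basis B" using B(1) openin_topology_generated_by by blast
  then have "\<forall>m\<in>B \<inter> star_mor X C. \<exists>f. global_mor f \<and> m \<in> star_basic X C f \<and> star_basic X C f \<subseteq> B"
  proof induct
    case Empty then show ?case by simp
  next
    case (Int a b)
    show ?case
    proof
      fix m assume m: "m \<in> a \<inter> b \<inter> star_mor X C"
      obtain f1 where f1: "global_mor f1" "m \<in> star_basic X C f1" "star_basic X C f1 \<subseteq> a" using Int m by blast
      obtain f2 where f2: "global_mor f2" "m \<in> star_basic X C f2" "star_basic X C f2 \<subseteq> b" using Int m by blast
      obtain h where "global_mor h" "m \<in> star_basic X C h" "star_basic X C h \<subseteq> star_basic X C f1 \<inter> star_basic X C f2"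
        using star_basic_Int[OF f1(1) f2(1) f1(2) f2(2)] by blast
      then show "\<exists>f. global_mor f \<and> m \<in> star_basic X C f \<and> star_basic X C f \<subseteq> a \<inter> b" using f1 f2 by blast
    qed
  next
    case (UN K) then show ?case by blast
  next
    case (Basis s)
    then obtain f where "global_mor f" "s = star_basic X C f" unfolding star_basis_def using shom_top_iff by blast
    then show ?case by blast
  qed
  then show "A \<subseteq> star_mor X C \<and> (\<forall>m\<in>A. \<exists>f. global_mor f \<and> m \<in> star_basic X C f \<and> star_basic X C f \<subseteq> A)"
    using B(2) star_basic_subset by blast
next
  assume A: "A \<subseteq> star_mor X C \<and> (\<forall>m\<in>A. \<exists>f. global_mor f \<and> m \<in> star_basic X C f \<and> star_basic X C f \<subseteq> A)"
  have "openin (star_top X C) (\<Union>{star_basic X C f | f. global_mor f \<and> star_basic X C f \<subseteq> A})"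
    using openin_star_basic by (intro openin_Union) blast
  moreover have "\<Union>{star_basic X C f | f. global_mor f \<and> star_basic X C f \<subseteq> A} = A" using A by blast
  ultimately show "openin (star_top X C) A" by simp
qed

lemma continuous_map_into_star_top:
  assumes "\<And>z. z \<in> topspace T \<Longrightarrow> h z \<in> star_mor X C"
    and "\<And>f. global_mor f \<Longrightarrow> openin T {z \<in> topspace T. h z \<in> star_basic X C f}"
  shows "continuous_map T (star_top X C) h"
  unfolding star_top_eq
proof (rule continuous_map_into_subtopology)
  show "h \<in> topspace T \<rightarrow> star_mor X C" using assms(1) by blast
  show "continuous_map T (topology_generated_by star_basis) h"
  proof (rule continuous_on_generated_topo)
    fix U assume "U \<in> star_basis"
    then obtain f where f: "global_mor f" "U = star_basic X C f" unfolding star_basis_def using shom_top_iff by blast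
    have "h -` U \<inter> topspace T = {z \<in> topspace T. h z \<in> star_basic X C f}" using f by auto
    then show "openin T (h -` U \<inter> topspace T)" using assms(2) f by simp
  next
    show "h ` topspace T \<subseteq> \<Union>star_basis"
    proof
      fix m assume "m \<in> h ` topspace T"
      then have "m \<in> star_mor X C" using assms(1) by blast
      then obtain f where "global_mor f" "m \<in> star_basic X C f" using star_basic_cover by blast
      then show "m \<in> \<Union>star_basis" unfolding star_basis_def using shom_top_iff by blast
    qed
  qed
qed

lemma star_inv_spec: "(x, y, \<phi>) \<in> star_mor X C \<Longrightarrow> \<exists>\<psi>. star_inv X C (x, y, \<phi>) = (y, x, \<psi>) \<and> \<psi> \<in> stalk2 X C y x \<and>
   star_cmp_fam X C x y x \<psi> \<phi> = star_idfam X C x \<and> star_cmp_fam X C y x y \<phi> \<psi> = star_idfam X C y"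
proof -
  assume m: "(x, y, \<phi>) \<in> star_mor X C"
  let ?P = "\<lambda>\<psi>. \<psi> \<in> stalk2 X C y x \<and>
   star_cmp_fam X C x y x \<psi> \<phi> = star_idfam X C x \<and> star_cmp_fam X C y x y \<phi> \<psi> = star_idfam X C y"
  have "\<exists>\<psi>. ?P \<psi>" using star_inverse_ex[OF m] by auto
  then have "?P (SOME \<psi>. ?P \<psi>)" by (rule someI_ex)
  moreover have "star_inv X C (x, y, \<phi>) = (y, x, SOME \<psi>. ?P \<psi>)" unfolding star_inv_def by simp
  ultimately show ?thesis by blast
qed

lemma star_inv_eqI: "(x, y, \<phi>) \<in> star_mor X C \<Longrightarrow> \<theta> \<in> stalk2 X C y x \<Longrightarrow>
   star_cmp_fam X C x y x \<theta> \<phi> = star_idfam X C x \<Longrightarrow> star_inv X C (x, y, \<phi>) = (y, x, \<theta>)"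
proof -
  assume m: "(x, y, \<phi>) \<in> star_mor X C" and t: "\<theta> \<in> stalk2 X C y x" "star_cmp_fam X C x y x \<theta> \<phi> = star_idfam X C x"
  obtain \<psi> where p: "star_inv X C (x, y, \<phi>) = (y, x, \<psi>)" "\<psi> \<in> stalk2 X C y x"
     "star_cmp_fam X C y x y \<phi> \<psi> = star_idfam X C y" using star_inv_spec[OF m] by blast
  have "\<phi> \<in> stalk2 X C x y" using m star_mor_iff by blast
  then have "\<theta> = \<psi>" using star_inverse_unique[OF _ t(1) p(2) t(2) p(3)] by blast
  then show ?thesis using p by simp
qed

lemma star_inv_mor: "(x, y, \<phi>) \<in> star_mor X C \<Longrightarrow> star_inv X C (x, y, \<phi>) \<in> star_mor X C"
proof -
  assume m: "(x, y, \<phi>) \<in> star_mor X C"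
  obtain \<psi> where p: "star_inv X C (x, y, \<phi>) = (y, x, \<psi>)" "\<psi> \<in> stalk2 X C y x" using star_inv_spec[OF m] by blast
  then show ?thesis using m star_mor_iff by simp
qed

lemma star_inv_inv: "m \<in> star_mor X C \<Longrightarrow> star_inv X C (star_inv X C m) = m"
proof -
  assume m: "m \<in> star_mor X C"
  obtain x y \<phi> where e: "m = (x, y, \<phi>)" by (cases m) auto
  have m': "(x, y, \<phi>) \<in> star_mor X C" using m e by simp
  obtain \<psi> where p: "star_inv X C (x, y, \<phi>) = (y, x, \<psi>)" "\<psi> \<in> stalk2 X C y x"
     "star_cmp_fam X C y x y \<phi> \<psi> = star_idfam X C y" using star_inv_spec[OF m'] by blast
  have "(y, x, \<psi>) \<in> star_mor X C" using star_inv_mor[OF m'] p by simp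
  then have "star_inv X C (y, x, \<psi>) = (x, y, \<phi>)"
    using star_inv_eqI[of y x \<psi> \<phi>] p m' star_mor_iff by blast
  then show ?thesis using e p by simp
qed

lemma star_cmp_eq: "star_cmp X C (y', z, \<psi>) (x, y, \<phi>) = (x, z, star_cmp_fam X C x y z \<psi> \<phi>)"
  unfolding star_cmp_def by simp

lemma star_cmp_mor: "(y, z, \<psi>) \<in> star_mor X C \<Longrightarrow> (x, y, \<phi>) \<in> star_mor X C \<Longrightarrow>
   (x, z, star_cmp_fam X C x y z \<psi> \<phi>) \<in> star_mor X C"
  using star_cmp_fam_stalk2 star_mor_iff by simp

lemma star_unit_mor: "x \<in> topspace X \<Longrightarrow> star_unit X C x \<in> star_mor X C"
  unfolding star_unit_def using star_idfam_stalk2 star_mor_iff by simp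

lemma star_mor_cases: "m \<in> star_mor X C \<Longrightarrow> (\<And>x y \<phi>. m = (x, y, \<phi>) \<Longrightarrow> x \<in> topspace X \<Longrightarrow> y \<in> topspace X \<Longrightarrow>
    \<phi> \<in> stalk2 X C x y \<Longrightarrow> P) \<Longrightarrow> P"
  using star_mor_iff by (cases m) auto

lemma continuous_star_src: "continuous_map (star_top X C) X star_src"
  unfolding continuous_map_def
proof (intro conjI allI impI)
  show "star_src \<in> topspace (star_top X C) \<rightarrow> topspace X"
    unfolding topspace_star_top star_src_def using star_mor_iff by auto
  fix Op assume Op: "openin X Op"
  show "openin (star_top X C) {m \<in> topspace (star_top X C). star_src m \<in> Op}"
    unfolding openin_star_top_iff topspace_star_top
  proof (intro conjI ballI)
    show "{m \<in> star_mor X C. star_src m \<in> Op} \<subseteq> star_mor X C" by blast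
    fix m assume m: "m \<in> {m \<in> star_mor X C. star_src m \<in> Op}"
    then obtain f where f: "global_mor f" "m \<in> star_basic X C f" using star_basic_cover by blast
    have of: "openin X (sdom C f)" using f mor_open by blast
    define h where "h = restr f (Op \<inter> sdom C f)"
    have h: "global_mor h" "sdom C h = Op \<inter> sdom C f" unfolding h_def using restr_hom[of f "Op \<inter> sdom C f"] f Op of by auto
    have "fst m \<in> Op" using m unfolding star_src_def by simp
    then have "m \<in> star_basic X C h"
      using f(2) germ_restr_eq[of f "Op \<inter> sdom C f" "fst m"] f Op of h(2) openin_Int[OF Op of] unfolding h_def star_basic_iff by auto
    moreover have "star_basic X C h \<subseteq> {m \<in> star_mor X C. star_src m \<in> Op}"
      using h by (auto simp: star_basic_iff star_src_def)
    ultimately show "\<exists>f. global_mor f \<and> m \<in> star_basic X C f \<and> star_basic X C f \<subseteq> {m \<in> star_mor X C. star_src m \<in> Op}"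
      using h by blast
  qed
qed

lemma continuous_star_unit: "continuous_map X (star_top X C) (star_unit X C)"
proof (rule continuous_map_into_star_top)
  show "\<And>z. z \<in> topspace X \<Longrightarrow> star_unit X C z \<in> star_mor X C" using star_unit_mor by blast
  fix f assume f: "global_mor f"
  have d: "sidn C (topspace X) \<in> smor C" "sdom C (sidn C (topspace X)) = topspace X" "scod C (sidn C (topspace X)) = topspace X"
    using idn_hom openin_topspace by auto
  have "{z \<in> topspace X. star_unit X C z \<in> star_basic X C f} =
     {x \<in> sdom C (sidn C (topspace X)) \<inter> sdom C f. germ X C x (sidn C (topspace X)) = germ X C x f}"
  proof (intro Collect_cong iffI)
    fix z assume "z \<in> topspace X \<and> star_unit X C z \<in> star_basic X C f"
    then show "z \<in> sdom C (sidn C (topspace X)) \<inter> sdom C f \<and> germ X C z (sidn C (topspace X)) = germ X C z f"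
      unfolding star_basic_iff star_unit_def star_idfam_def using d by auto
  next
    fix z assume z: "z \<in> sdom C (sidn C (topspace X)) \<inter> sdom C f \<and> germ X C z (sidn C (topspace X)) = germ X C z f"
    then have "z \<in> topspace X" using d by auto
    then show "z \<in> topspace X \<and> star_unit X C z \<in> star_basic X C f"
      unfolding star_basic_iff using z star_unit_mor unfolding star_unit_def star_idfam_def by auto
  qed
  then show "openin X {z \<in> topspace X. star_unit X C z \<in> star_basic X C f}"
    using openin_germ_eq[of "sidn C (topspace X)" f] d f by simp
qed

lemma star_inv_in_basic:
  assumes m: "(x, y, \<phi>) \<in> star_mor X C" and g: "global_mor g" "y \<in> sdom C g"
    and f: "represents x \<phi> (sdom C g) f"
    and unit: "germ X C x (scmp C g f) = germ X C x (sidn C (topspace X))"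
  shows "star_inv X C (x, y, \<phi>) \<in> star_basic X C g"
proof -
  have s: "x \<in> topspace X" "\<phi> \<in> stalk2 X C x y" using m star_mor_iff by auto
  obtain w \<theta> where \<theta>: "w \<in> topspace X" "\<theta> \<in> stalk2 X C y w" "\<theta> (topspace X) = germ X C y g"
    using stalk_surj[OF openin_topspace _ _ g(2)] g(1) by blast
  have c: "composable_reps x y \<theta> \<phi> (topspace X) g f"
    using g \<theta> f unfolding composable_reps_def represents_def by auto
  have "star_cmp_fam X C x y w \<theta> \<phi> (topspace X) = star_idfam X C x (topspace X)"
    using star_cmp_fam_eq[OF \<theta>(2) s(2) openin_topspace \<theta>(1) c] unit s(1) unfolding star_idfam_def by simp
  then have "w = x \<and> star_cmp_fam X C x y w \<theta> \<phi> = star_idfam X C x"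
    by (rule stalk_inj[OF openin_topspace s(1) \<theta>(1) s(1) star_cmp_fam_stalk2[OF \<theta>(2) s(2)] star_idfam_stalk2])
  then have "star_inv X C (x, y, \<phi>) = (y, x, \<theta>)" using star_inv_eqI[OF m] \<theta> by auto
  then show ?thesis using star_inv_mor[OF m] \<theta> g(2) unfolding star_basic_iff by auto
qed

lemma star_inv_nbhd:
  assumes m0: "m0 \<in> star_mor X C" and g: "global_mor g" and ig: "star_inv X C m0 \<in> star_basic X C g"
  shows "\<exists>h. global_mor h \<and> m0 \<in> star_basic X C h \<and> (\<forall>m\<in>star_basic X C h. star_inv X C m \<in> star_basic X C g)"
proof -
  obtain x y \<phi> where e: "m0 = (x, y, \<phi>)" "x \<in> topspace X" "\<phi> \<in> stalk2 X C x y"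
    using star_mor_cases[OF m0] by metis
  obtain \<psi> where \<psi>: "star_inv X C (x, y, \<phi>) = (y, x, \<psi>)" "\<psi> \<in> stalk2 X C y x"
    "star_cmp_fam X C x y x \<psi> \<phi> = star_idfam X C x" using star_inv_spec m0 e by blast
  have y: "y \<in> sdom C g" "\<psi> (topspace X) = germ X C y g" using ig \<psi> e unfolding star_basic_iff by auto
  obtain f where f: "represents x \<phi> (sdom C g) f" using stalk2_represents[OF e(3) _ y(1)] g mor_open by blast
  have fm: "f \<in> smor C" "scod C f = sdom C g" "x \<in> sdom C f" using f unfolding represents_def by auto
  have gf: "scmp C g f \<in> smor C" "sdom C (scmp C g f) = sdom C f" "scod C (scmp C g f) = topspace X"
    using cmp_hom fm g by auto
  have idX: "sidn C (topspace X) \<in> smor C" "sdom C (sidn C (topspace X)) = topspace X"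
    "scod C (sidn C (topspace X)) = topspace X" using idn_hom by auto
  define N where "N = {z \<in> sdom C (scmp C g f) \<inter> sdom C (sidn C (topspace X)).
    germ X C z (scmp C g f) = germ X C z (sidn C (topspace X))}"
  have N: "openin X N" "N \<subseteq> sdom C f" unfolding N_def
    by (rule openin_germ_eq, use gf idX in auto)
  have "composable_reps x y \<psi> \<phi> (topspace X) g f" using g y f unfolding composable_reps_def represents_def by auto
  then have "germ X C x (scmp C g f) = germ X C x (sidn C (topspace X))"
    using star_cmp_fam_eq[OF \<psi>(2) e(3) openin_topspace e(2)] \<psi>(3) e(2) unfolding star_idfam_def by simp
  then have xN: "x \<in> N" unfolding N_def using gf idX fm e by auto
  define h where "h = restr (to_top f) N"
  have B: "star_basic X C h = {(x, y, \<phi>) \<in> star_mor X C. x \<in> N \<and> y \<in> sdom C g \<and> \<phi> (sdom C g) = germ X C x f}"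
    using star_basic_restr_to_top(2)[OF fm(1) N] fm unfolding h_def by simp
  show ?thesis
  proof (intro exI conjI ballI)
    show "h \<in> smor C" "scod C h = topspace X" using star_basic_restr_to_top(1)[OF fm(1) N] unfolding h_def by auto
    show "m0 \<in> star_basic X C h" using B m0 e xN y f unfolding represents_def by auto
    fix m assume "m \<in> star_basic X C h"
    then obtain x' y' \<phi>' where m: "m = (x', y', \<phi>')" "(x', y', \<phi>') \<in> star_mor X C" "x' \<in> N" "y' \<in> sdom C g"
      "\<phi>' (sdom C g) = germ X C x' f" using B by auto
    have "represents x' \<phi>' (sdom C g) f" using m fm N(2) unfolding represents_def by auto
    then show "star_inv X C m \<in> star_basic X C g"
      using star_inv_in_basic[OF m(2) g m(4)] m(1,3) unfolding N_def by auto
  qed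
qed

lemma continuous_star_inv: "continuous_map (star_top X C) (star_top X C) (star_inv X C)"
proof (rule continuous_map_into_star_top)
  show "\<And>z. z \<in> topspace (star_top X C) \<Longrightarrow> star_inv X C z \<in> star_mor X C"
    unfolding topspace_star_top using star_inv_mor star_mor_cases by metis
  fix g assume g: "global_mor g"
  show "openin (star_top X C) {z \<in> topspace (star_top X C). star_inv X C z \<in> star_basic X C g}"
    unfolding openin_star_top_iff topspace_star_top
  proof (intro conjI ballI)
    show "{z \<in> star_mor X C. star_inv X C z \<in> star_basic X C g} \<subseteq> star_mor X C" by blast
    fix m assume m: "m \<in> {z \<in> star_mor X C. star_inv X C z \<in> star_basic X C g}"
    obtain h where "global_mor h" "m \<in> star_basic X C h" "\<forall>m'\<in>star_basic X C h. star_inv X C m' \<in> star_basic X C g"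
      using star_inv_nbhd[of m g] m g by blast
    then show "\<exists>f. global_mor f \<and> m \<in> star_basic X C f \<and> star_basic X C f \<subseteq> {z \<in> star_mor X C. star_inv X C z \<in> star_basic X C g}"
      using star_basic_subset by blast
  qed
qed

lemma star_cmp_in_basic:
  assumes n: "(y, z, \<psi>) \<in> star_basic X C g" and m: "(x, y, \<phi>) \<in> star_mor X C" and g: "global_mor g"
    and f: "represents x \<phi> (sdom C g) f" and h: "x \<in> sdom C h" "germ X C x (scmp C g f) = germ X C x h"
  shows "star_cmp X C (y, z, \<psi>) (x, y, \<phi>) \<in> star_basic X C h"
proof -
  have n': "(y, z, \<psi>) \<in> star_mor X C" "y \<in> sdom C g" "\<psi> (topspace X) = germ X C y g"
    using n unfolding star_basic_iff by auto
  have s: "z \<in> topspace X" "\<psi> \<in> stalk2 X C y z" "\<phi> \<in> stalk2 X C x y" using n'(1) m star_mor_iff by auto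
  have "composable_reps x y \<psi> \<phi> (topspace X) g f"
    using g n' f unfolding composable_reps_def represents_def by auto
  then have "star_cmp_fam X C x y z \<psi> \<phi> (topspace X) = germ X C x h"
    using star_cmp_fam_eq[OF s(2,3) openin_topspace s(1)] h(2) by simp
  then show ?thesis
    using star_cmp_mor[OF n'(1) m] h(1) unfolding star_cmp_eq star_basic_iff by simp
qed

lemma star_cmp_nbhd:
  assumes n0: "(y, z, \<psi>) \<in> star_mor X C" and m0: "(x, y, \<phi>) \<in> star_mor X C" and h: "global_mor h"
    and c: "star_cmp X C (y, z, \<psi>) (x, y, \<phi>) \<in> star_basic X C h"
  shows "\<exists>g k. global_mor g \<and> global_mor k \<and> (y, z, \<psi>) \<in> star_basic X C g \<and> (x, y, \<phi>) \<in> star_basic X C k \<and>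
     (\<forall>n m. n \<in> star_basic X C g \<longrightarrow> m \<in> star_basic X C k \<longrightarrow> fst n = fst (snd m) \<longrightarrow>
        star_cmp X C n m \<in> star_basic X C h)"
proof -
  have s: "y \<in> topspace X" "z \<in> topspace X" "\<psi> \<in> stalk2 X C y z" "x \<in> topspace X" "\<phi> \<in> stalk2 X C x y"
    using n0 m0 star_mor_iff by auto
  have ch: "x \<in> sdom C h" "star_cmp_fam X C x y z \<psi> \<phi> (topspace X) = germ X C x h"
    using c unfolding star_cmp_eq star_basic_iff by auto
  obtain g where g: "represents y \<psi> (topspace X) g" using stalk2_represents[OF s(3) openin_topspace s(2)] by blast
  have gm: "global_mor g" "y \<in> sdom C g" using g unfolding represents_def by auto
  have ng: "(y, z, \<psi>) \<in> star_basic X C g" using n0 g unfolding represents_def star_basic_iff by simp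
  obtain f where f: "represents x \<phi> (sdom C g) f" using stalk2_represents[OF s(5) _ gm(2)] gm mor_open by blast
  have fm: "f \<in> smor C" "scod C f = sdom C g" "x \<in> sdom C f" using f unfolding represents_def by auto
  have gf: "scmp C g f \<in> smor C" "sdom C (scmp C g f) = sdom C f" "scod C (scmp C g f) = topspace X"
    using cmp_hom fm gm by auto
  define N where "N = {w \<in> sdom C (scmp C g f) \<inter> sdom C h. germ X C w (scmp C g f) = germ X C w h}"
  have N: "openin X N" "N \<subseteq> sdom C f" unfolding N_def
    by (rule openin_germ_eq, use gf h in auto)
  have "composable_reps x y \<psi> \<phi> (topspace X) g f" unfolding composable_reps_def using g f by simp
  then have "germ X C x (scmp C g f) = germ X C x h" using star_cmp_fam_eq[OF s(3,5) openin_topspace s(2)] ch by simp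
  then have xN: "x \<in> N" unfolding N_def using gf fm ch by auto
  define k where "k = restr (to_top f) N"
  have B: "star_basic X C k = {(x, y, \<phi>) \<in> star_mor X C. x \<in> N \<and> y \<in> sdom C g \<and> \<phi> (sdom C g) = germ X C x f}"
    using star_basic_restr_to_top(2)[OF fm(1) N] fm unfolding k_def by simp
  have "star_cmp X C n m \<in> star_basic X C h"
    if n: "n \<in> star_basic X C g" and m: "m \<in> star_basic X C k" and nm: "fst n = fst (snd m)" for n m
  proof -
    obtain x' y' \<phi>' where m': "m = (x', y', \<phi>')" "(x', y', \<phi>') \<in> star_mor X C" "x' \<in> N"
      "\<phi>' (sdom C g) = germ X C x' f" using m B by auto
    obtain z' \<psi>' where n': "n = (y', z', \<psi>')" using nm m'(1) by (metis prod.collapse fst_conv snd_conv)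
    have "represents x' \<phi>' (sdom C g) f" using m' fm N(2) unfolding represents_def by auto
    then show ?thesis using star_cmp_in_basic[OF n[unfolded n'] m'(2) gm(1)] m'(1,3) n' unfolding N_def by auto
  qed
  moreover have "(x, y, \<phi>) \<in> star_basic X C k" using B m0 xN gm f unfolding represents_def by auto
  moreover have "global_mor k" unfolding k_def using star_basic_restr_to_top(1)[OF fm(1) N] .
  ultimately show ?thesis using gm ng by blast
qed

lemma continuous_star_cmp: "continuous_map (subtopology (prod_topology (star_top X C) (star_top X C)) {(g, f). star_src g = star_tgt f})
     (star_top X C) (\<lambda>(g, f). star_cmp X C g f)"
  (is "continuous_map ?D _ _")
proof (rule continuous_map_into_star_top)
  have tD: "topspace ?D = (star_mor X C \<times> star_mor X C) \<inter> {(g, f). star_src g = star_tgt f}"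
    by (simp add: topspace_star_top)
  show "\<And>z. z \<in> topspace ?D \<Longrightarrow> (case z of (g, f) \<Rightarrow> star_cmp X C g f) \<in> star_mor X C"
  proof -
    fix z assume "z \<in> topspace ?D"
    then obtain n m where z: "z = (n, m)" "n \<in> star_mor X C" "m \<in> star_mor X C" "fst n = fst (snd m)"
      by (auto simp: topspace_star_top star_src_def star_tgt_def)
    obtain x y \<phi> where e: "m = (x, y, \<phi>)" using prod_cases3 by blast
    obtain y2 z' \<psi> where e2: "n = (y2, z', \<psi>)" using prod_cases3 by blast
    show "(case z of (g, f) \<Rightarrow> star_cmp X C g f) \<in> star_mor X C"
      using star_cmp_mor[of y z' \<psi> x \<phi>] z e e2 by (simp add: star_cmp_eq)
  qed
  fix h assume h: "global_mor h"
  show "openin ?D {z \<in> topspace ?D. (case z of (g, f) \<Rightarrow> star_cmp X C g f) \<in> star_basic X C h}"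
  proof (subst openin_subopen, intro ballI)
    fix z assume zz: "z \<in> {z \<in> topspace ?D. (case z of (g, f) \<Rightarrow> star_cmp X C g f) \<in> star_basic X C h}"
    then obtain n m where z: "z = (n, m)" "n \<in> star_mor X C" "m \<in> star_mor X C" "fst n = fst (snd m)"
      "star_cmp X C n m \<in> star_basic X C h"
      by (auto simp: topspace_star_top star_src_def star_tgt_def)
    obtain x y \<phi> where e: "m = (x, y, \<phi>)" using prod_cases3 by blast
    obtain y2 z' \<psi> where e2: "n = (y2, z', \<psi>)" using prod_cases3 by blast
    have yy: "y2 = y" using z e e2 by simp
    obtain g k where gk: "global_mor g" "global_mor k" "n \<in> star_basic X C g" "m \<in> star_basic X C k"
      "\<forall>n' m'. n' \<in> star_basic X C g \<longrightarrow> m' \<in> star_basic X C k \<longrightarrow> fst n' = fst (snd m') \<longrightarrow>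
        star_cmp X C n' m' \<in> star_basic X C h"
      using star_cmp_nbhd[of y z' \<psi> x \<phi> h] z e e2 yy h by auto
    let ?U = "(star_basic X C g \<times> star_basic X C k) \<inter> {(g, f). star_src g = star_tgt f}"
    have "openin (prod_topology (star_top X C) (star_top X C)) (star_basic X C g \<times> star_basic X C k)"
      using openin_prod_Times_iff openin_star_basic gk by blast
    then have "openin ?D ?U" by (rule openin_subtopology_Int)
    moreover have "z \<in> ?U" using z gk unfolding star_src_def star_tgt_def by auto
    moreover have "?U \<subseteq> {z \<in> topspace ?D. (case z of (g, f) \<Rightarrow> star_cmp X C g f) \<in> star_basic X C h}"
      using gk star_basic_subset[THEN subsetD] by (auto simp: topspace_star_top star_src_def star_tgt_def)
    ultimately show "\<exists>T. openin ?D T \<and> z \<in> T \<and> T \<subseteq> {z \<in> topspace ?D. (case z of (g, f) \<Rightarrow> star_cmp X C g f) \<in> star_basic X C h}"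
      by blast
  qed
qed

lemma star_src_star_point: "f \<in> smor C \<Longrightarrow> x \<in> sdom C f \<Longrightarrow> star_src (star_point f x) = x"
  using star_point_props unfolding star_src_def by blast

lemma star_src_image_basic: "global_mor f \<Longrightarrow> star_src ` star_basic X C f = sdom C f"
  using star_src_star_point star_basic_eq_image by (simp add: image_image)

lemma inj_on_star_src_basic:
  assumes f: "global_mor f"
  shows "inj_on star_src (star_basic X C f)"
proof (rule inj_onI)
  fix a b assume "a \<in> star_basic X C f" "b \<in> star_basic X C f" and ab: "star_src a = star_src b"
  then obtain x x' where "x \<in> sdom C f" "x' \<in> sdom C f" "a = star_point f x" "b = star_point f x'"
    using star_basic_eq_image[OF f] by blast
  then show "a = b" using ab star_src_star_point f by metis
qed

lemma open_map_star_src: "open_map (star_top X C) X star_src"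
  unfolding open_map_def
proof (intro allI impI)
  fix U assume U: "openin (star_top X C) U"
  show "openin X (star_src ` U)"
  proof (subst openin_subopen, intro ballI)
    fix x assume "x \<in> star_src ` U"
    then obtain m where m: "m \<in> U" "x = star_src m" by blast
    obtain h where h: "global_mor h" "m \<in> star_basic X C h" "star_basic X C h \<subseteq> U"
      using U m(1) unfolding openin_star_top_iff by blast
    have "x \<in> sdom C h" "sdom C h \<subseteq> star_src ` U"
      using star_src_image_basic[OF h(1)] h(2,3) m(2) by blast+
    then show "\<exists>T. openin X T \<and> x \<in> T \<and> T \<subseteq> star_src ` U" using h(1) mor_open by blast
  qed
qed

text \<open>Basic open sets are bisections: on each of them the source map is injective and open.\<close>
lemma local_homeo_star_src: "local_homeo (star_top X C) X star_src"
  unfolding local_homeo_def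
proof (intro conjI ballI)
  show "continuous_map (star_top X C) X star_src" by (rule continuous_star_src)
  fix m assume "m \<in> topspace (star_top X C)"
  then obtain f where f: "global_mor f" "m \<in> star_basic X C f" using star_basic_cover topspace_star_top by blast
  let ?B = "star_basic X C f"
  have B: "openin (star_top X C) ?B" using openin_star_basic f by blast
  have img: "star_src ` ?B = sdom C f" by (rule star_src_image_basic[OF f(1)])
  have tB: "topspace (subtopology (star_top X C) ?B) = ?B"
    using star_basic_subset topspace_star_top by (simp add: topspace_subtopology Int_absorb1)
  have "homeomorphic_map (subtopology (star_top X C) ?B) (subtopology X (sdom C f)) star_src"
  proof (rule bijective_open_imp_homeomorphic_map)
    show "continuous_map (subtopology (star_top X C) ?B) (subtopology X (sdom C f)) star_src"
      by (rule continuous_map_into_subtopology[OF continuous_map_from_subtopology[OF continuous_star_src]])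
        (use img tB in auto)
    show "open_map (subtopology (star_top X C) ?B) (subtopology X (sdom C f)) star_src"
      by (rule open_map_into_subtopology[OF open_map_from_subtopology[OF open_map_star_src B]]) (use img tB in auto)
    have "sdom C f \<subseteq> topspace X" using f(1) mor_open openin_subset by blast
    then show "star_src ` topspace (subtopology (star_top X C) ?B) = topspace (subtopology X (sdom C f))"
      using img tB by (auto simp: topspace_subtopology)
    show "inj_on star_src (topspace (subtopology (star_top X C) ?B))"
      using inj_on_star_src_basic[OF f(1)] tB by simp
  qed
  then show "\<exists>W. openin (star_top X C) W \<and> m \<in> W \<and> openin X (star_src ` W) \<and>
     homeomorphic_map (subtopology (star_top X C) W) (subtopology X (star_src ` W)) star_src"
    using B f(2) img f(1) mor_open by auto
qed

lemma star_tgt_eq_src_inv: "m \<in> star_mor X C \<Longrightarrow> star_tgt m = star_src (star_inv X C m)"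
proof -
  assume m: "m \<in> star_mor X C"
  obtain x y \<phi> where e: "m = (x, y, \<phi>)" using prod_cases3 by blast
  obtain \<psi> where "star_inv X C (x, y, \<phi>) = (y, x, \<psi>)" using star_inv_spec m e by blast
  then show ?thesis using e unfolding star_src_def star_tgt_def by simp
qed

lemma homeomorphic_star_inv: "homeomorphic_map (star_top X C) (star_top X C) (star_inv X C)"
  by (rule homeomorphic_map_involution[OF continuous_star_inv]) (simp add: star_inv_inv topspace_star_top)

lemma continuous_star_tgt: "continuous_map (star_top X C) X star_tgt"
  by (rule continuous_map_eq[OF continuous_map_compose[OF continuous_star_inv continuous_star_src]]) (simp add: star_tgt_eq_src_inv topspace_star_top)

lemma local_homeo_star_tgt: "local_homeo (star_top X C) X star_tgt"
  by (rule local_homeo_via_involution[OF local_homeo_star_src homeomorphic_star_inv]) (simp_all add: star_inv_inv star_tgt_eq_src_inv topspace_star_top)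

theorem etale_groupoid_star: "etale_groupoid X (star_top X C) star_src star_tgt (star_unit X C) (star_inv X C) (star_cmp X C)"
  unfolding etale_groupoid_def topspace_star_top
proof (intro conjI ballI impI)
  fix x assume x: "x \<in> topspace X"
  show "star_unit X C x \<in> star_mor X C" using star_unit_mor x by blast
  show "star_src (star_unit X C x) = x" unfolding star_unit_def star_src_def by simp
  show "star_tgt (star_unit X C x) = x" unfolding star_unit_def star_tgt_def by simp
next
  fix f g assume f: "f \<in> star_mor X C" and g: "g \<in> star_mor X C" and st: "star_src g = star_tgt f"
  obtain a b \<phi> where e: "f = (a, b, \<phi>)" using prod_cases3 by blast
  obtain b' c \<psi> where e2: "g = (b', c, \<psi>)" using prod_cases3 by blast
  have bb: "b' = b" using st e e2 unfolding star_src_def star_tgt_def by simp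
  show "star_cmp X C g f \<in> star_mor X C" using star_cmp_mor[of b c \<psi> a \<phi>] f g e e2 bb by (simp add: star_cmp_eq)
  show "star_src (star_cmp X C g f) = star_src f" using e e2 by (simp add: star_cmp_eq star_src_def)
  show "star_tgt (star_cmp X C g f) = star_tgt g" using e e2 by (simp add: star_cmp_eq star_tgt_def)
next
  fix f g h assume f: "f \<in> star_mor X C" and g: "g \<in> star_mor X C" and h: "h \<in> star_mor X C"
    and st: "star_src g = star_tgt f \<and> star_src h = star_tgt g"
  obtain a b \<phi> where e: "f = (a, b, \<phi>)" using prod_cases3 by blast
  obtain b' c \<psi> where e2: "g = (b', c, \<psi>)" using prod_cases3 by blast
  obtain c' d \<theta> where e3: "h = (c', d, \<theta>)" using prod_cases3 by blast
  have bb: "b' = b" "c' = c" using st e e2 e3 unfolding star_src_def star_tgt_def by auto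
  have s: "\<phi> \<in> stalk2 X C a b" "\<psi> \<in> stalk2 X C b c" "\<theta> \<in> stalk2 X C c d" using f g h e e2 e3 bb star_mor_iff by auto
  show "star_cmp X C h (star_cmp X C g f) = star_cmp X C (star_cmp X C h g) f"
    using e e2 e3 bb star_cmp_fam_assoc[OF s] by (simp add: star_cmp_eq)
next
  fix f assume f: "f \<in> star_mor X C"
  obtain a b \<phi> where e: "f = (a, b, \<phi>)" using prod_cases3 by blast
  have s: "\<phi> \<in> stalk2 X C a b" using f e star_mor_iff by auto
  show "star_cmp X C (star_unit X C (star_tgt f)) f = f"
    using e star_cmp_fam_idl[OF s] by (simp add: star_cmp_eq star_unit_def star_tgt_def)
  show "star_cmp X C f (star_unit X C (star_src f)) = f"
    using e star_cmp_fam_idr[OF s] by (simp add: star_cmp_eq star_unit_def star_src_def)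
  obtain \<psi> where p: "star_inv X C (a, b, \<phi>) = (b, a, \<psi>)" "\<psi> \<in> stalk2 X C b a"
   "star_cmp_fam X C a b a \<psi> \<phi> = star_idfam X C a" "star_cmp_fam X C b a b \<phi> \<psi> = star_idfam X C b"
    using star_inv_spec f e by blast
  show "star_inv X C f \<in> star_mor X C" using star_inv_mor f e by simp
  show "star_src (star_inv X C f) = star_tgt f" using p e by (simp add: star_src_def star_tgt_def)
  show "star_tgt (star_inv X C f) = star_src f" using p e by (simp add: star_src_def star_tgt_def)
  show "star_cmp X C (star_inv X C f) f = star_unit X C (star_src f)"
    using p e by (simp add: star_cmp_eq star_unit_def star_src_def)
  show "star_cmp X C f (star_inv X C f) = star_unit X C (star_tgt f)"
    using p e by (simp add: star_cmp_eq star_unit_def star_tgt_def)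
next
  show "continuous_map (star_top X C) X star_src" by (rule continuous_star_src)
  show "continuous_map (star_top X C) X star_tgt" by (rule continuous_star_tgt)
  show "continuous_map X (star_top X C) (star_unit X C)" by (rule continuous_star_unit)
  show "continuous_map (star_top X C) (star_top X C) (star_inv X C)" by (rule continuous_star_inv)
  show "continuous_map (subtopology (prod_topology (star_top X C) (star_top X C)) {(g, f). star_src g = star_tgt f})
     (star_top X C) (\<lambda>(g, f). star_cmp X C g f)" by (rule continuous_star_cmp)
  show "local_homeo (star_top X C) X star_src" by (rule local_homeo_star_src)
  show "local_homeo (star_top X C) X star_tgt" by (rule local_homeo_star_tgt)
qed

end

section \<open>A pseudogroup sheaf is the hat of its groupoid of germs\<close>

locale pseudogroup_sheaf_site = pre_pseudogroup_site X C for X :: "'a topology" and C :: "('a,'m) sitecat" +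
  assumes sheaf: "sheaf_cond X C"
begin

lemma sheaf_glue:
  assumes "openin X V" "openin X U" "\<forall>A\<in>\<U>. openin X A" "\<Union>\<U> = U" "\<forall>A\<in>\<U>. F A \<in> shom C A V"
    "\<forall>A\<in>\<U>. \<forall>B\<in>\<U>. scmp C (F A) (sinc C (A \<inter> B) A) = scmp C (F B) (sinc C (A \<inter> B) B)"
  shows "\<exists>!f. f \<in> shom C U V \<and> (\<forall>A\<in>\<U>. scmp C f (sinc C A U) = F A)"
  using sheaf[unfolded sheaf_cond_def, rule_format, of V U \<U> F] assms by blast

lemma shom_iff: "f \<in> shom C U V \<longleftrightarrow> f \<in> smor C \<and> sdom C f = U \<and> scod C f = V"
  unfolding shom_def by simp

lemma eq_if_germs_eq:
  assumes h: "h \<in> shom C U V" and h': "h' \<in> shom C U V"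
    and g: "\<And>x. x \<in> U \<Longrightarrow> germ X C x h = germ X C x h'"
  shows "h = h'"
proof -
  have hm: "h \<in> smor C" "sdom C h = U" "scod C h = V" "h' \<in> smor C" "sdom C h' = U" "scod C h' = V"
    using h h' shom_iff by auto
  have oU: "openin X U" "openin X V" using hm mor_open by auto
  define \<U> where "\<U> = {N. openin X N \<and> N \<subseteq> U \<and> restr h N = restr h' N}"
  have cov: "\<Union>\<U> = U"
  proof
    show "\<Union>\<U> \<subseteq> U" unfolding \<U>_def by blast
    show "U \<subseteq> \<Union>\<U>"
    proof
      fix x assume x: "x \<in> U"
      have "h' \<in> germ X C x h" using g[OF x] germ_refl hm x by metis
      then obtain W where "openin X W" "x \<in> W" "W \<subseteq> sdom C h \<inter> sdom C h'" "restr h W = restr h' W"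
        unfolding germ_iff by blast
      then show "x \<in> \<Union>\<U>" unfolding \<U>_def using hm by blast
    qed
  qed
  define F where "F A = restr h A" for A
  have op: "\<forall>A\<in>\<U>. openin X A" unfolding \<U>_def by blast
  have Fh: "\<forall>A\<in>\<U>. F A \<in> shom C A V" unfolding F_def \<U>_def shom_iff using restr_hom hm by auto
  have comp: "\<forall>A\<in>\<U>. \<forall>B\<in>\<U>. scmp C (F A) (sinc C (A \<inter> B) A) = scmp C (F B) (sinc C (A \<inter> B) B)"
  proof (intro ballI)
    fix A B assume A: "A \<in> \<U>" and B: "B \<in> \<U>"
    have AB: "openin X A" "openin X B" "A \<subseteq> U" "B \<subseteq> U" using A B unfolding \<U>_def by auto
    have dA: "sdom C (F A) = A" "sdom C (F B) = B" unfolding F_def using restr_hom hm AB by auto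
    have "scmp C (F A) (sinc C (A \<inter> B) A) = restr (F A) (A \<inter> B)"
      by (simp add: restr_def dA)
    also have "\<dots> = restr h (A \<inter> B)" unfolding F_def using restr_restr[of h A "A \<inter> B"] hm AB openin_Int[OF AB(1,2)] by auto
    also have "\<dots> = restr (F B) (A \<inter> B)" unfolding F_def using restr_restr[of h B "A \<inter> B"] hm AB openin_Int[OF AB(1,2)] by auto
    also have "\<dots> = scmp C (F B) (sinc C (A \<inter> B) B)"
      by (simp add: restr_def dA)
    finally show "scmp C (F A) (sinc C (A \<inter> B) A) = scmp C (F B) (sinc C (A \<inter> B) B)" .
  qed
  have u: "\<exists>!f. f \<in> shom C U V \<and> (\<forall>A\<in>\<U>. scmp C f (sinc C A U) = F A)"
    using sheaf_glue[OF oU(2) oU(1) op cov Fh comp] .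
  have "\<forall>A\<in>\<U>. scmp C h (sinc C A U) = F A" unfolding F_def restr_def using hm by simp
  moreover have "\<forall>A\<in>\<U>. scmp C h' (sinc C A U) = F A" unfolding F_def \<U>_def restr_def using hm by simp
  ultimately show ?thesis using u h h' by blast
qed

lemma star_point_germ: "h \<in> smor C \<Longrightarrow> h' \<in> smor C \<Longrightarrow> scod C h = scod C h' \<Longrightarrow> x \<in> sdom C h \<Longrightarrow> x \<in> sdom C h' \<Longrightarrow>
   germ X C x h = germ X C x h' \<Longrightarrow> star_point h x = star_point h' x"
proof -
  assume a: "h \<in> smor C" "h' \<in> smor C" "scod C h = scod C h'" "x \<in> sdom C h" "x \<in> sdom C h'"
    "germ X C x h = germ X C x h'"
  have p: "fst (snd (star_point h x)) \<in> scod C h" "snd (snd (star_point h x)) \<in> stalk2 X C x (fst (snd (star_point h x)))"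
    "snd (snd (star_point h x)) (scod C h) = germ X C x h" "fst (star_point h x) = x" using star_point_props[OF a(1,4)] by auto
  have "star_point h' x = (x, fst (snd (star_point h x)), snd (snd (star_point h x)))"
    using star_point_unique[OF a(2,5)] p a by simp
  then show ?thesis using p by (simp add: prod_eq_iff)
qed

lemma star_point_eq_germ: "h \<in> smor C \<Longrightarrow> h' \<in> smor C \<Longrightarrow> scod C h = scod C h' \<Longrightarrow> x \<in> sdom C h \<Longrightarrow> x \<in> sdom C h' \<Longrightarrow>
   star_point h x = star_point h' x \<Longrightarrow> germ X C x h = germ X C x h'"
  using star_point_props by metis

abbreviation Cstar_hat where "Cstar_hat \<equiv> hat_cat X (star_top X C) star_src star_tgt (star_unit X C) (star_cmp X C)"

lemma Cstar_hat_mor_iff: "(U, V, \<sigma>) \<in> smor Cstar_hat \<longleftrightarrow> openin X U \<and> openin X V \<and> \<sigma> \<in> extensional U \<and>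
   continuous_map (subtopology X U) (subtopology (star_top X C) {g \<in> topspace (star_top X C). star_tgt g \<in> V}) \<sigma> \<and>
   (\<forall>x\<in>U. star_src (\<sigma> x) = x)"
  unfolding hat_cat_def by simp

definition star_section :: "'m \<Rightarrow> 'a set \<times> 'a set \<times> ('a \<Rightarrow> 'a \<times> 'a \<times> ('a set \<Rightarrow> 'm set))" where
  "star_section h = (sdom C h, scod C h, restrict (star_point h) (sdom C h))"

lemma star_section_mor: "h \<in> smor C \<Longrightarrow> star_section h \<in> smor Cstar_hat"
proof -
  assume h: "h \<in> smor C"
  define U where "U = sdom C h"
  define V where "V = scod C h"
  have oU: "openin X U" "openin X V" using h mor_open unfolding U_def V_def by auto
  have UX: "U \<subseteq> topspace X" "V \<subseteq> topspace X" using oU openin_subset by auto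
  have tU: "topspace (subtopology X U) = U" using UX by (simp add: topspace_subtopology Int_absorb1)
  have ptp: "\<And>z. z \<in> U \<Longrightarrow> star_point h z \<in> star_mor X C \<and> star_src (star_point h z) = z \<and> star_tgt (star_point h z) \<in> V"
    using star_point_props[OF h] star_point_mor[OF h] unfolding U_def V_def star_src_def star_tgt_def by auto
  define ee where "ee = to_top h"
  have ee: "global_mor ee" "sdom C ee = U" unfolding ee_def U_def using to_top_mor[OF h] by auto
  have ptX: "\<And>z. z \<in> U \<Longrightarrow> snd (snd (star_point h z)) (topspace X) = germ X C z ee"
    using star_point_top[OF h] unfolding ee_def U_def by simp
  have c1: "continuous_map (subtopology X U) (star_top X C) (restrict (star_point h) U)"
  proof (rule continuous_map_into_star_top)
    show "\<And>z. z \<in> topspace (subtopology X U) \<Longrightarrow> restrict (star_point h) U z \<in> star_mor X C" using ptp tU by simp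
    fix f assume f: "global_mor f"
    have "{z \<in> topspace (subtopology X U). restrict (star_point h) U z \<in> star_basic X C f} =
      {z \<in> sdom C ee \<inter> sdom C f. germ X C z ee = germ X C z f}"
    proof (intro Collect_cong iffI)
      fix z assume "z \<in> topspace (subtopology X U) \<and> restrict (star_point h) U z \<in> star_basic X C f"
      then show "z \<in> sdom C ee \<inter> sdom C f \<and> germ X C z ee = germ X C z f"
        using ptp ptX ee tU by (auto simp: star_basic_iff star_src_def)
    next
      fix z assume "z \<in> sdom C ee \<inter> sdom C f \<and> germ X C z ee = germ X C z f"
      then show "z \<in> topspace (subtopology X U) \<and> restrict (star_point h) U z \<in> star_basic X C f"
        using ptp ptX ee tU by (auto simp: star_basic_iff star_src_def)
    qed
    moreover have "openin X {z \<in> sdom C ee \<inter> sdom C f. germ X C z ee = germ X C z f}"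
      by (rule openin_germ_eq) (use ee f in auto)
    moreover have "{z \<in> sdom C ee \<inter> sdom C f. germ X C z ee = germ X C z f} \<subseteq> U" using ee by auto
    ultimately show "openin (subtopology X U) {z \<in> topspace (subtopology X U). restrict (star_point h) U z \<in> star_basic X C f}"
      using openin_open_subtopology[OF oU(1)] by simp
  qed
  have c2: "continuous_map (subtopology X U) (subtopology (star_top X C) {g \<in> topspace (star_top X C). star_tgt g \<in> V}) (restrict (star_point h) U)"
    by (rule continuous_map_into_subtopology[OF c1]) (use ptp tU topspace_star_top in auto)
  show ?thesis unfolding star_section_def U_def[symmetric] V_def[symmetric] Cstar_hat_mor_iff
    using oU c2 ptp by auto
qed

lemma star_section_inj: "h \<in> smor C \<Longrightarrow> h' \<in> smor C \<Longrightarrow> star_section h = star_section h' \<Longrightarrow> h = h'"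
proof -
  assume h: "h \<in> smor C" and h': "h' \<in> smor C" and e: "star_section h = star_section h'"
  have d: "sdom C h = sdom C h'" "scod C h = scod C h'" "restrict (star_point h) (sdom C h) = restrict (star_point h') (sdom C h)"
    using e unfolding star_section_def by auto
  have "\<And>x. x \<in> sdom C h \<Longrightarrow> germ X C x h = germ X C x h'"
  proof -
    fix x assume x: "x \<in> sdom C h"
    have "star_point h x = star_point h' x" using d(3) x by (metis restrict_apply')
    then show "germ X C x h = germ X C x h'" using star_point_eq_germ[OF h h' d(2) x] d(1) x by simp
  qed
  then show "h = h'" using eq_if_germs_eq[of h "sdom C h" "scod C h" h'] h h' d by (simp add: shom_iff)
qed

lemma star_section_local:
  assumes d: "(U, V, \<sigma>) \<in> smor Cstar_hat" and x: "x \<in> U"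
  shows "\<exists>N k. openin X N \<and> x \<in> N \<and> N \<subseteq> U \<and> k \<in> shom C N V \<and> (\<forall>z\<in>N. \<sigma> z = star_point k z)"
proof -
  have dd: "openin X U" "openin X V" "\<sigma> \<in> extensional U"
   "continuous_map (subtopology X U) (subtopology (star_top X C) {g \<in> topspace (star_top X C). star_tgt g \<in> V}) \<sigma>"
   "\<forall>x\<in>U. star_src (\<sigma> x) = x" using d Cstar_hat_mor_iff by auto
  have UX: "U \<subseteq> topspace X" "V \<subseteq> topspace X" using dd openin_subset by auto
  have tU: "topspace (subtopology X U) = U" using UX by (simp add: topspace_subtopology Int_absorb1)
  have sm: "\<And>z. z \<in> U \<Longrightarrow> \<sigma> z \<in> star_mor X C \<and> star_tgt (\<sigma> z) \<in> V \<and> star_src (\<sigma> z) = z"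
    using continuous_map_in_topspace[OF dd(4)] tU dd(5) by (auto simp: topspace_star_top)
  have c: "continuous_map (subtopology X U) (star_top X C) \<sigma>" using continuous_map_into_fulltopology[OF dd(4)] .
  obtain y \<phi> where e: "\<sigma> x = (x, y, \<phi>)" using sm[OF x] unfolding star_src_def by (metis prod.collapse)
  have s: "y \<in> V" "\<phi> \<in> stalk2 X C x y" "y \<in> topspace X" using sm[OF x] e star_mor_iff unfolding star_tgt_def by auto
  obtain k0 where k0: "represents x \<phi> V k0" using stalk2_represents[OF s(2) dd(2) s(1)] by blast
  have k0m: "k0 \<in> smor C" "scod C k0 = V" "x \<in> sdom C k0" "germ X C x k0 = \<phi> V" using k0 unfolding represents_def by auto
  define B where "B = star_basic X C (restr (to_top k0) (sdom C k0))"
  have B: "B = {(z, y, \<phi>) \<in> star_mor X C. z \<in> sdom C k0 \<and> y \<in> V \<and> \<phi> V = germ X C z k0}"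
    unfolding B_def using star_basic_restr_to_top(2)[OF k0m(1) _ order_refl] k0m mor_open by simp
  have "openin (star_top X C) B"
    unfolding B_def using openin_star_basic star_basic_restr_to_top(1)[OF k0m(1) _ order_refl] k0m mor_open by simp
  define N where "N = {z \<in> topspace (subtopology X U). \<sigma> z \<in> B}"
  have N: "openin X N" unfolding N_def
    using openin_trans_full[OF openin_continuous_map_preimage[OF c \<open>openin (star_top X C) B\<close>] dd(1)] .
  have xN: "x \<in> N" unfolding N_def B using x tU sm[OF x] e s k0m by auto
  have NU: "N \<subseteq> U" unfolding N_def using tU by auto
  have Nk: "N \<subseteq> sdom C k0" using sm tU unfolding N_def B star_src_def by fastforce
  have pz: "\<sigma> z = star_point k0 z" if z: "z \<in> N" for z
  proof -
    obtain y' \<phi>' where e': "\<sigma> z = (z, y', \<phi>')" using sm[of z] z NU unfolding star_src_def by (metis prod.collapse subsetD)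
    then show ?thesis using star_point_unique[OF k0m(1), of z y' \<phi>'] z Nk e' k0m star_mor_iff
      unfolding N_def B by auto
  qed
  define k where "k = restr k0 N"
  have k: "k \<in> shom C N V" unfolding k_def shom_iff using restr_hom[OF k0m(1) N Nk] k0m by simp
  have "\<forall>z\<in>N. \<sigma> z = star_point k z"
  proof
    fix z assume z: "z \<in> N"
    have km: "k \<in> smor C" "sdom C k = N" "scod C k = V" using k shom_iff by auto
    have "germ X C z k = germ X C z k0" unfolding k_def using germ_restr_eq[OF k0m(1) N Nk z] .
    then have "star_point k z = star_point k0 z" using star_point_germ[OF km(1) k0m(1)] km k0m z Nk by auto
    then show "\<sigma> z = star_point k z" using pz z by simp
  qed
  then show ?thesis using N xN NU k by blast
qed

lemma restr_Int_eq_if_star_points_eq: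
  assumes k: "k \<in> shom C A V" and k': "k' \<in> shom C B V"
    and eq: "\<And>z. z \<in> A \<inter> B \<Longrightarrow> star_point k z = star_point k' z"
  shows "scmp C k (sinc C (A \<inter> B) A) = scmp C k' (sinc C (A \<inter> B) B)"
proof -
  have km: "k \<in> smor C" "sdom C k = A" "scod C k = V" "k' \<in> smor C" "sdom C k' = B" "scod C k' = V"
    using k k' shom_iff by auto
  have oAB: "openin X (A \<inter> B)" using km mor_open by blast
  have "restr k (A \<inter> B) \<in> shom C (A \<inter> B) V" "restr k' (A \<inter> B) \<in> shom C (A \<inter> B) V"
    using restr_hom[OF km(1) oAB] restr_hom[OF km(4) oAB] km shom_iff by auto
  then have "restr k (A \<inter> B) = restr k' (A \<inter> B)"
  proof (rule eq_if_germs_eq)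
    fix z assume z: "z \<in> A \<inter> B"
    then have "germ X C z k = germ X C z k'" using star_point_eq_germ[OF km(1) km(4)] eq km by auto
    then show "germ X C z (restr k (A \<inter> B)) = germ X C z (restr k' (A \<inter> B))"
      using germ_restr_eq[OF km(1) oAB _ z] germ_restr_eq[OF km(4) oAB _ z] km by auto
  qed
  then show ?thesis unfolding restr_def using km by simp
qed

lemma star_section_surj: "d \<in> smor Cstar_hat \<Longrightarrow> \<exists>h\<in>smor C. star_section h = d"
proof -
  assume d0: "d \<in> smor Cstar_hat"
  obtain U V \<sigma> where e: "d = (U, V, \<sigma>)" using prod_cases3 by blast
  have d: "(U, V, \<sigma>) \<in> smor Cstar_hat" using d0 e by simp
  have dd: "openin X U" "openin X V" "\<sigma> \<in> extensional U" using d Cstar_hat_mor_iff by auto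
  define \<U> where "\<U> = {N. openin X N \<and> N \<subseteq> U \<and> (\<exists>k. k \<in> shom C N V \<and> (\<forall>z\<in>N. \<sigma> z = star_point k z))}"
  define F where "F A = (SOME k. k \<in> shom C A V \<and> (\<forall>z\<in>A. \<sigma> z = star_point k z))" for A
  have FA: "\<And>A. A \<in> \<U> \<Longrightarrow> F A \<in> shom C A V \<and> (\<forall>z\<in>A. \<sigma> z = star_point (F A) z)"
  proof -
    fix A assume "A \<in> \<U>"
    then have "\<exists>k. k \<in> shom C A V \<and> (\<forall>z\<in>A. \<sigma> z = star_point k z)" unfolding \<U>_def by blast
    then show "F A \<in> shom C A V \<and> (\<forall>z\<in>A. \<sigma> z = star_point (F A) z)" unfolding F_def by (rule someI_ex)
  qed
  have op: "\<forall>A\<in>\<U>. openin X A" unfolding \<U>_def by blast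
  have cov: "\<Union>\<U> = U"
  proof
    show "\<Union>\<U> \<subseteq> U" unfolding \<U>_def by blast
    show "U \<subseteq> \<Union>\<U>"
    proof
      fix x assume x: "x \<in> U"
      obtain N k where "openin X N" "x \<in> N" "N \<subseteq> U" "k \<in> shom C N V" "\<forall>z\<in>N. \<sigma> z = star_point k z"
        using star_section_local[OF d x] by blast
      then show "x \<in> \<Union>\<U>" unfolding \<U>_def by blast
    qed
  qed
  have Fh: "\<forall>A\<in>\<U>. F A \<in> shom C A V" using FA by blast
  have comp: "\<forall>A\<in>\<U>. \<forall>B\<in>\<U>. scmp C (F A) (sinc C (A \<inter> B) A) = scmp C (F B) (sinc C (A \<inter> B) B)"
    using FA by (intro ballI restr_Int_eq_if_star_points_eq) (blast, blast, metis IntD1 IntD2)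
  obtain h where h: "h \<in> shom C U V" "\<forall>A\<in>\<U>. scmp C h (sinc C A U) = F A"
    using sheaf_glue[OF dd(2) dd(1) op cov Fh comp] by blast
  have hm: "h \<in> smor C" "sdom C h = U" "scod C h = V" using h shom_iff by auto
  have pth: "\<And>z. z \<in> U \<Longrightarrow> star_point h z = \<sigma> z"
  proof -
    fix z assume z: "z \<in> U"
    then obtain A where A: "A \<in> \<U>" "z \<in> A" using cov by blast
    have AU: "openin X A" "A \<subseteq> U" using A unfolding \<U>_def by auto
    have fa: "F A \<in> smor C" "sdom C (F A) = A" "scod C (F A) = V" "\<forall>z\<in>A. \<sigma> z = star_point (F A) z" using FA[OF A(1)] shom_iff by auto
    have r: "restr h A = F A" using h(2) A(1) hm unfolding restr_def by simp
    have "germ X C z h = germ X C z (F A)" using germ_restr_eq[OF hm(1) AU(1) _ A(2)] r hm AU by simp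
    then have "star_point h z = star_point (F A) z" using star_point_germ[OF hm(1) fa(1)] hm fa z A by simp
    then show "star_point h z = \<sigma> z" using fa(4) A by simp
  qed
  have "restrict (star_point h) U = \<sigma>" using restrict_eqI[OF dd(3)] pth by metis
  then have "star_section h = d" unfolding star_section_def using hm e by simp
  then show ?thesis using hm by blast
qed

lemma Cstar_hat_cmp: "scmp Cstar_hat n m = (fst m, fst (snd n),
   restrict (\<lambda>x. star_cmp X C (snd (snd n) (star_tgt (snd (snd m) x))) (snd (snd m) x)) (fst m))"
  unfolding hat_cat_def by simp

lemma star_section_cmp: "h1 \<in> smor C \<Longrightarrow> h2 \<in> smor C \<Longrightarrow> sdom C h2 = scod C h1 \<Longrightarrow>
   star_section (scmp C h2 h1) = scmp Cstar_hat (star_section h2) (star_section h1)"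
proof -
  assume h1: "h1 \<in> smor C" and h2: "h2 \<in> smor C" and d: "sdom C h2 = scod C h1"
  have c: "scmp C h2 h1 \<in> smor C" "sdom C (scmp C h2 h1) = sdom C h1" "scod C (scmp C h2 h1) = scod C h2"
    using cmp_hom[OF h1 h2 d] by auto
  have pe: "\<And>x. x \<in> sdom C h1 \<Longrightarrow>
     star_cmp X C (restrict (star_point h2) (sdom C h2) (star_tgt (restrict (star_point h1) (sdom C h1) x))) (restrict (star_point h1) (sdom C h1) x)
     = star_point (scmp C h2 h1) x"
  proof -
    fix x assume x: "x \<in> sdom C h1"
    obtain y \<phi> where e1: "star_point h1 x = (x, y, \<phi>)" using star_point_props[OF h1 x] by (metis prod.collapse)
    have p1: "y \<in> scod C h1" "\<phi> \<in> stalk2 X C x y" "\<phi> (scod C h1) = germ X C x h1" using star_point_props[OF h1 x] e1 by auto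
    have yd: "y \<in> sdom C h2" using p1 d by simp
    obtain z \<psi> where e2: "star_point h2 y = (y, z, \<psi>)" using star_point_props[OF h2 yd] by (metis prod.collapse)
    have p2: "z \<in> scod C h2" "\<psi> \<in> stalk2 X C y z" "\<psi> (scod C h2) = germ X C y h2" using star_point_props[OF h2 yd] e2 by auto
    have oW: "openin X (scod C h2)" using h2 mor_open by blast
    have w: "composable_reps x y \<psi> \<phi> (scod C h2) h2 h1" unfolding composable_reps_def represents_def using h1 h2 d p1 p2 yd x by simp
    have sv: "star_cmp_fam X C x y z \<psi> \<phi> (scod C h2) = germ X C x (scmp C h2 h1)"
      using star_cmp_fam_eq[OF p2(2) p1(2) oW p2(1) w] .
    have "star_point (scmp C h2 h1) x = (x, z, star_cmp_fam X C x y z \<psi> \<phi>)"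
      using star_point_unique[OF c(1), of x z "star_cmp_fam X C x y z \<psi> \<phi>"] c x p2 star_cmp_fam_stalk2[OF p2(2) p1(2)] sv by simp
    then show "star_cmp X C (restrict (star_point h2) (sdom C h2) (star_tgt (restrict (star_point h1) (sdom C h1) x))) (restrict (star_point h1) (sdom C h1) x)
     = star_point (scmp C h2 h1) x"
      using x e1 e2 yd by (simp add: star_tgt_def star_cmp_eq)
  qed
  have r: "restrict (\<lambda>x. star_cmp X C (restrict (star_point h2) (sdom C h2) (star_tgt (restrict (star_point h1) (sdom C h1) x))) (restrict (star_point h1) (sdom C h1) x)) (sdom C h1) = restrict (star_point (scmp C h2 h1)) (sdom C h1)"
    by (rule restrict_ext) (rule pe)
  show ?thesis by (simp only: Cstar_hat_cmp star_section_def fst_conv snd_conv c(2,3) r)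
qed

lemma star_point_unit: "openin X V \<Longrightarrow> f \<in> smor C \<Longrightarrow> scod C f = V \<Longrightarrow> x \<in> sdom C f \<Longrightarrow> x \<in> V \<Longrightarrow>
   germ X C x f = germ X C x (sidn C V) \<Longrightarrow> star_point f x = star_unit X C x"
proof -
  assume a: "openin X V" "f \<in> smor C" "scod C f = V" "x \<in> sdom C f" "x \<in> V" "germ X C x f = germ X C x (sidn C V)"
  have "star_point f x = (x, x, star_idfam X C x)"
    using star_point_unique[OF a(2,4), of x "star_idfam X C x"] a star_idfam_stalk2 unfolding star_idfam_def by simp
  then show ?thesis unfolding star_unit_def .
qed

lemma star_section_idn: "openin X U \<Longrightarrow> star_section (sidn C U) = sidn Cstar_hat U"
proof -
  assume U: "openin X U"
  have d: "sidn C U \<in> smor C" "sdom C (sidn C U) = U" "scod C (sidn C U) = U" using idn_hom U by auto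
  have "\<And>x. x \<in> U \<Longrightarrow> star_point (sidn C U) x = star_unit X C x" using star_point_unit[OF U d(1)] d by simp
  then show ?thesis unfolding star_section_def hat_cat_def using d by (auto intro!: restrict_ext)
qed

lemma star_section_inc: "openin X U \<Longrightarrow> openin X V \<Longrightarrow> U \<subseteq> V \<Longrightarrow> star_section (sinc C U V) = sinc Cstar_hat U V"
proof -
  assume U: "openin X U" and V: "openin X V" and UV: "U \<subseteq> V"
  have d: "sinc C U V \<in> smor C" "sdom C (sinc C U V) = U" "scod C (sinc C U V) = V" using inc_hom U V UV by auto
  have "\<And>x. x \<in> U \<Longrightarrow> star_point (sinc C U V) x = star_unit X C x"
    using star_point_unit[OF V d(1)] d germ_inc_idn[OF U V UV] UV by auto
  then show ?thesis unfolding star_section_def hat_cat_def using d by (auto intro!: restrict_ext)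
qed

lemma bij_star_section: "bij_betw star_section (smor C) (smor Cstar_hat)"
  unfolding bij_betw_def
proof
  show "inj_on star_section (smor C)" using star_section_inj by (meson inj_onI)
  show "star_section ` smor C = smor Cstar_hat" using star_section_mor star_section_surj by blast
qed

theorem sitecat_iso_Cstar_hat: "\<exists>F. sitecat_iso X Cstar_hat C F"
proof -
  define F where "F = the_inv_into (smor C) star_section"
  have bF: "bij_betw F (smor Cstar_hat) (smor C)" unfolding F_def using bij_betw_the_inv_into[OF bij_star_section] .
  have inj: "inj_on star_section (smor C)" using bij_star_section bij_betw_def by blast
  have SF: "\<And>d. d \<in> smor Cstar_hat \<Longrightarrow> F d \<in> smor C \<and> star_section (F d) = d"
    unfolding F_def using bij_star_section f_the_inv_into_f_bij_betw the_inv_into_into[OF inj] bij_betw_def by (metis subset_refl)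
  have FS: "\<And>h. h \<in> smor C \<Longrightarrow> F (star_section h) = h" unfolding F_def using the_inv_into_f_f[OF inj] by blast
  have dc: "\<And>d. d \<in> smor Cstar_hat \<Longrightarrow> sdom C (F d) = sdom Cstar_hat d \<and> scod C (F d) = scod Cstar_hat d"
  proof -
    fix d assume d: "d \<in> smor Cstar_hat"
    obtain U V \<sigma> where e: "d = (U, V, \<sigma>)" using prod_cases3 by blast
    have "star_section (F d) = (U, V, \<sigma>)" using SF d e by blast
    then have "sdom C (F d) = U" "scod C (F d) = V" unfolding star_section_def by simp_all
    then show "sdom C (F d) = sdom Cstar_hat d \<and> scod C (F d) = scod Cstar_hat d" using e unfolding hat_cat_def by simp
  qed
  show ?thesis unfolding sitecat_iso_def
  proof (intro exI conjI ballI allI impI)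
    show "bij_betw F (smor Cstar_hat) (smor C)" by (rule bF)
    fix f assume f: "f \<in> smor Cstar_hat"
    show "sdom C (F f) = sdom Cstar_hat f" using dc f by blast
    show "scod C (F f) = scod Cstar_hat f" using dc f by blast
  next
    fix f g assume f: "f \<in> smor Cstar_hat" and g: "g \<in> smor Cstar_hat" and fg: "sdom Cstar_hat g = scod Cstar_hat f"
    have a: "F f \<in> smor C" "star_section (F f) = f" "F g \<in> smor C" "star_section (F g) = g" using SF f g by auto
    have "sdom C (F g) = scod C (F f)" using dc f g fg by simp
    then have "star_section (scmp C (F g) (F f)) = scmp Cstar_hat g f" using star_section_cmp[OF a(1,3)] a by simp
    then show "F (scmp Cstar_hat g f) = scmp C (F g) (F f)" using FS cmp_hom a \<open>sdom C (F g) = scod C (F f)\<close> by metis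
  next
    fix U assume U: "openin X U"
    show "F (sidn Cstar_hat U) = sidn C U" using star_section_idn[OF U] FS idn_hom[OF U] by metis
  next
    fix U V assume UV: "openin X U \<and> openin X V \<and> U \<subseteq> V"
    show "F (sinc Cstar_hat U V) = sinc C U V" using star_section_inc FS inc_hom UV by metis
  qed
qed

end

section \<open>The pseudogroup sheaf of an etale groupoid\<close>

locale etale_groupoid_over =
  fixes X :: "'a topology" and G :: "'g topology" and s t :: "'g \<Rightarrow> 'a" and i :: "'a \<Rightarrow> 'g"
    and iv :: "'g \<Rightarrow> 'g" and mc :: "'g \<Rightarrow> 'g \<Rightarrow> 'g"
  assumes etale: "etale_groupoid X G s t i iv mc"
begin

lemma etale_clauses:
  "\<forall>x\<in>topspace X. i x \<in> topspace G \<and> s (i x) = x \<and> t (i x) = x"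
  "\<forall>f\<in>topspace G. \<forall>g\<in>topspace G. s g = t f \<longrightarrow> mc g f \<in> topspace G \<and> s (mc g f) = s f \<and> t (mc g f) = t g"
  "\<forall>f\<in>topspace G. \<forall>g\<in>topspace G. \<forall>h\<in>topspace G. s g = t f \<and> s h = t g \<longrightarrow> mc h (mc g f) = mc (mc h g) f"
  "\<forall>f\<in>topspace G. mc (i (t f)) f = f \<and> mc f (i (s f)) = f"
  "\<forall>f\<in>topspace G. iv f \<in> topspace G \<and> s (iv f) = t f \<and> t (iv f) = s f \<and>
     mc (iv f) f = i (s f) \<and> mc f (iv f) = i (t f)"
  using etale unfolding etale_groupoid_def by - (elim conjE, assumption)+

lemma unit_in: "x \<in> topspace X \<Longrightarrow> i x \<in> topspace G \<and> s (i x) = x \<and> t (i x) = x"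
  using etale_clauses(1) by blast

lemma comp_in: "f \<in> topspace G \<Longrightarrow> g \<in> topspace G \<Longrightarrow> s g = t f \<Longrightarrow>
   mc g f \<in> topspace G \<and> s (mc g f) = s f \<and> t (mc g f) = t g"
  using etale_clauses(2) by blast

lemma comp_assoc: "f \<in> topspace G \<Longrightarrow> g \<in> topspace G \<Longrightarrow> h \<in> topspace G \<Longrightarrow> s g = t f \<Longrightarrow> s h = t g \<Longrightarrow>
   mc h (mc g f) = mc (mc h g) f"
  using etale_clauses(3) by blast

lemma comp_units: "f \<in> topspace G \<Longrightarrow> mc (i (t f)) f = f \<and> mc f (i (s f)) = f"
  using etale_clauses(4) by blast

lemma inverse_props: "f \<in> topspace G \<Longrightarrow> iv f \<in> topspace G \<and> s (iv f) = t f \<and> t (iv f) = s f \<and>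
   mc (iv f) f = i (s f) \<and> mc f (iv f) = i (t f)"
  using etale_clauses(5) by blast

lemma continuous_source: "continuous_map G X s"
  and continuous_target: "continuous_map G X t"
  and continuous_unit: "continuous_map X G i"
  and continuous_comp: "continuous_map (subtopology (prod_topology G G) {(g, f). s g = t f}) G (\<lambda>(g, f). mc g f)"
  and local_homeo_source: "local_homeo G X s"
  using etale unfolding etale_groupoid_def by - (elim conjE, assumption)+

lemma source_in: "g \<in> topspace G \<Longrightarrow> s g \<in> topspace X" by (rule continuous_map_in_topspace[OF continuous_source])
lemma target_in: "g \<in> topspace G \<Longrightarrow> t g \<in> topspace X" by (rule continuous_map_in_topspace[OF continuous_target])

abbreviation Ghat where "Ghat \<equiv> hat_cat X G s t i mc"

lemma Ghat_mor_iff: "(U, V, \<sigma>) \<in> smor Ghat \<longleftrightarrow> openin X U \<and> openin X V \<and> \<sigma> \<in> extensional U \<and>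
   continuous_map (subtopology X U) (subtopology G {g \<in> topspace G. t g \<in> V}) \<sigma> \<and> (\<forall>x\<in>U. s (\<sigma> x) = x)"
  unfolding hat_cat_def by simp

lemma Ghat_simps: "sdom Ghat m = fst m" "scod Ghat m = fst (snd m)"
  "scmp Ghat n m = (fst m, fst (snd n), restrict (\<lambda>x. mc (snd (snd n) (t (snd (snd m) x))) (snd (snd m) x)) (fst m))"
  "sidn Ghat U = (U, U, restrict i U)" "sinc Ghat U V = (U, V, restrict i U)"
  unfolding hat_cat_def by simp_all

lemma Ghat_mor_props: "(U, V, \<sigma>) \<in> smor Ghat \<Longrightarrow> x \<in> U \<Longrightarrow> \<sigma> x \<in> topspace G \<and> t (\<sigma> x) \<in> V \<and> s (\<sigma> x) = x"
proof -
  assume m: "(U, V, \<sigma>) \<in> smor Ghat" and x: "x \<in> U"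
  have m': "openin X U" "continuous_map (subtopology X U) (subtopology G {g \<in> topspace G. t g \<in> V}) \<sigma>" "\<forall>x\<in>U. s (\<sigma> x) = x"
    using m Ghat_mor_iff by auto
  have "x \<in> topspace (subtopology X U)" using x m'(1) openin_subset by (auto simp: topspace_subtopology)
  then have "\<sigma> x \<in> topspace (subtopology G {g \<in> topspace G. t g \<in> V})" using continuous_map_in_topspace[OF m'(2)] by blast
  then show ?thesis using m'(3) x by (auto simp: topspace_subtopology)
qed

lemma Ghat_mor_continuous: "(U, V, \<sigma>) \<in> smor Ghat \<Longrightarrow> continuous_map (subtopology X U) G \<sigma>"
  using Ghat_mor_iff continuous_map_into_fulltopology by blast

lemma Ghat_morI:
  assumes "openin X U" "openin X V" "\<sigma> \<in> extensional U" "continuous_map (subtopology X U) G \<sigma>"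
    "\<And>x. x \<in> U \<Longrightarrow> t (\<sigma> x) \<in> V \<and> s (\<sigma> x) = x"
  shows "(U, V, \<sigma>) \<in> smor Ghat"
proof -
  have "continuous_map (subtopology X U) (subtopology G {g \<in> topspace G. t g \<in> V}) \<sigma>"
    by (rule continuous_map_into_subtopology[OF assms(4)]) (use assms continuous_map_in_topspace[OF assms(4)] topspace_subtopology_open in auto)
  then show ?thesis unfolding Ghat_mor_iff using assms by auto
qed

lemma Ghat_cmp_mor:
  assumes m: "(U, V, \<sigma>) \<in> smor Ghat" and n: "(V, W, \<tau>) \<in> smor Ghat"
  shows "(U, W, restrict (\<lambda>x. mc (\<tau> (t (\<sigma> x))) (\<sigma> x)) U) \<in> smor Ghat"
proof (rule Ghat_morI)
  have o: "openin X U" "openin X V" "openin X W" using m n Ghat_mor_iff by auto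
  show "openin X U" "openin X W" using o by auto
  show "restrict (\<lambda>x. mc (\<tau> (t (\<sigma> x))) (\<sigma> x)) U \<in> extensional U" by simp
  have cs: "continuous_map (subtopology X U) G \<sigma>" using Ghat_mor_continuous[OF m] .
  have ct: "continuous_map (subtopology X U) (subtopology X V) (t \<circ> \<sigma>)"
    by (rule continuous_map_into_subtopology[OF continuous_map_compose[OF cs continuous_target]])
      (use Ghat_mor_props[OF m] topspace_subtopology_open[OF o(1)] in auto)
  have c1: "continuous_map (subtopology X U) G (\<tau> \<circ> (t \<circ> \<sigma>))" using continuous_map_compose[OF ct Ghat_mor_continuous[OF n]] .
  have c2: "continuous_map (subtopology X U) (prod_topology G G) (\<lambda>x. (\<tau> (t (\<sigma> x)), \<sigma> x))"
    unfolding continuous_map_pairwise using c1 cs by (simp add: o_def)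
  have c3: "continuous_map (subtopology X U) (subtopology (prod_topology G G) {(g, f). s g = t f}) (\<lambda>x. (\<tau> (t (\<sigma> x)), \<sigma> x))"
    by (rule continuous_map_into_subtopology[OF c2]) (use Ghat_mor_props[OF m] Ghat_mor_props[OF n] topspace_subtopology_open[OF o(1)] in auto)
  have c4: "continuous_map (subtopology X U) G ((\<lambda>(g, f). mc g f) \<circ> (\<lambda>x. (\<tau> (t (\<sigma> x)), \<sigma> x)))"
    using continuous_map_compose[OF c3 continuous_comp] .
  show "continuous_map (subtopology X U) G (restrict (\<lambda>x. mc (\<tau> (t (\<sigma> x))) (\<sigma> x)) U)"
    by (rule continuous_map_eq[OF c4]) (use topspace_subtopology_open[OF o(1)] in auto)
  fix x assume x: "x \<in> U"
  have a: "\<sigma> x \<in> topspace G" "t (\<sigma> x) \<in> V" "s (\<sigma> x) = x" using Ghat_mor_props[OF m x] by auto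
  have b: "\<tau> (t (\<sigma> x)) \<in> topspace G" "t (\<tau> (t (\<sigma> x))) \<in> W" "s (\<tau> (t (\<sigma> x))) = t (\<sigma> x)" using Ghat_mor_props[OF n a(2)] by auto
  show "t (restrict (\<lambda>x. mc (\<tau> (t (\<sigma> x))) (\<sigma> x)) U x) \<in> W \<and> s (restrict (\<lambda>x. mc (\<tau> (t (\<sigma> x))) (\<sigma> x)) U x) = x"
    using comp_in[OF a(1) b(1) b(3)] x a b by simp
qed

lemma Ghat_unit_mor: "openin X U \<Longrightarrow> openin X V \<Longrightarrow> U \<subseteq> V \<Longrightarrow> (U, V, restrict i U) \<in> smor Ghat"
proof (rule Ghat_morI)
  assume o: "openin X U" "openin X V" "U \<subseteq> V"
  show "openin X U" "openin X V" using o by auto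
  show "restrict i U \<in> extensional U" by simp
  show "continuous_map (subtopology X U) G (restrict i U)"
    by (rule continuous_map_eq[OF continuous_map_from_subtopology[OF continuous_unit]]) (use topspace_subtopology_open[OF o(1)] in auto)
  fix x assume x: "x \<in> U"
  then have "x \<in> topspace X" using o(1) openin_subset by blast
  then show "t (restrict i U x) \<in> V \<and> s (restrict i U x) = x" using unit_in[of x] o x by auto
qed

lemma Ghat_idl: "(U, V, \<sigma>) \<in> smor Ghat \<Longrightarrow> scmp Ghat (sidn Ghat V) (U, V, \<sigma>) = (U, V, \<sigma>)"
proof -
  assume m: "(U, V, \<sigma>) \<in> smor Ghat"
  have "restrict (\<lambda>x. mc (restrict i V (t (\<sigma> x))) (\<sigma> x)) U = \<sigma>"
  proof (rule restrict_eqI)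
    show "\<sigma> \<in> extensional U" using m Ghat_mor_iff by blast
    fix x assume x: "x \<in> U"
    then show "mc (restrict i V (t (\<sigma> x))) (\<sigma> x) = \<sigma> x" using Ghat_mor_props[OF m x] comp_units by simp
  qed
  then show ?thesis by (simp add: Ghat_simps)
qed

lemma Ghat_idr: "(U, V, \<sigma>) \<in> smor Ghat \<Longrightarrow> scmp Ghat (U, V, \<sigma>) (sidn Ghat U) = (U, V, \<sigma>)"
proof -
  assume m: "(U, V, \<sigma>) \<in> smor Ghat"
  have oU: "openin X U" using m Ghat_mor_iff by blast
  have "restrict (\<lambda>x. mc (\<sigma> (t (restrict i U x))) (restrict i U x)) U = \<sigma>"
  proof (rule restrict_eqI)
    show "\<sigma> \<in> extensional U" using m Ghat_mor_iff by blast
    fix x assume x: "x \<in> U"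
    then have xX: "x \<in> topspace X" using oU openin_subset by blast
    have "mc (\<sigma> x) (i (s (\<sigma> x))) = \<sigma> x" using comp_units Ghat_mor_props[OF m x] by blast
    then show "mc (\<sigma> (t (restrict i U x))) (restrict i U x) = \<sigma> x" using x unit_in[OF xX] Ghat_mor_props[OF m x] by simp
  qed
  then show ?thesis by (simp add: Ghat_simps)
qed

lemma Ghat_assoc: "(U, V, \<sigma>) \<in> smor Ghat \<Longrightarrow> (V, W, \<tau>) \<in> smor Ghat \<Longrightarrow> (W, Z, \<rho>) \<in> smor Ghat \<Longrightarrow>
   scmp Ghat (W, Z, \<rho>) (scmp Ghat (V, W, \<tau>) (U, V, \<sigma>)) = scmp Ghat (scmp Ghat (W, Z, \<rho>) (V, W, \<tau>)) (U, V, \<sigma>)"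
proof -
  assume m1: "(U, V, \<sigma>) \<in> smor Ghat" and m2: "(V, W, \<tau>) \<in> smor Ghat" and m3: "(W, Z, \<rho>) \<in> smor Ghat"
  have "restrict (\<lambda>x. mc (\<rho> (t (restrict (\<lambda>x. mc (\<tau> (t (\<sigma> x))) (\<sigma> x)) U x)))
            (restrict (\<lambda>x. mc (\<tau> (t (\<sigma> x))) (\<sigma> x)) U x)) U =
        restrict (\<lambda>x. mc (restrict (\<lambda>x. mc (\<rho> (t (\<tau> x))) (\<tau> x)) V (t (\<sigma> x))) (\<sigma> x)) U"
  proof (rule restrict_ext)
    fix x assume x: "x \<in> U"
    have a: "\<sigma> x \<in> topspace G" "t (\<sigma> x) \<in> V" "s (\<sigma> x) = x" using Ghat_mor_props[OF m1 x] by auto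
    have b: "\<tau> (t (\<sigma> x)) \<in> topspace G" "t (\<tau> (t (\<sigma> x))) \<in> W" "s (\<tau> (t (\<sigma> x))) = t (\<sigma> x)" using Ghat_mor_props[OF m2 a(2)] by auto
    have c: "\<rho> (t (\<tau> (t (\<sigma> x)))) \<in> topspace G" "s (\<rho> (t (\<tau> (t (\<sigma> x))))) = t (\<tau> (t (\<sigma> x)))" using Ghat_mor_props[OF m3 b(2)] by auto
    have tm: "t (mc (\<tau> (t (\<sigma> x))) (\<sigma> x)) = t (\<tau> (t (\<sigma> x)))" using comp_in[OF a(1) b(1) b(3)] by simp
    show "mc (\<rho> (t (restrict (\<lambda>x. mc (\<tau> (t (\<sigma> x))) (\<sigma> x)) U x))) (restrict (\<lambda>x. mc (\<tau> (t (\<sigma> x))) (\<sigma> x)) U x) =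
      mc (restrict (\<lambda>x. mc (\<rho> (t (\<tau> x))) (\<tau> x)) V (t (\<sigma> x))) (\<sigma> x)"
      using x a(2) tm comp_assoc[OF a(1) b(1) c(1) b(3) c(2)] by simp
  qed
  then show ?thesis by (simp only: Ghat_simps(3) fst_conv snd_conv)
qed

lemma sitecat_Ghat: "is_sitecat X Ghat"
  unfolding is_sitecat_def shom_def
proof (intro conjI allI impI ballI)
  fix f assume f: "f \<in> smor Ghat"
  obtain U V \<sigma> where e: "f = (U, V, \<sigma>)" using prod_cases3 by blast
  show "openin X (sdom Ghat f)" "openin X (scod Ghat f)" using f e Ghat_mor_iff by (auto simp: Ghat_simps)
next
  fix U assume U: "openin X U"
  show "sidn Ghat U \<in> {f \<in> smor Ghat. sdom Ghat f = U \<and> scod Ghat f = U}"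
    using Ghat_unit_mor[OF U U] by (simp add: Ghat_simps)
next
  fix U V W f g assume a: "f \<in> {f \<in> smor Ghat. sdom Ghat f = U \<and> scod Ghat f = V} \<and> g \<in> {f \<in> smor Ghat. sdom Ghat f = V \<and> scod Ghat f = W}"
  obtain U1 V1 \<sigma> where e1: "f = (U1, V1, \<sigma>)" using prod_cases3 by blast
  obtain V2 W2 \<tau> where e2: "g = (V2, W2, \<tau>)" using prod_cases3 by blast
  have e: "f = (U, V, \<sigma>)" "g = (V, W, \<tau>)" "(U, V, \<sigma>) \<in> smor Ghat" "(V, W, \<tau>) \<in> smor Ghat"
    using a e1 e2 by (auto simp: Ghat_simps)
  show "scmp Ghat g f \<in> {f \<in> smor Ghat. sdom Ghat f = U \<and> scod Ghat f = W}"
    using Ghat_cmp_mor[OF e(3,4)] e by (simp add: Ghat_simps)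
next
  fix f assume f: "f \<in> smor Ghat"
  obtain U V \<sigma> where e0: "f = (U, V, \<sigma>)" using prod_cases3 by blast
  have e: "f = (U, V, \<sigma>)" "(U, V, \<sigma>) \<in> smor Ghat" using e0 f by auto
  show "scmp Ghat (sidn Ghat (scod Ghat f)) f = f" using Ghat_idl[OF e(2)] e by (simp add: Ghat_simps(2))
  show "scmp Ghat f (sidn Ghat (sdom Ghat f)) = f" using Ghat_idr[OF e(2)] e by (simp add: Ghat_simps(1))
next
  fix U V W Z f g h assume a: "f \<in> {f \<in> smor Ghat. sdom Ghat f = U \<and> scod Ghat f = V} \<and> g \<in> {f \<in> smor Ghat. sdom Ghat f = V \<and> scod Ghat f = W} \<and>
       h \<in> {f \<in> smor Ghat. sdom Ghat f = W \<and> scod Ghat f = Z}"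
  obtain U1 V1 \<sigma> where e1: "f = (U1, V1, \<sigma>)" using prod_cases3 by blast
  obtain V2 W2 \<tau> where e2: "g = (V2, W2, \<tau>)" using prod_cases3 by blast
  obtain W3 Z3 \<rho> where e3: "h = (W3, Z3, \<rho>)" using prod_cases3 by blast
  have e: "f = (U, V, \<sigma>)" "g = (V, W, \<tau>)" "h = (W, Z, \<rho>)" "(U, V, \<sigma>) \<in> smor Ghat" "(V, W, \<tau>) \<in> smor Ghat"
    "(W, Z, \<rho>) \<in> smor Ghat"
    using a e1 e2 e3 by (auto simp: Ghat_simps)
  show "scmp Ghat h (scmp Ghat g f) = scmp Ghat (scmp Ghat h g) f" using Ghat_assoc[OF e(4,5,6)] e by simp
next
  fix U V assume a: "openin X U \<and> openin X V \<and> U \<subseteq> V"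
  show "sinc Ghat U V \<in> {f \<in> smor Ghat. sdom Ghat f = U \<and> scod Ghat f = V}"
    using Ghat_unit_mor a by (simp add: Ghat_simps)
next
  fix U assume "openin X U"
  show "sinc Ghat U U = sidn Ghat U" by (simp add: Ghat_simps)
next
  fix U V W assume a: "openin X U \<and> openin X V \<and> openin X W \<and> U \<subseteq> V \<and> V \<subseteq> W"
  have "restrict (\<lambda>x. mc (restrict i V (t (restrict i U x))) (restrict i U x)) U = restrict i U"
  proof (rule restrict_ext)
    fix x assume x: "x \<in> U"
    then have xX: "x \<in> topspace X" using a openin_subset by blast
    have "mc (i (t (i x))) (i x) = i x" using comp_units unit_in[OF xX] by blast
    then show "mc (restrict i V (t (restrict i U x))) (restrict i U x) = i x" using x a unit_in[OF xX] by auto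
  qed
  then show "scmp Ghat (sinc Ghat V W) (sinc Ghat U V) = sinc Ghat U W" by (simp add: Ghat_simps)
qed

lemma Ghat_cmp_sinc: "(U, V, \<sigma>) \<in> smor Ghat \<Longrightarrow> openin X W \<Longrightarrow> W \<subseteq> U \<Longrightarrow>
   scmp Ghat (U, V, \<sigma>) (sinc Ghat W U) = (W, V, restrict \<sigma> W)"
proof -
  assume m: "(U, V, \<sigma>) \<in> smor Ghat" and W: "openin X W" "W \<subseteq> U"
  have "restrict (\<lambda>x. mc (\<sigma> (t (restrict i W x))) (restrict i W x)) W = restrict \<sigma> W"
  proof (rule restrict_ext)
    fix x assume x: "x \<in> W"
    then have xX: "x \<in> topspace X" using W openin_subset by blast
    have "mc (\<sigma> x) (i (s (\<sigma> x))) = \<sigma> x" using comp_units Ghat_mor_props[OF m] x W by blast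
    then show "mc (\<sigma> (t (restrict i W x))) (restrict i W x) = \<sigma> x" using x unit_in[OF xX] Ghat_mor_props[OF m] W by auto
  qed
  then show ?thesis by (simp add: Ghat_simps)
qed

lemma Ghat_cmp_sinc_eq_iff:
  assumes m: "(U, V, \<tau>) \<in> smor Ghat" and n: "(A, V, \<rho>) \<in> smor Ghat" and A: "openin X A" "A \<subseteq> U"
  shows "scmp Ghat (U, V, \<tau>) (sinc Ghat A U) = (A, V, \<rho>) \<longleftrightarrow> (\<forall>x\<in>A. \<tau> x = \<rho> x)"
proof -
  have "\<rho> \<in> extensional A" using n Ghat_mor_iff by blast
  then have "restrict \<tau> A = \<rho> \<longleftrightarrow> (\<forall>x\<in>A. \<tau> x = \<rho> x)" by (auto intro: restrict_eqI)
  then show ?thesis using Ghat_cmp_sinc[OF m A] by simp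
qed

lemma Ghat_mor_glue:
  assumes U: "openin X U" "openin X V" and cov: "\<Union>\<U> = U" and oA: "\<And>A. A \<in> \<U> \<Longrightarrow> openin X A"
    and mor: "\<And>A. A \<in> \<U> \<Longrightarrow> (A, V, \<sigma>s A) \<in> smor Ghat"
    and \<sigma>: "\<sigma> \<in> extensional U" "\<And>A x. A \<in> \<U> \<Longrightarrow> x \<in> A \<Longrightarrow> \<sigma> x = \<sigma>s A x"
  shows "(U, V, \<sigma>) \<in> smor Ghat"
proof (rule Ghat_morI[OF U \<sigma>(1)])
  show "continuous_map (subtopology X U) G \<sigma>"
  proof (rule pasting_lemma[where I = \<U> and T = id and f = \<sigma>s])
    fix A assume A: "A \<in> \<U>"
    then have AU: "A \<subseteq> U" using cov by blast
    show "openin (subtopology X U) (id A)" using oA[OF A] AU openin_open_subtopology[OF U(1)] by simp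
    show "continuous_map (subtopology (subtopology X U) (id A)) G (\<sigma>s A)"
      using Ghat_mor_continuous[OF mor[OF A]] AU by (simp add: subtopology_subtopology Int_absorb1)
  next
    fix A B x assume "A \<in> \<U>" "B \<in> \<U>" "x \<in> topspace (subtopology X U) \<inter> id A \<inter> id B"
    then show "\<sigma>s A x = \<sigma>s B x" using \<sigma>(2) by (metis IntD1 IntD2 id_apply)
  next
    fix x assume "x \<in> topspace (subtopology X U)"
    then show "\<exists>A. A \<in> \<U> \<and> x \<in> id A \<and> \<sigma> x = \<sigma>s A x"
      using cov \<sigma>(2) topspace_subtopology_open[OF U(1)] by auto
  qed
  fix x assume "x \<in> U"
  then obtain A where "A \<in> \<U>" "x \<in> A" using cov by auto
  then show "t (\<sigma> x) \<in> V \<and> s (\<sigma> x) = x" using \<sigma>(2) Ghat_mor_props mor by metis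
qed

lemma sheaf_cond_Ghat: "sheaf_cond X Ghat"
  unfolding sheaf_cond_def
proof (intro allI impI)
  fix V U \<U> F assume a: "openin X V \<and> openin X U \<and> (\<forall>A\<in>\<U>. openin X A) \<and> \<Union>\<U> = U \<and>
        (\<forall>A\<in>\<U>. F A \<in> shom Ghat A V) \<and>
        (\<forall>A\<in>\<U>. \<forall>B\<in>\<U>. scmp Ghat (F A) (sinc Ghat (A \<inter> B) A) = scmp Ghat (F B) (sinc Ghat (A \<inter> B) B))"
  have oV: "openin X V" and oU: "openin X U" and oA: "\<And>A. A \<in> \<U> \<Longrightarrow> openin X A" and cov: "\<Union>\<U> = U"
    using a by auto
  define sg where "sg A = snd (snd (F A))" for A
  have FA: "\<And>A. A \<in> \<U> \<Longrightarrow> F A = (A, V, sg A) \<and> (A, V, sg A) \<in> smor Ghat"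
  proof -
    fix A assume A: "A \<in> \<U>"
    then have "F A \<in> smor Ghat" "sdom Ghat (F A) = A" "scod Ghat (F A) = V" using a unfolding shom_def by auto
    then show "F A = (A, V, sg A) \<and> (A, V, sg A) \<in> smor Ghat" unfolding sg_def Ghat_simps by (cases "F A") auto
  qed
  have agree: "\<And>A B x. A \<in> \<U> \<Longrightarrow> B \<in> \<U> \<Longrightarrow> x \<in> A \<Longrightarrow> x \<in> B \<Longrightarrow> sg A x = sg B x"
  proof -
    fix A B x assume A: "A \<in> \<U>" and B: "B \<in> \<U>" and x: "x \<in> A" "x \<in> B"
    have AB: "openin X (A \<inter> B)" using oA A B by blast
    have "scmp Ghat (F A) (sinc Ghat (A \<inter> B) A) = scmp Ghat (F B) (sinc Ghat (A \<inter> B) B)" using a A B by blast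
    then have "(A \<inter> B, V, restrict (sg A) (A \<inter> B)) = (A \<inter> B, V, restrict (sg B) (A \<inter> B))"
      using Ghat_cmp_sinc[of A V "sg A" "A \<inter> B"] Ghat_cmp_sinc[of B V "sg B" "A \<inter> B"] FA[OF A] FA[OF B] AB by auto
    then have "restrict (sg A) (A \<inter> B) x = restrict (sg B) (A \<inter> B) x" by simp
    then show "sg A x = sg B x" using x by simp
  qed
  define \<sigma> where "\<sigma> = restrict (\<lambda>x. sg (SOME A. A \<in> \<U> \<and> x \<in> A) x) U"
  have \<sigma>A: "\<And>A x. A \<in> \<U> \<Longrightarrow> x \<in> A \<Longrightarrow> \<sigma> x = sg A x"
  proof -
    fix A x assume A: "A \<in> \<U>" and x: "x \<in> A"
    have "\<exists>A. A \<in> \<U> \<and> x \<in> A" using A x by blast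
    then have s1: "(SOME A. A \<in> \<U> \<and> x \<in> A) \<in> \<U> \<and> x \<in> (SOME A. A \<in> \<U> \<and> x \<in> A)" by (rule someI_ex)
    have "x \<in> U" using A x cov by blast
    then show "\<sigma> x = sg A x" unfolding \<sigma>_def using agree[OF _ A _ x] s1 by auto
  qed
  have mem: "(U, V, \<sigma>) \<in> smor Ghat"
    by (rule Ghat_mor_glue[OF oU oV cov oA]) (use FA \<sigma>A in \<open>auto simp: \<sigma>_def\<close>)
  have glue_iff: "scmp Ghat (U, V, \<tau>) (sinc Ghat A U) = F A \<longleftrightarrow> (\<forall>x\<in>A. \<tau> x = sg A x)"
    if "(U, V, \<tau>) \<in> smor Ghat" "A \<in> \<U>" for \<tau> A
    using Ghat_cmp_sinc_eq_iff[OF that(1) conjunct2[OF FA[OF that(2)]] oA[OF that(2)]] FA[OF that(2)] that(2) cov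
    by auto
  show "\<exists>!f. f \<in> shom Ghat U V \<and> (\<forall>A\<in>\<U>. scmp Ghat f (sinc Ghat A U) = F A)"
  proof (rule ex1I[of _ "(U, V, \<sigma>)"])
    show "(U, V, \<sigma>) \<in> shom Ghat U V \<and> (\<forall>A\<in>\<U>. scmp Ghat (U, V, \<sigma>) (sinc Ghat A U) = F A)"
      using mem glue_iff \<sigma>A unfolding shom_def by (simp add: Ghat_simps)
    fix f assume f: "f \<in> shom Ghat U V \<and> (\<forall>A\<in>\<U>. scmp Ghat f (sinc Ghat A U) = F A)"
    then obtain \<tau> where \<tau>: "f = (U, V, \<tau>)" "(U, V, \<tau>) \<in> smor Ghat"
      by (cases f) (auto simp: shom_def Ghat_simps)
    have "\<tau> = \<sigma>"
    proof (rule extensionalityI[of _ U])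
      show "\<tau> \<in> extensional U" "\<sigma> \<in> extensional U" using \<tau>(2) Ghat_mor_iff \<sigma>_def by auto
      fix x assume "x \<in> U"
      then obtain A where A: "A \<in> \<U>" "x \<in> A" using cov by auto
      then show "\<tau> x = \<sigma> x" using glue_iff[OF \<tau>(2) A(1)] f \<tau>(1) \<sigma>A by auto
    qed
    then show "f = (U, V, \<sigma>)" using \<tau>(1) by simp
  qed
qed
end

sublocale etale_groupoid_over \<subseteq> Ghat: site_category X "hat_cat X G s t i mc"
  by unfold_locales (rule sitecat_Ghat)

context etale_groupoid_over begin

lemma local_section:
  assumes S: "openin G S" and g: "g \<in> S"
  obtains U \<sigma> where "openin X U" "s g \<in> U" "\<sigma> \<in> extensional U" "continuous_map (subtopology X U) G \<sigma>"
    "\<And>x. x \<in> U \<Longrightarrow> s (\<sigma> x) = x \<and> \<sigma> x \<in> S" "\<sigma> (s g) = g"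
proof -
  have gG: "g \<in> topspace G" using S g openin_subset by blast
  obtain W where W: "openin G W" "g \<in> W" "openin X (s ` W)"
    "homeomorphic_map (subtopology G W) (subtopology X (s ` W)) s"
    using local_homeo_source gG unfolding local_homeo_def by blast
  obtain r where r: "homeomorphic_maps (subtopology G W) (subtopology X (s ` W)) s r"
    using W(4) homeomorphic_map_maps by blast
  have WG: "W \<subseteq> topspace G" "s ` W \<subseteq> topspace X" using W(1,3) openin_subset by blast+
  have rc: "continuous_map (subtopology X (s ` W)) G r"
    using r continuous_map_into_fulltopology unfolding homeomorphic_maps_def by blast
  have sr: "\<And>h. h \<in> W \<Longrightarrow> r (s h) = h"
    using r WG unfolding homeomorphic_maps_def by (auto simp: topspace_subtopology)
  define U where "U = s ` (W \<inter> S)"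
  have "openin (subtopology G W) (W \<inter> S)" using S by (simp add: openin_subtopology_Int2)
  then have "openin (subtopology X (s ` W)) U"
    unfolding U_def using homeomorphic_map_openness[OF W(4), of "W \<inter> S"] WG(1) by (auto simp: topspace_subtopology)
  then have U: "openin X U" using openin_trans_full W(3) by blast
  show ?thesis
  proof (rule that[of U "restrict r U"])
    show "openin X U" by (rule U)
    show "s g \<in> U" "restrict r U \<in> extensional U" using g W(2) unfolding U_def by auto
    show "continuous_map (subtopology X U) G (restrict r U)"
      by (rule continuous_map_eq[OF continuous_map_from_subtopology_mono[OF rc]])
        (use topspace_subtopology_open[OF U] in \<open>auto simp: U_def\<close>)
    show "restrict r U (s g) = g" using sr W(2) g unfolding U_def by auto
    fix x assume "x \<in> U"
    then show "s (restrict r U x) = x \<and> restrict r U x \<in> S" using sr unfolding U_def by auto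
  qed
qed

lemma sections_agree_nbhd:
  assumes m1: "(U1, V, \<sigma>1) \<in> smor Ghat" and m2: "(U2, V', \<sigma>2) \<in> smor Ghat" and x: "x \<in> U1" "x \<in> U2"
    and e: "\<sigma>1 x = \<sigma>2 x"
  shows "\<exists>N. openin X N \<and> x \<in> N \<and> N \<subseteq> U1 \<inter> U2 \<and> (\<forall>z\<in>N. \<sigma>1 z = \<sigma>2 z)"
proof -
  have g: "\<sigma>1 x \<in> topspace G" using Ghat_mor_props[OF m1 x(1)] by blast
  obtain W where W: "openin G W" "\<sigma>1 x \<in> W" "homeomorphic_map (subtopology G W) (subtopology X (s ` W)) s"
    using local_homeo_source g unfolding local_homeo_def by blast
  have inj: "inj_on s (topspace G \<inter> W)" using homeomorphic_imp_injective_map[OF W(3)] by (simp add: topspace_subtopology)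
  have o1: "openin X U1" "openin X U2" using m1 m2 Ghat_mor_iff by auto
  define N where "N = {z \<in> topspace (subtopology X U1). \<sigma>1 z \<in> W} \<inter> {z \<in> topspace (subtopology X U2). \<sigma>2 z \<in> W}"
  have N: "openin X N" unfolding N_def
    using openin_trans_full[OF openin_continuous_map_preimage[OF Ghat_mor_continuous[OF m1] W(1)] o1(1)]
      openin_trans_full[OF openin_continuous_map_preimage[OF Ghat_mor_continuous[OF m2] W(1)] o1(2)] by blast
  have xN: "x \<in> N" unfolding N_def using x e W(2) topspace_subtopology_open o1 by auto
  have NU: "N \<subseteq> U1 \<inter> U2" unfolding N_def using topspace_subtopology_open o1 by auto
  have "\<forall>z\<in>N. \<sigma>1 z = \<sigma>2 z"
  proof
    fix z assume z: "z \<in> N"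
    have a: "\<sigma>1 z \<in> topspace G \<inter> W" "\<sigma>2 z \<in> topspace G \<inter> W" "s (\<sigma>1 z) = z" "s (\<sigma>2 z) = z"
      using z Ghat_mor_props[OF m1] Ghat_mor_props[OF m2] NU unfolding N_def by auto
    then show "\<sigma>1 z = \<sigma>2 z" using inj unfolding inj_on_def by metis
  qed
  then show ?thesis using N xN NU by blast
qed

lemma Ghat_restr: "m \<in> smor Ghat \<Longrightarrow> openin X W \<Longrightarrow> W \<subseteq> fst m \<Longrightarrow>
   Ghat.restr m W = (W, fst (snd m), restrict (snd (snd m)) W)"
  unfolding Ghat.restr_def using Ghat_cmp_sinc by (cases m) (auto simp: Ghat_simps)

lemma Ghat_germ_eq_iff:
  assumes m1: "m1 \<in> smor Ghat" and m2: "m2 \<in> smor Ghat" and c: "fst (snd m1) = fst (snd m2)"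
    and x: "x \<in> fst m1" "x \<in> fst m2"
  shows "germ X Ghat x m1 = germ X Ghat x m2 \<longleftrightarrow> snd (snd m1) x = snd (snd m2) x"
proof
  obtain U1 V \<sigma>1 where e1: "m1 = (U1, V, \<sigma>1)" using prod_cases3 by blast
  obtain U2 V2 \<sigma>2 where e2: "m2 = (U2, V2, \<sigma>2)" using prod_cases3 by blast
  have VV: "V2 = V" using c e1 e2 by simp
  have xx: "x \<in> sdom Ghat m1" "x \<in> sdom Ghat m2" using x by (simp_all add: Ghat_simps)
  {
    assume "germ X Ghat x m1 = germ X Ghat x m2"
    then have "m2 \<in> germ X Ghat x m1" using Ghat.germ_eq_iff[OF m1 m2 xx] by simp
    then obtain W where W: "openin X W" "x \<in> W" "W \<subseteq> sdom Ghat m1 \<inter> sdom Ghat m2" "Ghat.restr m1 W = Ghat.restr m2 W"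
      unfolding Ghat.germ_iff by blast
    then have "restrict \<sigma>1 W = restrict \<sigma>2 W" using Ghat_restr[OF m1 W(1)] Ghat_restr[OF m2 W(1)] e1 e2
      by (auto simp: Ghat_simps)
    then have "restrict \<sigma>1 W x = restrict \<sigma>2 W x" by simp
    then show "snd (snd m1) x = snd (snd m2) x" using W(2) e1 e2 by simp
  }
  {
    assume v: "snd (snd m1) x = snd (snd m2) x"
    obtain N where N: "openin X N" "x \<in> N" "N \<subseteq> U1 \<inter> U2" "\<forall>z\<in>N. \<sigma>1 z = \<sigma>2 z"
      using sections_agree_nbhd[of U1 V \<sigma>1 U2 V2 \<sigma>2 x] m1 m2 e1 e2 x v by auto
    have "restrict \<sigma>1 N = restrict \<sigma>2 N" using N(4) by (auto intro: restrict_ext)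
    then have "Ghat.restr m1 N = Ghat.restr m2 N" using Ghat_restr[OF m1 N(1)] Ghat_restr[OF m2 N(1)] e1 e2 N(3) VV by auto
    then have "m2 \<in> germ X Ghat x m1" unfolding Ghat.germ_iff
      using m2 N e1 e2 VV x by (auto simp: Ghat_simps)
    then show "germ X Ghat x m1 = germ X Ghat x m2" using Ghat.germ_eq_iff[OF m1 m2 xx] by simp
  }
qed

definition section_through :: "'g \<Rightarrow> 'a set \<Rightarrow> 'a set \<times> 'a set \<times> ('a \<Rightarrow> 'g) \<Rightarrow> bool" where
  "section_through g V m \<longleftrightarrow> m \<in> smor Ghat \<and> fst (snd m) = V \<and> s g \<in> fst m \<and> snd (snd m) (s g) = g"

lemma section_through_ex:
  assumes g: "g \<in> topspace G" and V: "openin X V" "t g \<in> V"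
  shows "\<exists>m. section_through g V m"
proof -
  have "openin G {h \<in> topspace G. t h \<in> V}" using openin_continuous_map_preimage[OF continuous_target V(1)] .
  then obtain U \<sigma> where u: "openin X U" "s g \<in> U" "\<sigma> \<in> extensional U" "continuous_map (subtopology X U) G \<sigma>"
    "\<And>x. x \<in> U \<Longrightarrow> s (\<sigma> x) = x \<and> t (\<sigma> x) \<in> V" "\<sigma> (s g) = g"
    by (rule local_section) (use g V in auto)
  have "(U, V, \<sigma>) \<in> smor Ghat" using Ghat_morI[OF u(1) V(1) u(3,4)] u(5) by blast
  then show ?thesis unfolding section_through_def using u by auto
qed

text \<open>The choice is harmless: all local sections of s through g have the same germ at s g.\<close>
definition germ_family :: "'g \<Rightarrow> 'a set \<Rightarrow> ('a set \<times> 'a set \<times> ('a \<Rightarrow> 'g)) set" where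
  "germ_family g V = (if openin X V \<and> t g \<in> V then germ X Ghat (s g) (SOME m. section_through g V m) else {})"

lemma section_through_germ: "section_through g V m \<Longrightarrow> section_through g V m' \<Longrightarrow> germ X Ghat (s g) m = germ X Ghat (s g) m'"
  unfolding section_through_def using Ghat_germ_eq_iff by simp

lemma germ_family_eq: "g \<in> topspace G \<Longrightarrow> openin X V \<Longrightarrow> t g \<in> V \<Longrightarrow> section_through g V m \<Longrightarrow> germ_family g V = germ X Ghat (s g) m"
proof -
  assume a: "g \<in> topspace G" "openin X V" "t g \<in> V" "section_through g V m"
  have "section_through g V (SOME m. section_through g V m)" using section_through_ex[OF a(1-3)] by (rule someI_ex)
  then have "germ X Ghat (s g) (SOME m. section_through g V m) = germ X Ghat (s g) m" using a(4) by (rule section_through_germ)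
  then show ?thesis unfolding germ_family_def using a by simp
qed

lemma Ghat_germ_eq_family:
  assumes m: "(U, V, \<sigma>) \<in> smor Ghat" and x: "x \<in> U"
  shows "germ X Ghat x (U, V, \<sigma>) = germ_family (\<sigma> x) V"
proof -
  have p: "\<sigma> x \<in> topspace G" "t (\<sigma> x) \<in> V" "s (\<sigma> x) = x" using Ghat_mor_props[OF m x] by auto
  have "section_through (\<sigma> x) V (U, V, \<sigma>)" unfolding section_through_def using m x p by simp
  then show ?thesis using germ_family_eq[OF p(1) _ p(2)] m p Ghat_mor_iff by auto
qed

lemma Ghat_inc_cmp: "(U, V, \<sigma>) \<in> smor Ghat \<Longrightarrow> openin X V' \<Longrightarrow> V \<subseteq> V' \<Longrightarrow>
   scmp Ghat (sinc Ghat V V') (U, V, \<sigma>) = (U, V', \<sigma>) \<and> (U, V', \<sigma>) \<in> smor Ghat"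
proof -
  assume m: "(U, V, \<sigma>) \<in> smor Ghat" and V': "openin X V'" "V \<subseteq> V'"
  have "restrict (\<lambda>x. mc (restrict i V (t (\<sigma> x))) (\<sigma> x)) U = \<sigma>"
  proof (rule restrict_eqI)
    show "\<sigma> \<in> extensional U" using m Ghat_mor_iff by blast
    fix x assume x: "x \<in> U"
    then show "mc (restrict i V (t (\<sigma> x))) (\<sigma> x) = \<sigma> x" using Ghat_mor_props[OF m x] comp_units by simp
  qed
  moreover have "(U, V', \<sigma>) \<in> smor Ghat"
    using m V' Ghat_mor_continuous[OF m] Ghat_mor_props[OF m] by (intro Ghat_morI) (auto simp: Ghat_mor_iff)
  ultimately show ?thesis by (simp add: Ghat_simps)
qed

lemma germ_family_stalk2: "g \<in> topspace G \<Longrightarrow> germ_family g \<in> stalk2 X Ghat (s g) (t g)"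
proof (rule Ghat.stalk2_I)
  assume g: "g \<in> topspace G"
  { fix V assume V: "openin X V" "t g \<in> V"
    obtain m where m: "section_through g V m" using section_through_ex[OF g V] by blast
    have mm: "m \<in> smor Ghat" "fst (snd m) = V" "s g \<in> fst m" using m unfolding section_through_def by auto
    have "Ghat.represents (s g) (germ_family g) V m" unfolding Ghat.represents_def using germ_family_eq[OF g V m] mm by (simp add: Ghat_simps)
    then show "\<exists>f. Ghat.represents (s g) (germ_family g) V f" by blast }
  { fix V assume "\<not> (openin X V \<and> t g \<in> V)" then show "germ_family g V = {}" unfolding germ_family_def by auto }
  { fix V V' f assume V: "openin X V" "openin X V'" "t g \<in> V" "V \<subseteq> V'" and f: "Ghat.represents (s g) (germ_family g) V f"
    obtain U V0 \<sigma> where e: "f = (U, V0, \<sigma>)" using prod_cases3 by blast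
    have fm: "(U, V, \<sigma>) \<in> smor Ghat" "s g \<in> U" "germ X Ghat (s g) f = germ_family g V" using f e unfolding Ghat.represents_def by (auto simp: Ghat_simps)
    have V0: "V0 = V" using f e unfolding Ghat.represents_def by (simp add: Ghat_simps)
    obtain m where m: "section_through g V m" using section_through_ex[OF g V(1,3)] by blast
    have "germ X Ghat (s g) m = germ X Ghat (s g) f" using germ_family_eq[OF g V(1,3) m] fm by simp
    then have "snd (snd m) (s g) = \<sigma> (s g)" using Ghat_germ_eq_iff[of m f "s g"] m fm e V0 unfolding section_through_def by simp
    then have sg: "\<sigma> (s g) = g" using m unfolding section_through_def by simp
    have c: "scmp Ghat (sinc Ghat V V') f = (U, V', \<sigma>)" "(U, V', \<sigma>) \<in> smor Ghat" using Ghat_inc_cmp[OF fm(1) V(2,4)] e V0 by auto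
    have "section_through g V' (U, V', \<sigma>)" unfolding section_through_def using c fm sg by simp
    then show "germ X Ghat (s g) (scmp Ghat (sinc Ghat V V') f) = germ_family g V'" using germ_family_eq[OF g V(2)] V c by auto }
qed

end

locale t1_etale_groupoid_over = etale_groupoid_over X G s t i iv mc
  for X :: "'a topology" and G :: "'g topology" and s t i iv mc +
  assumes t1: "t1_space X"
begin

lemma stalk2_Ghat_eq_family:
  assumes x: "x \<in> topspace X" and y: "y \<in> topspace X" and \<phi>: "\<phi> \<in> stalk2 X Ghat x y"
  shows "\<exists>g\<in>topspace G. s g = x \<and> t g = y \<and> \<phi> = germ_family g"
proof -
  have oX: "openin X (topspace X)" by simp
  obtain m0 where m0: "Ghat.represents x \<phi> (topspace X) m0" using Ghat.stalk2_represents[OF \<phi> oX y] by blast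
  obtain U0 V0 \<sigma>0 where e00: "m0 = (U0, V0, \<sigma>0)" using prod_cases3 by blast
  have "V0 = topspace X" using m0 e00 unfolding Ghat.represents_def by (simp add: Ghat_simps)
  then have e0: "m0 = (U0, topspace X, \<sigma>0)" using e00 by simp
  have m0p: "(U0, topspace X, \<sigma>0) \<in> smor Ghat" "x \<in> U0" "germ X Ghat x m0 = \<phi> (topspace X)"
    using m0 e0 unfolding Ghat.represents_def by (auto simp: Ghat_simps)
  define g where "g = \<sigma>0 x"
  have g: "g \<in> topspace G" "s g = x" using Ghat_mor_props[OF m0p(1,2)] unfolding g_def by auto
  have key: "\<And>V. openin X V \<Longrightarrow> y \<in> V \<Longrightarrow> \<exists>U1 \<sigma>1. (U1, V, \<sigma>1) \<in> smor Ghat \<and> x \<in> U1 \<and> germ X Ghat x (U1, V, \<sigma>1) = \<phi> V \<and> \<sigma>1 x = g"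
  proof -
    fix V assume V: "openin X V" "y \<in> V"
    obtain m1 where m1: "Ghat.represents x \<phi> V m1" using Ghat.stalk2_represents[OF \<phi> V] by blast
    obtain U1 V1 \<sigma>1 where e1: "m1 = (U1, V1, \<sigma>1)" using prod_cases3 by blast
    have m1p: "(U1, V, \<sigma>1) \<in> smor Ghat" "x \<in> U1" "germ X Ghat x (U1, V, \<sigma>1) = \<phi> V"
      using m1 e1 unfolding Ghat.represents_def by (auto simp: Ghat_simps)
    have VX: "V \<subseteq> topspace X" using V openin_subset by blast
    have V1: "V1 = V" using m1 e1 unfolding Ghat.represents_def by (simp add: Ghat_simps)
    have c: "germ X Ghat x (scmp Ghat (sinc Ghat V (topspace X)) (U1, V, \<sigma>1)) = \<phi> (topspace X)"
      using Ghat.stalk2_compat[OF \<phi> V(1) oX V(2) VX m1] e1 V1 by simp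
    have ic: "scmp Ghat (sinc Ghat V (topspace X)) (U1, V, \<sigma>1) = (U1, topspace X, \<sigma>1)" "(U1, topspace X, \<sigma>1) \<in> smor Ghat"
      using Ghat_inc_cmp[OF m1p(1) oX VX] by auto
    have "germ X Ghat x (U1, topspace X, \<sigma>1) = germ X Ghat x m0" using c ic m0p by simp
    then have "\<sigma>1 x = \<sigma>0 x" using Ghat_germ_eq_iff[of "(U1, topspace X, \<sigma>1)" m0 x] ic m0p e0 m1p by simp
    then show "\<exists>U1 \<sigma>1. (U1, V, \<sigma>1) \<in> smor Ghat \<and> x \<in> U1 \<and> germ X Ghat x (U1, V, \<sigma>1) = \<phi> V \<and> \<sigma>1 x = g"
      using m1p unfolding g_def by blast
  qed
  have tg: "t g = y"
  proof (rule ccontr)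
    assume ne: "t g \<noteq> y"
    have "t g \<in> topspace X" using target_in g by blast
    then obtain V where V: "openin X V" "y \<in> V" "t g \<notin> V" using t1 y ne unfolding t1_space_def by metis
    obtain U1 \<sigma>1 where k: "(U1, V, \<sigma>1) \<in> smor Ghat" "x \<in> U1" "\<sigma>1 x = g" using key[OF V(1,2)] by blast
    show False using Ghat_mor_props[OF k(1,2)] k(3) V(3) by simp
  qed
  have "\<phi> = germ_family g"
  proof (rule Ghat.stalk2_eqI[OF \<phi>])
    show "germ_family g \<in> stalk2 X Ghat x y" using germ_family_stalk2[OF g(1)] g tg by simp
    fix V assume V: "openin X V" "y \<in> V"
    obtain U1 \<sigma>1 where k: "(U1, V, \<sigma>1) \<in> smor Ghat" "x \<in> U1" "germ X Ghat x (U1, V, \<sigma>1) = \<phi> V" "\<sigma>1 x = g"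
      using key[OF V] by blast
    show "\<phi> V = germ_family g V" using Ghat_germ_eq_family[OF k(1,2)] k by simp
  qed
  then show ?thesis using g tg by blast
qed

lemma germ_family_inj: "g \<in> topspace G \<Longrightarrow> g' \<in> topspace G \<Longrightarrow> s g = s g' \<Longrightarrow> openin X V \<Longrightarrow> t g \<in> V \<Longrightarrow> t g' \<in> V \<Longrightarrow>
   germ_family g V = germ_family g' V \<Longrightarrow> g = g'"
proof -
  assume a: "g \<in> topspace G" "g' \<in> topspace G" "s g = s g'" "openin X V" "t g \<in> V" "t g' \<in> V" "germ_family g V = germ_family g' V"
  obtain m where m: "section_through g V m" using section_through_ex a by blast
  obtain m' where m': "section_through g' V m'" using section_through_ex a by blast
  have "germ X Ghat (s g) m = germ X Ghat (s g) m'" using germ_family_eq[OF a(1,4,5) m] germ_family_eq[OF a(2,4,6) m'] a by simp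
  then show "g = g'" using Ghat_germ_eq_iff[of m m' "s g"] m m' a(3) unfolding section_through_def by simp
qed

lemma star_idfam_germ_family: "x \<in> topspace X \<Longrightarrow> star_idfam X Ghat x = germ_family (i x)"
proof
  fix V assume x: "x \<in> topspace X"
  have ix: "i x \<in> topspace G" "s (i x) = x" "t (i x) = x" using unit_in[OF x] by auto
  show "star_idfam X Ghat x V = germ_family (i x) V"
  proof (cases "openin X V \<and> x \<in> V")
    case True
    have "section_through (i x) V (sidn Ghat V)" unfolding section_through_def using Ghat_unit_mor[of V V] True ix by (simp add: Ghat_simps)
    then show ?thesis unfolding star_idfam_def using True germ_family_eq[OF ix(1)] ix by simp
  next
    case False then show ?thesis unfolding star_idfam_def germ_family_def using ix by auto
  qed
qed

lemma star_cmp_fam_germ_family: "g \<in> topspace G \<Longrightarrow> h \<in> topspace G \<Longrightarrow> s h = t g \<Longrightarrow>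
   star_cmp_fam X Ghat (s g) (t g) (t h) (germ_family h) (germ_family g) = germ_family (mc h g)"
proof -
  assume g: "g \<in> topspace G" and h: "h \<in> topspace G" and st: "s h = t g"
  have hg: "mc h g \<in> topspace G" "s (mc h g) = s g" "t (mc h g) = t h" using comp_in[OF g h st] by auto
  have sh: "germ_family h \<in> stalk2 X Ghat (t g) (t h)" using germ_family_stalk2[OF h] st by simp
  have sg: "germ_family g \<in> stalk2 X Ghat (s g) (t g)" using germ_family_stalk2[OF g] .
  show ?thesis
  proof (rule Ghat.stalk2_eqI)
    show "star_cmp_fam X Ghat (s g) (t g) (t h) (germ_family h) (germ_family g) \<in> stalk2 X Ghat (s g) (t h)" using Ghat.star_cmp_fam_stalk2[OF sh sg] .
    show "germ_family (mc h g) \<in> stalk2 X Ghat (s g) (t h)" using germ_family_stalk2[OF hg(1)] hg by simp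
    fix W assume W: "openin X W" "t h \<in> W"
    obtain mh where mh: "section_through h W mh" using section_through_ex[OF h W] by blast
    obtain Uh Vh \<sigma>h where mh_eq0: "mh = (Uh, Vh, \<sigma>h)" using prod_cases3 by blast
    have "Vh = W" using mh mh_eq0 unfolding section_through_def by simp
    then have mh_eq: "mh = (Uh, W, \<sigma>h)" using mh_eq0 by simp
    have mhp: "(Uh, W, \<sigma>h) \<in> smor Ghat" "s h \<in> Uh" "\<sigma>h (s h) = h" using mh mh_eq unfolding section_through_def by auto
    have oUh: "openin X Uh" using mhp Ghat_mor_iff by blast
    obtain mg where mg: "section_through g Uh mg" using section_through_ex[OF g oUh] mhp st by auto
    obtain Ug Vg \<sigma>g where mg_eq0: "mg = (Ug, Vg, \<sigma>g)" using prod_cases3 by blast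
    have "Vg = Uh" using mg mg_eq0 unfolding section_through_def by simp
    then have mg_eq: "mg = (Ug, Uh, \<sigma>g)" using mg_eq0 by simp
    have mgp: "(Ug, Uh, \<sigma>g) \<in> smor Ghat" "s g \<in> Ug" "\<sigma>g (s g) = g" using mg mg_eq unfolding section_through_def by auto
    have w: "Ghat.composable_reps (s g) (t g) (germ_family h) (germ_family g) W mh mg"
      unfolding Ghat.composable_reps_def Ghat.represents_def using mhp mgp mh_eq mg_eq germ_family_eq[OF h W mh] germ_family_eq[OF g oUh _ mg] st
      by (simp add: Ghat_simps)
    have "star_cmp_fam X Ghat (s g) (t g) (t h) (germ_family h) (germ_family g) W = germ X Ghat (s g) (scmp Ghat mh mg)"
      using Ghat.star_cmp_fam_eq[OF sh sg W w] .
    also have "\<dots> = germ_family (snd (snd (scmp Ghat mh mg)) (s g)) (fst (snd (scmp Ghat mh mg)))"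
      using Ghat_germ_eq_family[OF Ghat_cmp_mor[OF mgp(1) mhp(1)] mgp(2)] mh_eq mg_eq by (simp add: Ghat_simps)
    also have "\<dots> = germ_family (mc h g) W" using mh_eq mg_eq mgp mhp st by (simp add: Ghat_simps)
    finally show "star_cmp_fam X Ghat (s g) (t g) (t h) (germ_family h) (germ_family g) W = germ_family (mc h g) W" .
  qed
qed

lemma stalk_bij_Ghat:
  assumes V: "openin X V" and x: "x \<in> topspace X"
  shows "bij_betw (\<lambda>(y, \<phi>). \<phi> V) (SIGMA y:V. stalk2 X Ghat x y) (stalk X Ghat x V)"
  unfolding bij_betw_def
proof (intro conjI)
  have VX: "V \<subseteq> topspace X" using V openin_subset by blast
  show "inj_on (\<lambda>(y, \<phi>). \<phi> V) (SIGMA y:V. stalk2 X Ghat x y)"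
  proof (rule inj_onI, clarify)
    fix y \<phi> y' \<phi>' assume y: "y \<in> V" "\<phi> \<in> stalk2 X Ghat x y" and y': "y' \<in> V" "\<phi>' \<in> stalk2 X Ghat x y'"
      and e: "\<phi> V = \<phi>' V"
    obtain g where g: "g \<in> topspace G" "s g = x" "t g = y" "\<phi> = germ_family g"
      using stalk2_Ghat_eq_family[OF x _ y(2)] VX y(1) by blast
    obtain g' where g': "g' \<in> topspace G" "s g' = x" "t g' = y'" "\<phi>' = germ_family g'"
      using stalk2_Ghat_eq_family[OF x _ y'(2)] VX y'(1) by blast
    have "g = g'" using germ_family_inj[OF g(1) g'(1) _ V] g g' e y y' by auto
    then show "y = y' \<and> \<phi> = \<phi>'" using g g' by simp
  qed
  show "(\<lambda>(y, \<phi>). \<phi> V) ` (SIGMA y:V. stalk2 X Ghat x y) = stalk X Ghat x V"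
  proof
    show "(\<lambda>(y, \<phi>). \<phi> V) ` (SIGMA y:V. stalk2 X Ghat x y) \<subseteq> stalk X Ghat x V"
      using V unfolding stalk2_def by auto
    show "stalk X Ghat x V \<subseteq> (\<lambda>(y, \<phi>). \<phi> V) ` (SIGMA y:V. stalk2 X Ghat x y)"
    proof
      fix \<gamma> assume "\<gamma> \<in> stalk X Ghat x V"
      then obtain U \<sigma> where m: "(U, V, \<sigma>) \<in> smor Ghat" "x \<in> U" "\<gamma> = germ X Ghat x (U, V, \<sigma>)"
        unfolding stalk_def by (auto simp: Ghat_simps)
      have p: "\<sigma> x \<in> topspace G" "t (\<sigma> x) \<in> V" "s (\<sigma> x) = x" using Ghat_mor_props[OF m(1,2)] by auto
      have "\<gamma> = germ_family (\<sigma> x) V" using Ghat_germ_eq_family[OF m(1,2)] m(3) by simp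
      moreover have "(t (\<sigma> x), germ_family (\<sigma> x)) \<in> (SIGMA y:V. stalk2 X Ghat x y)"
        using germ_family_stalk2[OF p(1)] p by simp
      ultimately show "\<gamma> \<in> (\<lambda>(y, \<phi>). \<phi> V) ` (SIGMA y:V. stalk2 X Ghat x y)" by force
    qed
  qed
qed

lemma star_inverse_ex_Ghat:
  assumes m: "(x, y, \<phi>) \<in> star_mor X Ghat"
  shows "\<exists>\<psi>\<in>stalk2 X Ghat y x. star_cmp_fam X Ghat x y x \<psi> \<phi> = star_idfam X Ghat x \<and>
    star_cmp_fam X Ghat y x y \<phi> \<psi> = star_idfam X Ghat y"
proof -
  have s0: "x \<in> topspace X" "y \<in> topspace X" "\<phi> \<in> stalk2 X Ghat x y" using m unfolding star_mor_def by auto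
  obtain g where g: "g \<in> topspace G" "s g = x" "t g = y" "\<phi> = germ_family g"
    using stalk2_Ghat_eq_family[OF s0] by blast
  have ig: "iv g \<in> topspace G" "s (iv g) = t g" "t (iv g) = s g" "mc (iv g) g = i (s g)" "mc g (iv g) = i (t g)"
    using inverse_props[OF g(1)] by auto
  have "star_cmp_fam X Ghat x y x (germ_family (iv g)) \<phi> = star_idfam X Ghat x"
    using star_cmp_fam_germ_family[OF g(1) ig(1) ig(2)] ig g star_idfam_germ_family[OF s0(1)] by simp
  moreover have "star_cmp_fam X Ghat y x y \<phi> (germ_family (iv g)) = star_idfam X Ghat y"
    using star_cmp_fam_germ_family[OF ig(1) g(1)] ig g star_idfam_germ_family[OF s0(2)] by simp
  moreover have "germ_family (iv g) \<in> stalk2 X Ghat y x" using germ_family_stalk2[OF ig(1)] ig g by simp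
  ultimately show ?thesis by blast
qed

lemma pre_pseudogroup_Ghat: "pre_pseudogroup X Ghat"
  unfolding pre_pseudogroup_def using sitecat_Ghat stalk_bij_Ghat star_inverse_ex_Ghat
  by (auto simp: star_mor_def)

lemma pseudogroup_sheaf_Ghat: "pseudogroup_sheaf X Ghat"
  unfolding pseudogroup_sheaf_def using pre_pseudogroup_Ghat sheaf_cond_Ghat by blast

end

section \<open>An etale groupoid is the groupoid of germs of its hat\<close>

sublocale t1_etale_groupoid_over \<subseteq> Ghat: pre_pseudogroup_site X "hat_cat X G s t i mc"
  by unfold_locales (rule pre_pseudogroup_Ghat)

context t1_etale_groupoid_over begin

definition to_star :: "'g \<Rightarrow> 'a \<times> 'a \<times> ('a set \<Rightarrow> ('a set \<times> 'a set \<times> ('a \<Rightarrow> 'g)) set)" where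
  "to_star g = (s g, t g, germ_family g)"

lemma to_star_mor: "g \<in> topspace G \<Longrightarrow> to_star g \<in> star_mor X Ghat"
  unfolding to_star_def star_mor_def using source_in target_in germ_family_stalk2 by auto

lemma germ_family_top_inj: "g \<in> topspace G \<Longrightarrow> g' \<in> topspace G \<Longrightarrow> s g = s g' \<Longrightarrow> germ_family g (topspace X) = germ_family g' (topspace X) \<Longrightarrow> g = g'"
  using germ_family_inj[of g g' "topspace X"] target_in by auto

lemma inj_on_to_star: "inj_on to_star (topspace G)"
proof (rule inj_onI)
  fix g g' assume g: "g \<in> topspace G" "g' \<in> topspace G" and e: "to_star g = to_star g'"
  then show "g = g'" using germ_family_top_inj[OF g] unfolding to_star_def by simp
qed

lemma to_star_image: "to_star ` topspace G = star_mor X Ghat"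
proof
  show "to_star ` topspace G \<subseteq> star_mor X Ghat" using to_star_mor by blast
  show "star_mor X Ghat \<subseteq> to_star ` topspace G"
  proof
    fix m assume m: "m \<in> star_mor X Ghat"
    obtain x y \<phi> where e: "m = (x, y, \<phi>)" using prod_cases3 by blast
    have s0: "x \<in> topspace X" "y \<in> topspace X" "\<phi> \<in> stalk2 X Ghat x y" using m e unfolding star_mor_def by auto
    obtain g where g: "g \<in> topspace G" "s g = x" "t g = y" "\<phi> = germ_family g" using stalk2_Ghat_eq_family[OF s0] by blast
    then show "m \<in> to_star ` topspace G" using e unfolding to_star_def by force
  qed
qed

lemma to_star_in_basic_iff:
  assumes f: "(U, topspace X, \<sigma>) \<in> smor Ghat" and g: "g \<in> topspace G"
  shows "to_star g \<in> star_basic X Ghat (U, topspace X, \<sigma>) \<longleftrightarrow> s g \<in> U \<and> \<sigma> (s g) = g"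
proof
  assume "to_star g \<in> star_basic X Ghat (U, topspace X, \<sigma>)"
  then have a: "s g \<in> U" "germ_family g (topspace X) = germ X Ghat (s g) (U, topspace X, \<sigma>)"
    unfolding Ghat.star_basic_iff to_star_def by (auto simp: Ghat_simps)
  then have "germ_family g (topspace X) = germ_family (\<sigma> (s g)) (topspace X)"
    using Ghat_germ_eq_family[OF f] by simp
  moreover have "\<sigma> (s g) \<in> topspace G" "s (\<sigma> (s g)) = s g" using Ghat_mor_props[OF f a(1)] by auto
  ultimately show "s g \<in> U \<and> \<sigma> (s g) = g" using germ_family_top_inj[OF g] a(1) by metis
next
  assume a: "s g \<in> U \<and> \<sigma> (s g) = g"
  then have "germ X Ghat (s g) (U, topspace X, \<sigma>) = germ_family g (topspace X)"
    using Ghat_germ_eq_family[OF f] by simp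
  then show "to_star g \<in> star_basic X Ghat (U, topspace X, \<sigma>)"
    unfolding Ghat.star_basic_iff using to_star_mor[OF g] a by (simp add: Ghat_simps to_star_def)
qed

lemma openin_section_image:
  assumes f: "(U, V, \<sigma>) \<in> smor Ghat"
  shows "openin G {g \<in> topspace G. s g \<in> U \<and> \<sigma> (s g) = g}"
proof (subst openin_subopen, intro ballI)
  have oU: "openin X U" using f Ghat_mor_iff by blast
  fix g assume g: "g \<in> {g \<in> topspace G. s g \<in> U \<and> \<sigma> (s g) = g}"
  obtain W where W: "openin G W" "g \<in> W" "homeomorphic_map (subtopology G W) (subtopology X (s ` W)) s"
    using local_homeo_source g unfolding local_homeo_def by blast
  have inj: "inj_on s (topspace G \<inter> W)"
    using homeomorphic_imp_injective_map[OF W(3)] by (simp add: topspace_subtopology)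
  define N where "N = {h \<in> topspace G. s h \<in> {x \<in> topspace (subtopology X U). \<sigma> x \<in> W}} \<inter> W"
  have "openin X {x \<in> topspace (subtopology X U). \<sigma> x \<in> W}"
    using openin_trans_full[OF openin_continuous_map_preimage[OF Ghat_mor_continuous[OF f] W(1)] oU] .
  then have N: "openin G N" unfolding N_def using openin_continuous_map_preimage[OF continuous_source] W(1) by blast
  have "N \<subseteq> {g \<in> topspace G. s g \<in> U \<and> \<sigma> (s g) = g}"
  proof
    fix h assume "h \<in> N"
    then have a: "h \<in> topspace G" "s h \<in> U" "\<sigma> (s h) \<in> W" "h \<in> W"
      unfolding N_def using topspace_subtopology_open[OF oU] by auto
    then have "\<sigma> (s h) \<in> topspace G" "s (\<sigma> (s h)) = s h" using Ghat_mor_props[OF f] by auto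
    then show "h \<in> {g \<in> topspace G. s g \<in> U \<and> \<sigma> (s g) = g}" using inj a unfolding inj_on_def by auto
  qed
  moreover have "g \<in> N" unfolding N_def using g W(2) topspace_subtopology_open[OF oU] by auto
  ultimately show "\<exists>T. openin G T \<and> g \<in> T \<and> T \<subseteq> {g \<in> topspace G. s g \<in> U \<and> \<sigma> (s g) = g}" using N by blast
qed

lemma continuous_to_star: "continuous_map G (star_top X Ghat) to_star"
proof (rule Ghat.continuous_map_into_star_top)
  show "\<And>z. z \<in> topspace G \<Longrightarrow> to_star z \<in> star_mor X Ghat" using to_star_mor by blast
  fix f assume "f \<in> smor Ghat \<and> scod Ghat f = topspace X"
  then obtain U \<sigma> where f: "f = (U, topspace X, \<sigma>)" "(U, topspace X, \<sigma>) \<in> smor Ghat"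
    by (cases f) (auto simp: Ghat_simps)
  have "{z \<in> topspace G. to_star z \<in> star_basic X Ghat f} = {g \<in> topspace G. s g \<in> U \<and> \<sigma> (s g) = g}"
    using to_star_in_basic_iff[OF f(2)] f(1) by auto
  then show "openin G {z \<in> topspace G. to_star z \<in> star_basic X Ghat f}" using openin_section_image[OF f(2)] by simp
qed

lemma open_map_to_star: "open_map G (star_top X Ghat) to_star"
  unfolding open_map_def
proof (intro allI impI)
  fix S assume S: "openin G S"
  have SG: "S \<subseteq> topspace G" using S openin_subset by blast
  show "openin (star_top X Ghat) (to_star ` S)"
    unfolding Ghat.openin_star_top_iff
  proof (intro conjI ballI)
    show "to_star ` S \<subseteq> star_mor X Ghat" using to_star_mor SG by blast
    fix m assume "m \<in> to_star ` S"
    then obtain g where g: "g \<in> S" "m = to_star g" by blast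
    obtain U \<sigma> where u: "openin X U" "s g \<in> U" "\<sigma> \<in> extensional U" "continuous_map (subtopology X U) G \<sigma>"
      "\<And>x. x \<in> U \<Longrightarrow> s (\<sigma> x) = x \<and> \<sigma> x \<in> S" "\<sigma> (s g) = g"
      using local_section[OF S g(1)] by metis
    have f: "(U, topspace X, \<sigma>) \<in> smor Ghat"
      using Ghat_morI[OF u(1) openin_topspace u(3,4)] u(5) SG target_in by blast
    have "m \<in> star_basic X Ghat (U, topspace X, \<sigma>)"
      using to_star_in_basic_iff[OF f] g SG u by auto
    moreover have "star_basic X Ghat (U, topspace X, \<sigma>) \<subseteq> to_star ` S"
    proof
      fix m' assume m': "m' \<in> star_basic X Ghat (U, topspace X, \<sigma>)"
      then obtain g' where g': "g' \<in> topspace G" "m' = to_star g'"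
        using to_star_image Ghat.star_basic_subset by blast
      then have "g' = \<sigma> (s g')" "s g' \<in> U" using to_star_in_basic_iff[OF f] m' by auto
      then show "m' \<in> to_star ` S" using g' u(5) by (metis image_eqI)
    qed
    ultimately show "\<exists>f. (f \<in> smor Ghat \<and> scod Ghat f = topspace X) \<and> m \<in> star_basic X Ghat f \<and>
        star_basic X Ghat f \<subseteq> to_star ` S"
      using f by (auto simp: Ghat_simps)
  qed
qed

lemma homeomorphic_to_star: "homeomorphic_map G (star_top X Ghat) to_star"
  by (rule bijective_open_imp_homeomorphic_map[OF continuous_to_star open_map_to_star])
    (simp_all add: Ghat.topspace_star_top to_star_image inj_on_to_star)

theorem groupoid_iso_to_star: "groupoid_iso_over X G s t i iv mc (star_top X Ghat) star_src star_tgt (star_unit X Ghat) (star_inv X Ghat) (star_cmp X Ghat) to_star"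
  unfolding groupoid_iso_over_def
proof (intro conjI ballI impI)
  show "homeomorphic_map G (star_top X Ghat) to_star" by (rule homeomorphic_to_star)
next
  fix f assume f: "f \<in> topspace G"
  show "star_src (to_star f) = s f" unfolding to_star_def star_src_def by simp
  show "star_tgt (to_star f) = t f" unfolding to_star_def star_tgt_def by simp
  have iv: "iv f \<in> topspace G" "s (iv f) = t f" "t (iv f) = s f" "mc (iv f) f = i (s f)"
    using inverse_props[OF f] by auto
  have "star_cmp_fam X Ghat (s f) (t f) (s f) (germ_family (iv f)) (germ_family f) = star_idfam X Ghat (s f)"
    using star_cmp_fam_germ_family[OF f iv(1) iv(2)] iv star_idfam_germ_family[OF source_in[OF f]] by simp
  then have "star_inv X Ghat (s f, t f, germ_family f) = (t f, s f, germ_family (iv f))"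
    using Ghat.star_inv_eqI[of "s f" "t f" "germ_family f" "germ_family (iv f)"] to_star_mor[OF f] germ_family_stalk2[OF iv(1)] iv
    unfolding to_star_def by simp
  then show "to_star (iv f) = star_inv X Ghat (to_star f)" unfolding to_star_def using iv by simp
next
  fix x assume x: "x \<in> topspace X"
  show "to_star (i x) = star_unit X Ghat x" unfolding to_star_def star_unit_def using unit_in[OF x] star_idfam_germ_family[OF x] by simp
next
  fix f g assume f: "f \<in> topspace G" and g: "g \<in> topspace G" and st: "s g = t f"
  have c: "s (mc g f) = s f" "t (mc g f) = t g" using comp_in[OF f g st] by auto
  show "to_star (mc g f) = star_cmp X Ghat (to_star g) (to_star f)"
    unfolding to_star_def star_cmp_def using star_cmp_fam_germ_family[OF f g st] c by simp
qed

end

theorem hat_cat_of_etale_groupoid: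
  assumes "t1_space X" "etale_groupoid X G s t i iv mc"
  shows "pseudogroup_sheaf X (hat_cat X G s t i mc) \<and>
    (\<exists>\<Phi>. groupoid_iso_over X G s t i iv mc (star_top X (hat_cat X G s t i mc)) star_src star_tgt
       (star_unit X (hat_cat X G s t i mc)) (star_inv X (hat_cat X G s t i mc)) (star_cmp X (hat_cat X G s t i mc)) \<Phi>)"
proof -
  interpret t1_etale_groupoid_over X G s t i iv mc using assms by unfold_locales
  show ?thesis using pseudogroup_sheaf_Ghat groupoid_iso_to_star by blast
qed

theorem star_top_of_pseudogroup_sheaf:
  assumes "pseudogroup_sheaf X C"
  shows "etale_groupoid X (star_top X C) star_src star_tgt (star_unit X C) (star_inv X C) (star_cmp X C) \<and>
    (\<exists>F. sitecat_iso X (hat_cat X (star_top X C) star_src star_tgt (star_unit X C) (star_cmp X C)) C F)"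
proof -
  have "is_sitecat X C" "pre_pseudogroup X C" "sheaf_cond X C"
    using assms unfolding pseudogroup_sheaf_def pre_pseudogroup_def by auto
  then interpret pseudogroup_sheaf_site X C by unfold_locales
  show ?thesis using etale_groupoid_star sitecat_iso_Cstar_hat by blast
qed

theorem mainTheorem5:
  fixes X :: "'a topology"
  assumes "t1_space X"
  shows "(\<forall>(G :: 'g topology) s t i iv mc. etale_groupoid X G s t i iv mc \<longrightarrow>
            pseudogroup_sheaf X (hat_cat X G s t i mc) \<and>
            (\<exists>\<Phi>. groupoid_iso_over X G s t i iv mc
                    (star_top X (hat_cat X G s t i mc)) star_src star_tgt
                    (star_unit X (hat_cat X G s t i mc)) (star_inv X (hat_cat X G s t i mc))
                    (star_cmp X (hat_cat X G s t i mc)) \<Phi>)) \<and>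
         (\<forall>C :: ('a, 'm) sitecat. pseudogroup_sheaf X C \<longrightarrow>
            etale_groupoid X (star_top X C) star_src star_tgt (star_unit X C) (star_inv X C) (star_cmp X C) \<and>
            (\<exists>F. sitecat_iso X (hat_cat X (star_top X C) star_src star_tgt (star_unit X C) (star_cmp X C)) C F))"
  using hat_cat_of_etale_groupoid star_top_of_pseudogroup_sheaf assms by blast

end
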